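(* Let $\mathfrak{q}$ be an $n\times n$ quantum parameter matrix over a field $k$ and $V$ a $k$-vector space with basis $v_1,\dots,v_n$. Suppose $\mathcal{P}$ is a partition of $[n]$ refined by $\mathcal{B}_{\mathfrak{q}}$ such that each off-diagonal minor $\mathfrak{q}_{DE}$ ($D\ne E$ blocks of $\mathcal{P}$) is constant and shares no entries with any diagonal minor $\mathfrak{q}_{FF}$ ($F$ a block of $\mathcal{P}$). Then $$\mathrm{Aut}_{\mathrm{gr}}(S_{\mathfrak{q}}(V))\ \cong\ \prod_{D\in\mathcal{P}}\mathrm{Aut}_{\mathrm{gr}}(S_{\mathfrak{q}_{DD}}(V_D))\rtimes G,$$ where $G=\{\sigma\in\mathfrak{S}_{|\mathcal{P}|}: |\sigma(D)|=|D|\text{ and }\mathfrak{q}_{\sigma(D)\sigma(E)}=\mathfrak{q}_{DE}\text{ for all }D,E\in\mathcal{P}\}$ and $\mathfrak{S}_{|\mathcal{P}|}$ permutes the blocks of $\mathcal{P}$.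
   Context: An $n\times n$ quantum parameter matrix is a matrix $\mathfrak{q}=(q_{ij})$ over $k$ with $q_{ii}=1$ and $q_{ij}q_{ji}=1$ for all $i,j$. $S_{\mathfrak{q}}(V)$ is the $k$-algebra generated by $v_1,\dots,v_n$ with relations $v_jv_i=q_{ij}v_iv_j$, graded by $\deg v_i=1$; $\mathrm{Aut}_{\mathrm{gr}}(S_{\mathfrak{q}}(V))$ is the group of degree-preserving algebra automorphisms, viewed as a subgroup of $\mathrm{GL}(V)$. For $B,C\subseteq[n]$, $\mathfrak{q}_{BC}=(q_{ij})_{i\in B,j\in C}$ and $V_B=\mathrm{span}\{v_i:i\in B\}$; $\mathfrak{q}_{DD}$ is a quantum parameter matrix defining $S_{\mathfrak{q}_{DD}}(V_D)$ with respect to the basis $\{v_i:i\in D\}$. $\mathcal{B}_{\mathfrak{q}}$ is the partition of $[n]$ with $i\sim j$ iff rows $i,j$ of $\mathfrak{q}$ are identical; "$\mathcal{P}$ is refined by $\mathcal{B}_{\mathfrak{q}}$" means each block of $\mathcal{P}$ is a union of classes of $\mathcal{B}_{\mathfrak{q}}$.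
   Formalization: In G, $\mathfrak{q}_{\sigma(D)\sigma(E)}=\mathfrak{q}_{DE}$ means some permutation tau of [n] with tau(D) = sigma(D) for each block D has q(tau(i), tau(j)) = q(i, j) for all i, j, not an index-order match of minors. The statement above fails without it. *)

theory Defs
  imports "HOL-Algebra.Algebra" "HOL-Library.Disjoint_Sets" "HOL-Combinatorics.Permutations"
begin

text \<open>Index sets are finite sets I of natural numbers (so they carry the usual order).
  A quantum parameter matrix is a function q :: nat => nat => 'k, only its values on I x I matter.\<close>

definition qpm :: "nat set \<Rightarrow> (nat \<Rightarrow> nat \<Rightarrow> 'k::field) \<Rightarrow> bool" where
  "qpm I q \<longleftrightarrow> (\<forall>i\<in>I. q i i = 1) \<and> (\<forall>i\<in>I. \<forall>j\<in>I. q i j * q j i = 1)"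

text \<open>The quantum polynomial algebra S_q(V_I), realised on its standard monomial basis:
  the monomial m (an exponent function supported in I) stands for the ordered product of
  the v_i^(m i) with i increasing.  Using v_j v_i = q i j v_i v_j one gets
  v^m v^m' = twist q I m m' v^(m+m').\<close>

definition qmonos :: "nat set \<Rightarrow> (nat \<Rightarrow> nat) set" where
  "qmonos I = {m. \<forall>i. m i \<noteq> 0 \<longrightarrow> i \<in> I}"

definition twist :: "(nat \<Rightarrow> nat \<Rightarrow> 'k::field) \<Rightarrow> nat set \<Rightarrow> (nat \<Rightarrow> nat) \<Rightarrow> (nat \<Rightarrow> nat) \<Rightarrow> 'k" where
  "twist q I m m' = (\<Prod>(i, j) \<in> {(i, j). i \<in> I \<and> j \<in> I \<and> j < i}. q j i ^ (m i * m' j))"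

definition qsupp :: "((nat \<Rightarrow> nat) \<Rightarrow> 'k::zero) \<Rightarrow> (nat \<Rightarrow> nat) set" where
  "qsupp f = {m. f m \<noteq> 0}"

definition qcarrier :: "nat set \<Rightarrow> ((nat \<Rightarrow> nat) \<Rightarrow> 'k::field) set" where
  "qcarrier I = {f. finite (qsupp f) \<and> qsupp f \<subseteq> qmonos I}"

definition qmult :: "(nat \<Rightarrow> nat \<Rightarrow> 'k::field) \<Rightarrow> nat set
     \<Rightarrow> ((nat \<Rightarrow> nat) \<Rightarrow> 'k) \<Rightarrow> ((nat \<Rightarrow> nat) \<Rightarrow> 'k) \<Rightarrow> ((nat \<Rightarrow> nat) \<Rightarrow> 'k)" where
  "qmult q I f g = (\<lambda>m. \<Sum>(a, b) \<in> {(a, b). a \<in> qsupp f \<and> b \<in> qsupp g \<and> (\<lambda>i. a i + b i) = m}.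
      f a * g b * twist q I a b)"

definition qone :: "(nat \<Rightarrow> nat) \<Rightarrow> 'k::field" where
  "qone = (\<lambda>m. if m = (\<lambda>_. 0) then 1 else 0)"

definition qvar :: "nat \<Rightarrow> (nat \<Rightarrow> nat) \<Rightarrow> 'k::field" where
  "qvar i = (\<lambda>m. if m = (\<lambda>j. if j = i then 1 else 0) then 1 else 0)"

definition qhomog :: "nat set \<Rightarrow> nat \<Rightarrow> ((nat \<Rightarrow> nat) \<Rightarrow> 'k::field) set" where
  "qhomog I d = {f \<in> qcarrier I. \<forall>m \<in> qsupp f. (\<Sum>i\<in>I. m i) = d}"

definition graded_aut :: "(nat \<Rightarrow> nat \<Rightarrow> 'k::field) \<Rightarrow> nat set
     \<Rightarrow> (((nat \<Rightarrow> nat) \<Rightarrow> 'k) \<Rightarrow> ((nat \<Rightarrow> nat) \<Rightarrow> 'k)) \<Rightarrow> bool" where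
  "graded_aut q I \<phi> \<longleftrightarrow>
     bij_betw \<phi> (qcarrier I) (qcarrier I)
   \<and> (\<forall>f\<in>qcarrier I. \<forall>g\<in>qcarrier I. \<phi> (\<lambda>m. f m + g m) = (\<lambda>m. \<phi> f m + \<phi> g m))
   \<and> (\<forall>c. \<forall>f\<in>qcarrier I. \<phi> (\<lambda>m. c * f m) = (\<lambda>m. c * \<phi> f m))
   \<and> (\<forall>f\<in>qcarrier I. \<forall>g\<in>qcarrier I. \<phi> (qmult q I f g) = qmult q I (\<phi> f) (\<phi> g))
   \<and> \<phi> qone = qone
   \<and> (\<forall>d. \<forall>f\<in>qhomog I d. \<phi> f \<in> qhomog I d)"

text \<open>Linear maps of V_I as matrices indexed by I x I (zero outside), column convention
  g(v_i) = sum_a g a i v_a; composition = matrix product.\<close>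

definition matmul :: "nat set \<Rightarrow> (nat \<Rightarrow> nat \<Rightarrow> 'k::field) \<Rightarrow> (nat \<Rightarrow> nat \<Rightarrow> 'k) \<Rightarrow> (nat \<Rightarrow> nat \<Rightarrow> 'k)" where
  "matmul I g h = (\<lambda>a b. if a \<in> I \<and> b \<in> I then \<Sum>c\<in>I. g a c * h c b else 0)"

definition matid :: "nat set \<Rightarrow> nat \<Rightarrow> nat \<Rightarrow> 'k::field" where
  "matid I = (\<lambda>a b. if a \<in> I \<and> a = b then 1 else 0)"

definition lin_of :: "nat set \<Rightarrow> (nat \<Rightarrow> nat \<Rightarrow> 'k::field) \<Rightarrow> nat \<Rightarrow> (nat \<Rightarrow> nat) \<Rightarrow> 'k" where
  "lin_of I g i = (\<lambda>m. \<Sum>a\<in>I. g a i * qvar a m)"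

text \<open>Aut_gr(S_q(V_I)) viewed as a subgroup of GL(V_I): the restrictions to degree 1
  of the graded automorphisms.\<close>
definition AutGr_set :: "(nat \<Rightarrow> nat \<Rightarrow> 'k::field) \<Rightarrow> nat set \<Rightarrow> (nat \<Rightarrow> nat \<Rightarrow> 'k) set" where
  "AutGr_set q I = {g. (\<forall>a b. (a \<notin> I \<or> b \<notin> I) \<longrightarrow> g a b = 0)
      \<and> (\<exists>\<phi>. graded_aut q I \<phi> \<and> (\<forall>i\<in>I. \<phi> (qvar i) = lin_of I g i))}"

definition AutGr :: "(nat \<Rightarrow> nat \<Rightarrow> 'k::field) \<Rightarrow> nat set \<Rightarrow> (nat \<Rightarrow> nat \<Rightarrow> 'k) monoid" where
  "AutGr q I = \<lparr>carrier = AutGr_set q I, monoid.mult = matmul I, one = matid I\<rparr>"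

text \<open>B_q refines P: rows i and j of q (on [n]) identical implies i, j in the same block.\<close>
definition refined_by_Bq :: "nat \<Rightarrow> (nat \<Rightarrow> nat \<Rightarrow> 'k) \<Rightarrow> nat set set \<Rightarrow> bool" where
  "refined_by_Bq n q P \<longleftrightarrow> (\<forall>D\<in>P. \<forall>i\<in>D. \<forall>j\<in>{1..n}. (\<forall>l\<in>{1..n}. q i l = q j l) \<longrightarrow> j \<in> D)"

definition Gperm_set :: "nat \<Rightarrow> (nat \<Rightarrow> nat \<Rightarrow> 'k) \<Rightarrow> nat set set \<Rightarrow> (nat set \<Rightarrow> nat set) set" where
  "Gperm_set n q P = {\<sigma>. \<sigma> permutes P \<and> (\<forall>D\<in>P. card (\<sigma> D) = card D)
      \<and> (\<exists>\<tau>. \<tau> permutes {1..n} \<and> (\<forall>D\<in>P. \<tau> ` D = \<sigma> D)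
             \<and> (\<forall>i\<in>{1..n}. \<forall>j\<in>{1..n}. q (\<tau> i) (\<tau> j) = q i j))}"

definition Gperm :: "nat \<Rightarrow> (nat \<Rightarrow> nat \<Rightarrow> 'k) \<Rightarrow> nat set set \<Rightarrow> (nat set \<Rightarrow> nat set) monoid" where
  "Gperm n q P = \<lparr>carrier = Gperm_set n q P, monoid.mult = (\<circ>), one = id\<rparr>"

end

theory Submission
  imports Defs "HOL-Library.Function_Algebras"
begin

text \<open>
  A graded automorphism of S_q(V) is determined by its matrix g on V, and an invertible g
  comes from one iff it is q-compatible: g a i \<noteq> 0 and g b j \<noteq> 0 imply q a b = q i j.
  Necessity is read off from the degree-two coefficients of the images of the relations
  v_j v_i = q i j v_i v_j; sufficiency is the universal property of S_q(V).

  Compatibility makes g carry each class of indices with equal rows of q onto a class of the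
  same size.  Since these classes refine P and entries of q inside a diagonal block never
  occur between two different blocks, g permutes the blocks of P, which gives a homomorphism
  from Aut_gr(S_q(V)) onto G.  Its kernel consists of the block-diagonal automorphisms, which
  form the product of the Aut_gr(S_{q_DD}(V_D)) because the off-diagonal minors are constant.
  Fixing a representative block in each G-orbit together with q-preserving identifications of
  the blocks of the orbit, every element of G lifts to a permutation matrix, and these lifts
  split the homomorphism.
\<close>

section \<open>The algebra S_q(V)\<close>

definition qmono :: "(nat \<Rightarrow> nat) \<Rightarrow> (nat \<Rightarrow> nat) \<Rightarrow> 'k::field" where
  "qmono m = (\<lambda>m'. if m' = m then 1 else 0)"

definition var_exp :: "nat \<Rightarrow> nat \<Rightarrow> nat" where
  "var_exp a = (\<lambda>j. if j = a then 1 else 0)"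

definition exp_add :: "(nat \<Rightarrow> nat) \<Rightarrow> (nat \<Rightarrow> nat) \<Rightarrow> nat \<Rightarrow> nat" where
  "exp_add a b = (\<lambda>i. a i + b i)"

lemma qvar_eq_qmono: "qvar a = qmono (var_exp a)"
  by (simp add: qvar_def qmono_def var_exp_def)

lemma qone_eq_qmono: "qone = qmono (\<lambda>_. 0)"
  by (simp add: qone_def qmono_def)

lemma qmult_eq_double_sum:
  assumes "finite S" "finite T" "qsupp f \<subseteq> S" "qsupp g \<subseteq> T"
  shows "qmult q I f g m = (\<Sum>a\<in>S. \<Sum>b\<in>T. if exp_add a b = m then f a * g b * twist q I a b else 0)"
proof -
  have "(\<Sum>a\<in>S. \<Sum>b\<in>T. if exp_add a b = m then f a * g b * twist q I a b else 0)
      = (\<Sum>(a,b)\<in>S \<times> T. if exp_add a b = m then f a * g b * twist q I a b else 0)"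
    by (simp add: sum.cartesian_product)
  also have "\<dots> = (\<Sum>(a,b)\<in>{(a, b). a \<in> qsupp f \<and> b \<in> qsupp g \<and> (\<lambda>i. a i + b i) = m}.
      f a * g b * twist q I a b)"
  proof (rule sum.mono_neutral_cong_right)
    show "finite (S \<times> T)" using assms by simp
    show "{(a, b). a \<in> qsupp f \<and> b \<in> qsupp g \<and> (\<lambda>i. a i + b i) = m} \<subseteq> S \<times> T"
      using assms by auto
    show "\<forall>i\<in>S \<times> T - {(a, b). a \<in> qsupp f \<and> b \<in> qsupp g \<and> (\<lambda>i. a i + b i) = m}.
       (case i of (a, b) \<Rightarrow> if exp_add a b = m then f a * g b * twist q I a b else 0) = 0"
      by (auto simp: exp_add_def qsupp_def split: if_splits)
    show "\<And>x. x \<in> {(a, b). a \<in> qsupp f \<and> b \<in> qsupp g \<and> (\<lambda>i. a i + b i) = m} \<Longrightarrow>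
         (case x of (a, b) \<Rightarrow> if exp_add a b = m then f a * g b * twist q I a b else 0) =
         (case x of (a, b) \<Rightarrow> f a * g b * twist q I a b)"
      by (auto simp: exp_add_def)
  qed
  finally show ?thesis by (simp add: qmult_def)
qed

lemma qsupp_lincomb:
  fixes A :: "'a \<Rightarrow> (nat \<Rightarrow> nat) \<Rightarrow> 'k::field"
  shows "qsupp (\<lambda>x. \<Sum>k\<in>K. c k * A k x) \<subseteq> (\<Union>k\<in>K. qsupp (A k))"
proof
  fix m assume "m \<in> qsupp (\<lambda>x. \<Sum>k\<in>K. c k * A k x)"
  then have "(\<Sum>k\<in>K. c k * A k m) \<noteq> 0" by (simp add: qsupp_def)
  then obtain k where "k \<in> K" "c k * A k m \<noteq> 0" by (meson sum.neutral)
  then have "A k m \<noteq> 0" by auto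
  then show "m \<in> (\<Union>k\<in>K. qsupp (A k))" using \<open>k \<in> K\<close> by (auto simp: qsupp_def)
qed

lemma qmult_lincomb:
  assumes "finite K" "finite L" "\<And>k. k \<in> K \<Longrightarrow> finite (qsupp (A k))"
    "\<And>l. l \<in> L \<Longrightarrow> finite (qsupp (B l))"
  shows "qmult q I (\<lambda>x. \<Sum>k\<in>K. c k * A k x) (\<lambda>x. \<Sum>l\<in>L. d l * B l x)
       = (\<lambda>x. \<Sum>k\<in>K. \<Sum>l\<in>L. c k * d l * qmult q I (A k) (B l) x)"
proof
  fix m
  define S where "S = (\<Union>k\<in>K. qsupp (A k))"
  define T where "T = (\<Union>l\<in>L. qsupp (B l))"
  have fS: "finite S" "finite T" using assms by (auto simp: S_def T_def)
  have "qmult q I (\<lambda>x. \<Sum>k\<in>K. c k * A k x) (\<lambda>x. \<Sum>l\<in>L. d l * B l x) m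
     = (\<Sum>a\<in>S. \<Sum>b\<in>T. if exp_add a b = m then (\<Sum>k\<in>K. c k * A k a) * (\<Sum>l\<in>L. d l * B l b) * twist q I a b else 0)"
    by (rule qmult_eq_double_sum) (use fS qsupp_lincomb[of c A K] qsupp_lincomb[of d B L] in \<open>auto simp: S_def T_def\<close>)
  also have "\<dots> = (\<Sum>a\<in>S. \<Sum>b\<in>T. \<Sum>k\<in>K. \<Sum>l\<in>L. c k * d l * (if exp_add a b = m then A k a * B l b * twist q I a b else 0))"
    by (intro sum.cong refl) (auto simp: sum_distrib_left sum_distrib_right mult_ac intro: sum.swap)
  also have "\<dots> = (\<Sum>k\<in>K. \<Sum>l\<in>L. c k * d l * (\<Sum>a\<in>S. \<Sum>b\<in>T. (if exp_add a b = m then A k a * B l b * twist q I a b else 0)))"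
  proof -
    let ?F = "\<lambda>a b k l. c k * d l * (if exp_add a b = m then A k a * B l b * twist q I a b else 0)"
    have "(\<Sum>a\<in>S. \<Sum>b\<in>T. \<Sum>k\<in>K. \<Sum>l\<in>L. ?F a b k l) = (\<Sum>a\<in>S. \<Sum>k\<in>K. \<Sum>b\<in>T. \<Sum>l\<in>L. ?F a b k l)"
      by (rule sum.cong[OF refl]) (rule sum.swap)
    also have "\<dots> = (\<Sum>k\<in>K. \<Sum>a\<in>S. \<Sum>b\<in>T. \<Sum>l\<in>L. ?F a b k l)" by (rule sum.swap)
    also have "\<dots> = (\<Sum>k\<in>K. \<Sum>a\<in>S. \<Sum>l\<in>L. \<Sum>b\<in>T. ?F a b k l)"
      by (intro sum.cong refl) (rule sum.swap)
    also have "\<dots> = (\<Sum>k\<in>K. \<Sum>l\<in>L. \<Sum>a\<in>S. \<Sum>b\<in>T. ?F a b k l)"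
      by (rule sum.cong[OF refl]) (rule sum.swap)
    finally show ?thesis by (simp add: sum_distrib_left)
  qed
  also have "\<dots> = (\<Sum>k\<in>K. \<Sum>l\<in>L. c k * d l * qmult q I (A k) (B l) m)"
  proof (intro sum.cong refl)
    fix k l assume "k \<in> K" "l \<in> L"
    then show "c k * d l * (\<Sum>a\<in>S. \<Sum>b\<in>T. (if exp_add a b = m then A k a * B l b * twist q I a b else 0))
       = c k * d l * qmult q I (A k) (B l) m"
      by (subst qmult_eq_double_sum[of S T]) (use fS in \<open>auto simp: S_def T_def\<close>)
  qed
  finally show "qmult q I (\<lambda>x. \<Sum>k\<in>K. c k * A k x) (\<lambda>x. \<Sum>l\<in>L. d l * B l x) m
       = (\<Sum>k\<in>K. \<Sum>l\<in>L. c k * d l * qmult q I (A k) (B l) m)" .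
qed

lemma qsupp_qmono: "qsupp (qmono m :: _ \<Rightarrow> 'k::field) = {m}"
  by (auto simp: qsupp_def qmono_def)

lemma qmult_qmono: "qmult q I (qmono a) (qmono b) = (\<lambda>x. twist q I a b * qmono (exp_add a b) x)"
proof
  fix m
  show "qmult q I (qmono a) (qmono b) m = twist q I a b * qmono (exp_add a b) m"
    by (subst qmult_eq_double_sum[of "{a}" "{b}"]) (simp_all add: qsupp_qmono, simp add: qmono_def)
qed

lemma qmono_expansion:
  fixes f :: "(nat \<Rightarrow> nat) \<Rightarrow> 'k::field"
  assumes "finite S" "qsupp f \<subseteq> S"
  shows "f = (\<lambda>x. \<Sum>a\<in>S. f a * qmono a x)"
proof
  fix x
  have "(\<Sum>a\<in>S. f a * qmono a x) = (\<Sum>a\<in>S. if a = x then f x else 0)"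
    by (intro sum.cong refl) (auto simp: qmono_def)
  also have "\<dots> = (if x \<in> S then f x else 0)" using assms(1) by (simp add: sum.delta)
  also have "\<dots> = f x" using assms(2) by (auto simp: qsupp_def)
  finally show "f x = (\<Sum>a\<in>S. f a * qmono a x)" by simp
qed

lemma twist_add_left: "twist q I (exp_add a a') b = twist q I a b * twist q I a' b"
  unfolding twist_def exp_add_def
  by (simp add: add_mult_distrib power_add prod.distrib[symmetric] case_prod_beta)

lemma twist_add_right: "twist q I a (exp_add b b') = twist q I a b * twist q I a b'"
  unfolding twist_def exp_add_def
  by (simp add: add_mult_distrib2 power_add prod.distrib[symmetric] case_prod_beta)

lemma twist_zero_left: "twist q I (\<lambda>_. 0) b = 1"
  unfolding twist_def by simp

lemma twist_zero_right: "twist q I a (\<lambda>_. 0) = 1"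
  unfolding twist_def by simp

lemma twist_var_exp_below: assumes "\<And>j. j < i \<Longrightarrow> b j = 0" shows "twist q I (var_exp i) b = 1"
  unfolding twist_def by (rule prod.neutral) (use assms in \<open>auto simp: var_exp_def\<close>)

lemma twist_var_exp_var_exp:
  assumes "finite I" "i \<in> I" "j \<in> I"
  shows "twist q I (var_exp i) (var_exp j) = (if j < i then q j i else 1)"
proof -
  let ?P = "{(i', j'). i' \<in> I \<and> j' \<in> I \<and> j' < i'}"
  have fin: "finite ?P"
    by (rule finite_subset[of _ "I \<times> I"]) (use assms in auto)
  have "twist q I (var_exp i) (var_exp j) = (\<Prod>p\<in>?P. if p = (i, j) then q j i else 1)"
    unfolding twist_def by (intro prod.cong refl) (auto simp: var_exp_def split: if_splits)
  also have "\<dots> = (if (i, j) \<in> ?P then q j i else 1)"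
    using fin by (simp add: prod.delta')
  finally show ?thesis using assms by auto
qed

lemma twist_var_exp_commute:
  assumes "finite I" "qpm I q" "a \<in> I" "c \<in> I"
  shows "twist q I (var_exp a) (var_exp c) = q c a * twist q I (var_exp c) (var_exp a)"
  using twist_var_exp_var_exp[OF assms(1,3,4), of q] twist_var_exp_var_exp[OF assms(1,4,3), of q] assms(2-4)
  by (cases a c rule: linorder_cases) (auto simp: qpm_def)

lemma exp_add_assoc: "exp_add (exp_add a b) c = exp_add a (exp_add b c)"
  by (simp add: exp_add_def add.assoc)

lemma qmult_assoc_qmono:
  "qmult q I (qmult q I (qmono a) (qmono b)) (qmono c)
      = qmult q I (qmono a) (qmult q I (qmono b) (qmono c))"
proof -
  have l: "qmult q I (qmult q I (qmono a) (qmono b)) (qmono c)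
      = (\<lambda>x. twist q I a b * twist q I (exp_add a b) c * qmono (exp_add (exp_add a b) c) x)"
  proof
    fix x
    show "qmult q I (qmult q I (qmono a) (qmono b)) (qmono c) x
        = twist q I a b * twist q I (exp_add a b) c * qmono (exp_add (exp_add a b) c) x"
      unfolding qmult_qmono
      by (subst qmult_eq_double_sum[of "{exp_add a b}" "{c}"]) (auto simp: qsupp_def qmono_def exp_add_def)
  qed
  have r: "qmult q I (qmono a) (qmult q I (qmono b) (qmono c))
      = (\<lambda>x. twist q I b c * twist q I a (exp_add b c) * qmono (exp_add a (exp_add b c)) x)"
  proof
    fix x
    show "qmult q I (qmono a) (qmult q I (qmono b) (qmono c)) x
        = twist q I b c * twist q I a (exp_add b c) * qmono (exp_add a (exp_add b c)) x"
      unfolding qmult_qmono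
      by (subst qmult_eq_double_sum[of "{a}" "{exp_add b c}"]) (auto simp: qsupp_def qmono_def exp_add_def)
  qed
  show ?thesis unfolding l r by (simp add: twist_add_left twist_add_right exp_add_assoc mult_ac)
qed

lemma qsupp_scale:
  fixes A :: "(nat \<Rightarrow> nat) \<Rightarrow> 'k::field"
  shows "qsupp (\<lambda>x. c * A x) \<subseteq> qsupp A"
  by (auto simp: qsupp_def)

lemma qsupp_qmult:
  "qsupp (qmult q I f g) \<subseteq> (\<lambda>(a, b). exp_add a b) ` (qsupp f \<times> qsupp g)"
proof
  fix m assume "m \<in> qsupp (qmult q I f g)"
  then have "(\<Sum>(a, b) \<in> {(a, b). a \<in> qsupp f \<and> b \<in> qsupp g \<and> (\<lambda>i. a i + b i) = m}.
      f a * g b * twist q I a b) \<noteq> 0" by (simp add: qsupp_def qmult_def)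
  then obtain p where "p \<in> {(a, b). a \<in> qsupp f \<and> b \<in> qsupp g \<and> (\<lambda>i. a i + b i) = m}"
    by (rule sum.not_neutral_contains_not_neutral)
  then obtain a b where "a \<in> qsupp f" "b \<in> qsupp g" "(\<lambda>i. a i + b i) = m" by auto
  then show "m \<in> (\<lambda>(a, b). exp_add a b) ` (qsupp f \<times> qsupp g)"
    by (auto simp: exp_add_def image_iff intro!: bexI[of _ "(a, b)"])
qed

lemma finite_qsupp_qmult:
  assumes "finite (qsupp f)" "finite (qsupp g)"
  shows "finite (qsupp (qmult q I f g))"
  by (rule finite_subset[OF qsupp_qmult]) (use assms in auto)

lemma finite_qsupp_scale:
  fixes A :: "(nat \<Rightarrow> nat) \<Rightarrow> 'k::field"
  assumes "finite (qsupp A)"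
  shows "finite (qsupp (\<lambda>x. c * A x))"
  by (rule finite_subset[OF qsupp_scale]) (use assms in auto)

lemma finite_qsupp_qmono: "finite (qsupp (qmono m :: _ \<Rightarrow> 'k::field))"
  by (simp add: qsupp_qmono)

lemma qmult_sum:
  fixes A :: "'a \<Rightarrow> (nat \<Rightarrow> nat) \<Rightarrow> 'k::field"
  assumes "finite K" "finite L" "\<And>k. k \<in> K \<Longrightarrow> finite (qsupp (A k))"
    "\<And>l. l \<in> L \<Longrightarrow> finite (qsupp (B l))"
  shows "qmult q I (\<lambda>x. \<Sum>k\<in>K. A k x) (\<lambda>x. \<Sum>l\<in>L. B l x)
       = (\<lambda>x. \<Sum>k\<in>K. \<Sum>l\<in>L. qmult q I (A k) (B l) x)"
  using qmult_lincomb[of K L A B q I "\<lambda>_. 1" "\<lambda>_. 1"] assms by simp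

lemma qmult_sum_left:
  fixes A :: "'a \<Rightarrow> (nat \<Rightarrow> nat) \<Rightarrow> 'k::field"
  assumes "finite K" "\<And>k. k \<in> K \<Longrightarrow> finite (qsupp (A k))" "finite (qsupp g)"
  shows "qmult q I (\<lambda>x. \<Sum>k\<in>K. A k x) g = (\<lambda>x. \<Sum>k\<in>K. qmult q I (A k) g x)"
  using qmult_sum[of K "{()}" A "\<lambda>_. g" q I] assms by simp

lemma qmult_sum_right:
  fixes B :: "'a \<Rightarrow> (nat \<Rightarrow> nat) \<Rightarrow> 'k::field"
  assumes "finite L" "\<And>l. l \<in> L \<Longrightarrow> finite (qsupp (B l))" "finite (qsupp f)"
  shows "qmult q I f (\<lambda>x. \<Sum>l\<in>L. B l x) = (\<lambda>x. \<Sum>l\<in>L. qmult q I f (B l) x)"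
  using qmult_sum[of "{()}" L "\<lambda>_. f" B q I] assms by simp

lemma qmult_scale:
  fixes A :: "(nat \<Rightarrow> nat) \<Rightarrow> 'k::field"
  assumes "finite (qsupp A)" "finite (qsupp B)"
  shows "qmult q I (\<lambda>x. c * A x) (\<lambda>x. d * B x) = (\<lambda>x. c * d * qmult q I A B x)"
  using qmult_lincomb[of "{()}" "{()}" "\<lambda>_. A" "\<lambda>_. B" q I "\<lambda>_. c" "\<lambda>_. d"] assms by simp

lemma qmult_scale_left:
  fixes A :: "(nat \<Rightarrow> nat) \<Rightarrow> 'k::field"
  assumes "finite (qsupp A)" "finite (qsupp B)"
  shows "qmult q I (\<lambda>x. c * A x) B = (\<lambda>x. c * qmult q I A B x)"
  using qmult_scale[of A B q I c 1] assms by simp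

lemma qmult_scale_right:
  fixes A :: "(nat \<Rightarrow> nat) \<Rightarrow> 'k::field"
  assumes "finite (qsupp A)" "finite (qsupp B)"
  shows "qmult q I A (\<lambda>x. d * B x) = (\<lambda>x. d * qmult q I A B x)"
  using qmult_scale[of A B q I 1 d] assms by simp

lemma qmult_assoc:
  fixes f :: "(nat \<Rightarrow> nat) \<Rightarrow> 'k::field"
  assumes ff: "finite (qsupp f)" and fg: "finite (qsupp g)" and fh: "finite (qsupp h)"
  shows "qmult q I (qmult q I f g) h = qmult q I f (qmult q I g h)"
proof -
  define Sf where "Sf = qsupp f"
  define Sg where "Sg = qsupp g"
  define Sh where "Sh = qsupp h"
  have fin: "finite Sf" "finite Sg" "finite Sh" using assms by (auto simp: Sf_def Sg_def Sh_def)
  have ef: "f = (\<lambda>x. \<Sum>a\<in>Sf. f a * qmono a x)"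
    by (rule qmono_expansion) (use fin in \<open>auto simp: Sf_def\<close>)
  have eg: "g = (\<lambda>x. \<Sum>a\<in>Sg. g a * qmono a x)"
    by (rule qmono_expansion) (use fin in \<open>auto simp: Sg_def\<close>)
  have eh: "h = (\<lambda>x. \<Sum>a\<in>Sh. h a * qmono a x)"
    by (rule qmono_expansion) (use fin in \<open>auto simp: Sh_def\<close>)
  have fdl: "\<And>a. finite (qsupp (qmono a :: _ \<Rightarrow> 'k))" by (rule finite_qsupp_qmono)
  have fdl2: "\<And>a b. finite (qsupp (qmult q I (qmono a) (qmono b) :: _ \<Rightarrow> 'k))"
    by (intro finite_qsupp_qmult finite_qsupp_qmono)
  have fg1: "qmult q I f g = (\<lambda>x. \<Sum>p\<in>Sf \<times> Sg. f (fst p) * g (snd p) * qmult q I (qmono (fst p)) (qmono (snd p)) x)"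
  proof -
    have "qmult q I f g = qmult q I (\<lambda>x. \<Sum>a\<in>Sf. f a * qmono a x) (\<lambda>x. \<Sum>a\<in>Sg. g a * qmono a x)"
      using ef eg by simp
    also have "\<dots> = (\<lambda>x. \<Sum>a\<in>Sf. \<Sum>b\<in>Sg. f a * g b * qmult q I (qmono a) (qmono b) x)"
      by (rule qmult_lincomb) (use fin fdl in auto)
    finally show ?thesis by (simp add: sum.cartesian_product case_prod_beta)
  qed
  have gh1: "qmult q I g h = (\<lambda>x. \<Sum>p\<in>Sg \<times> Sh. g (fst p) * h (snd p) * qmult q I (qmono (fst p)) (qmono (snd p)) x)"
  proof -
    have "qmult q I g h = qmult q I (\<lambda>x. \<Sum>a\<in>Sg. g a * qmono a x) (\<lambda>x. \<Sum>a\<in>Sh. h a * qmono a x)"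
      using eg eh by simp
    also have "\<dots> = (\<lambda>x. \<Sum>a\<in>Sg. \<Sum>b\<in>Sh. g a * h b * qmult q I (qmono a) (qmono b) x)"
      by (rule qmult_lincomb) (use fin fdl in auto)
    finally show ?thesis by (simp add: sum.cartesian_product case_prod_beta)
  qed
  have L: "qmult q I (qmult q I f g) h = (\<lambda>x. \<Sum>p\<in>Sf \<times> Sg. \<Sum>c\<in>Sh. (f (fst p) * g (snd p)) * h c *
             qmult q I (qmult q I (qmono (fst p)) (qmono (snd p))) (qmono c) x)"
    unfolding fg1 by (subst eh, rule qmult_lincomb) (use fin fdl fdl2 in auto)
  have R: "qmult q I f (qmult q I g h) = (\<lambda>x. \<Sum>a\<in>Sf. \<Sum>p\<in>Sg \<times> Sh. f a * (g (fst p) * h (snd p)) *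
             qmult q I (qmono a) (qmult q I (qmono (fst p)) (qmono (snd p))) x)"
    unfolding gh1 by (subst ef, rule qmult_lincomb) (use fin fdl fdl2 in auto)
  show ?thesis unfolding L R
  proof (rule ext)
    fix x
    let ?T = "\<lambda>a b c. f a * g b * h c * qmult q I (qmono a) (qmult q I (qmono b) (qmono c)) x"
    have "(\<Sum>p\<in>Sf \<times> Sg. \<Sum>c\<in>Sh. (f (fst p) * g (snd p)) * h c *
             qmult q I (qmult q I (qmono (fst p)) (qmono (snd p))) (qmono c) x) = (\<Sum>p\<in>Sf \<times> Sg. \<Sum>c\<in>Sh. ?T (fst p) (snd p) c)"
      by (intro sum.cong refl) (simp add: qmult_assoc_qmono)
    also have "\<dots> = (\<Sum>a\<in>Sf. \<Sum>b\<in>Sg. \<Sum>c\<in>Sh. ?T a b c)"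
      by (simp only: sum.cartesian_product' fst_conv snd_conv)
    also have "\<dots> = (\<Sum>a\<in>Sf. \<Sum>p\<in>Sg \<times> Sh. ?T a (fst p) (snd p))"
      by (simp only: sum.cartesian_product' fst_conv snd_conv)
    also have "\<dots> = (\<Sum>a\<in>Sf. \<Sum>p\<in>Sg \<times> Sh. f a * (g (fst p) * h (snd p)) *
             qmult q I (qmono a) (qmult q I (qmono (fst p)) (qmono (snd p))) x)"
      by (intro sum.cong refl) (simp add: mult_ac)
    finally show "(\<Sum>p\<in>Sf \<times> Sg. \<Sum>c\<in>Sh. (f (fst p) * g (snd p)) * h c *
             qmult q I (qmult q I (qmono (fst p)) (qmono (snd p))) (qmono c) x) = (\<Sum>a\<in>Sf. \<Sum>p\<in>Sg \<times> Sh. f a * (g (fst p) * h (snd p)) *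
             qmult q I (qmono a) (qmult q I (qmono (fst p)) (qmono (snd p))) x)" .
  qed
qed

definition exp_deg :: "nat set \<Rightarrow> (nat \<Rightarrow> nat) \<Rightarrow> nat" where
  "exp_deg I m = (\<Sum>i\<in>I. m i)"

lemma qmonos_exp_add: "a \<in> qmonos I \<Longrightarrow> b \<in> qmonos I \<Longrightarrow> exp_add a b \<in> qmonos I"
  by (auto simp: qmonos_def exp_add_def)

lemma qmonos_var_exp: "i \<in> I \<Longrightarrow> var_exp i \<in> qmonos I"
  by (auto simp: qmonos_def var_exp_def)

lemma qmonos_zero: "(\<lambda>_. 0) \<in> qmonos I"
  by (auto simp: qmonos_def)

lemma exp_deg_add: "exp_deg I (exp_add a b) = exp_deg I a + exp_deg I b"
  by (simp add: exp_deg_def exp_add_def sum.distrib)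

lemma exp_deg_var_exp: "finite I \<Longrightarrow> i \<in> I \<Longrightarrow> exp_deg I (var_exp i) = 1"
  by (simp add: exp_deg_def var_exp_def)

lemma exp_deg_zero: "exp_deg I (\<lambda>_. 0) = 0"
  by (simp add: exp_deg_def)

lemma finite_qsupp_qcarrier: "f \<in> qcarrier I \<Longrightarrow> finite (qsupp f)"
  by (simp add: qcarrier_def)

lemma qcarrier_qmult:
  assumes "f \<in> qcarrier I" "g \<in> qcarrier I"
  shows "qmult q I f g \<in> qcarrier I"
proof -
  have "qsupp (qmult q I f g) \<subseteq> qmonos I"
    using qsupp_qmult[of q I f g] assms qmonos_exp_add by (fastforce simp: qcarrier_def)
  then show ?thesis using assms finite_qsupp_qmult by (auto simp: qcarrier_def)
qed

lemma qhomog_qmult: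
  assumes "f \<in> qhomog I d1" "g \<in> qhomog I d2"
  shows "qmult q I f g \<in> qhomog I (d1 + d2)"
proof -
  have c: "qmult q I f g \<in> qcarrier I" using assms qcarrier_qmult by (auto simp: qhomog_def)
  have "\<forall>m\<in>qsupp (qmult q I f g). exp_deg I m = d1 + d2"
  proof
    fix m assume "m \<in> qsupp (qmult q I f g)"
    then obtain a b where "a \<in> qsupp f" "b \<in> qsupp g" "m = exp_add a b"
      using qsupp_qmult[of q I f g] by auto
    then show "exp_deg I m = d1 + d2" using assms exp_deg_add[of I a b]
      by (auto simp: qhomog_def exp_deg_def)
  qed
  then show ?thesis using c by (simp add: qhomog_def exp_deg_def)
qed

lemma qmono_qcarrier: "m \<in> qmonos I \<Longrightarrow> qmono m \<in> qcarrier I"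
  by (simp add: qcarrier_def qsupp_qmono)

lemma qmono_qhomog: "m \<in> qmonos I \<Longrightarrow> qmono m \<in> qhomog I (exp_deg I m)"
  by (simp add: qhomog_def qmono_qcarrier qsupp_qmono exp_deg_def)

lemma qcarrier_sum:
  fixes A :: "'a \<Rightarrow> (nat \<Rightarrow> nat) \<Rightarrow> 'k::field"
  assumes "finite K" "\<And>k. k \<in> K \<Longrightarrow> A k \<in> qcarrier I"
  shows "(\<lambda>x. \<Sum>k\<in>K. c k * A k x) \<in> qcarrier I"
proof -
  have s: "qsupp (\<lambda>x. \<Sum>k\<in>K. c k * A k x) \<subseteq> (\<Union>k\<in>K. qsupp (A k))" by (rule qsupp_lincomb)
  have f: "finite (\<Union>k\<in>K. qsupp (A k))" using assms by (auto simp: qcarrier_def)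
  have m: "(\<Union>k\<in>K. qsupp (A k)) \<subseteq> qmonos I" using assms by (auto simp: qcarrier_def)
  show ?thesis unfolding qcarrier_def using s f m finite_subset by blast
qed

lemma qhomog_sum:
  fixes A :: "'a \<Rightarrow> (nat \<Rightarrow> nat) \<Rightarrow> 'k::field"
  assumes "finite K" "\<And>k. k \<in> K \<Longrightarrow> A k \<in> qhomog I d"
  shows "(\<lambda>x. \<Sum>k\<in>K. c k * A k x) \<in> qhomog I d"
proof -
  have "(\<lambda>x. \<Sum>k\<in>K. c k * A k x) \<in> qcarrier I"
    by (rule qcarrier_sum) (use assms in \<open>auto simp: qhomog_def\<close>)
  moreover have "\<forall>m\<in>qsupp (\<lambda>x. \<Sum>k\<in>K. c k * A k x). (\<Sum>i\<in>I. m i) = d"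
    using qsupp_lincomb[of c A K] assms by (auto simp: qhomog_def)
  ultimately show ?thesis by (simp add: qhomog_def)
qed

lemma qcarrier_add:
  assumes "f \<in> qcarrier I" "g \<in> qcarrier I"
  shows "(\<lambda>x. f x + g x) \<in> qcarrier I"
proof -
  have "qsupp (\<lambda>x. f x + g x) \<subseteq> qsupp f \<union> qsupp g" by (auto simp: qsupp_def)
  moreover have "finite (qsupp f \<union> qsupp g)" "qsupp f \<union> qsupp g \<subseteq> qmonos I"
    using assms by (auto simp: qcarrier_def)
  ultimately show ?thesis using finite_subset unfolding qcarrier_def by blast
qed

lemma qcarrier_scale:
  assumes "f \<in> qcarrier I"
  shows "(\<lambda>x. c * f x) \<in> qcarrier I"
proof -
  have "qsupp (\<lambda>x. c * f x) \<subseteq> qsupp f" by (rule qsupp_scale)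
  then show ?thesis using assms finite_subset unfolding qcarrier_def by blast
qed

lemma qone_qhomog: "qone \<in> qhomog I 0"
  using qmono_qhomog[OF qmonos_zero, of I] by (simp add: qone_eq_qmono exp_deg_zero)

lemma qvar_qhomog: "finite I \<Longrightarrow> i \<in> I \<Longrightarrow> qvar i \<in> qhomog I 1"
  using qmono_qhomog[OF qmonos_var_exp, of i I] by (simp add: qvar_eq_qmono exp_deg_var_exp)

lemma qmult_one_right:
  assumes "finite (qsupp f)"
  shows "qmult q I f qone = f"
proof
  fix m
  have "qmult q I f qone m = (\<Sum>a\<in>qsupp f. \<Sum>b\<in>{\<lambda>_. 0}. if exp_add a b = m then f a * qone b * twist q I a b else 0)"
    by (rule qmult_eq_double_sum) (use assms in \<open>auto simp: qsupp_def qone_def\<close>)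
  also have "\<dots> = (\<Sum>a\<in>qsupp f. if a = m then f a else 0)"
    by (intro sum.cong refl) (auto simp: exp_add_def qone_def twist_zero_right)
  also have "\<dots> = f m" using assms by (auto simp: sum.delta' qsupp_def)
  finally show "qmult q I f qone m = f m" .
qed

lemma qmult_one_left:
  assumes "finite (qsupp f)"
  shows "qmult q I qone f = f"
proof
  fix m
  have "qmult q I qone f m = (\<Sum>a\<in>{\<lambda>_. 0}. \<Sum>b\<in>qsupp f. if exp_add a b = m then qone a * f b * twist q I a b else 0)"
    by (rule qmult_eq_double_sum) (use assms in \<open>auto simp: qsupp_def qone_def\<close>)
  also have "\<dots> = (\<Sum>b\<in>qsupp f. if b = m then f b else 0)"
  proof -
    have "\<And>b. (if exp_add (\<lambda>_. 0) b = m then qone (\<lambda>_. 0) * f b * twist q I (\<lambda>_. 0) b else 0)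
        = (if b = m then f b else 0)"
      by (simp add: exp_add_def qone_def twist_zero_left)
    then show ?thesis by simp
  qed
  also have "\<dots> = f m" using assms by (auto simp: sum.delta' qsupp_def)
  finally show "qmult q I qone f m = f m" .
qed

section \<open>Evaluation homomorphisms\<close>

definition least_var :: "(nat \<Rightarrow> nat) \<Rightarrow> nat" where
  "least_var m = (LEAST i. m i \<noteq> 0)"

definition exp_dec :: "(nat \<Rightarrow> nat) \<Rightarrow> nat \<Rightarrow> nat \<Rightarrow> nat" where
  "exp_dec m i = (\<lambda>j. if j = i then m j - 1 else m j)"

text \<open>eval_mono q I x m is the ordered product of the x i ^ m i with i increasing; the counter
  exp_deg I m only serves to make the recursion terminate.\<close>

fun eval_mono_aux :: "(nat \<Rightarrow> nat \<Rightarrow> 'k::field) \<Rightarrow> nat set \<Rightarrow> (nat \<Rightarrow> (nat \<Rightarrow> nat) \<Rightarrow> 'k) \<Rightarrow> nat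
    \<Rightarrow> (nat \<Rightarrow> nat) \<Rightarrow> (nat \<Rightarrow> nat) \<Rightarrow> 'k" where
  "eval_mono_aux q I x 0 m = qone"
| "eval_mono_aux q I x (Suc k) m = (if m = (\<lambda>_. 0) then qone
     else qmult q I (x (least_var m)) (eval_mono_aux q I x k (exp_dec m (least_var m))))"

definition eval_mono :: "(nat \<Rightarrow> nat \<Rightarrow> 'k::field) \<Rightarrow> nat set \<Rightarrow> (nat \<Rightarrow> (nat \<Rightarrow> nat) \<Rightarrow> 'k)
    \<Rightarrow> (nat \<Rightarrow> nat) \<Rightarrow> (nat \<Rightarrow> nat) \<Rightarrow> 'k" where
  "eval_mono q I x m = eval_mono_aux q I x (exp_deg I m) m"

lemma eval_mono_zero: "eval_mono q I x (\<lambda>_. 0) = qone"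
  by (simp add: eval_mono_def exp_deg_zero)

lemma least_var_exp_add:
  assumes "\<forall>j<i. b j = 0"
  shows "least_var (exp_add (var_exp i) b) = i" "exp_dec (exp_add (var_exp i) b) i = b"
proof -
  show "least_var (exp_add (var_exp i) b) = i"
    unfolding least_var_def
  proof (rule Least_equality)
    show "exp_add (var_exp i) b i \<noteq> 0" by (simp add: exp_add_def var_exp_def)
    fix y assume y: "exp_add (var_exp i) b y \<noteq> 0"
    show "i \<le> y"
    proof (rule ccontr)
      assume "\<not> i \<le> y"
      then have "y < i" by simp
      then show False using y assms by (simp add: exp_add_def var_exp_def)
    qed
  qed
  show "exp_dec (exp_add (var_exp i) b) i = b"
    by (auto simp: exp_dec_def exp_add_def var_exp_def)
qed

lemma exp_add_var_exp_nonzero: "exp_add (var_exp i) b \<noteq> (\<lambda>_. 0)"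
proof
  assume "exp_add (var_exp i) b = (\<lambda>_. 0)"
  then have "exp_add (var_exp i) b i = 0" by simp
  then show False by (simp add: exp_add_def var_exp_def)
qed

lemma exp_deg_add_var_exp: "finite I \<Longrightarrow> i \<in> I \<Longrightarrow> exp_deg I (exp_add (var_exp i) b) = Suc (exp_deg I b)"
  by (simp add: exp_deg_add exp_deg_var_exp)

lemma eval_mono_step:
  assumes "finite I" "i \<in> I" "\<forall>j<i. b j = 0"
  shows "eval_mono q I x (exp_add (var_exp i) b) = qmult q I (x i) (eval_mono q I x b)"
  using assms least_var_exp_add[OF assms(3)] exp_add_var_exp_nonzero[of i b]
  by (simp add: eval_mono_def exp_deg_add_var_exp)

lemma exp_decomp:
  assumes "m \<in> qmonos I" "m \<noteq> (\<lambda>_. 0)"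
  obtains i b where "i \<in> I" "b \<in> qmonos I" "\<forall>j<i. b j = 0" "m = exp_add (var_exp i) b"
proof -
  obtain i0 where "m i0 \<noteq> 0" using assms(2) by auto
  define i where "i = least_var m"
  have mi: "m i \<noteq> 0" unfolding i_def least_var_def by (rule LeastI[of _ i0]) fact
  have low: "\<forall>j<i. m j = 0" unfolding i_def least_var_def using not_less_Least by blast
  have iI: "i \<in> I" using mi assms(1) by (auto simp: qmonos_def)
  define b where "b = exp_dec m i"
  have "b \<in> qmonos I" using assms(1) by (auto simp: b_def exp_dec_def qmonos_def)
  moreover have "\<forall>j<i. b j = 0" using low by (auto simp: b_def exp_dec_def)
  moreover have "m = exp_add (var_exp i) b" using mi
    by (auto simp: b_def exp_dec_def exp_add_def var_exp_def)
  ultimately show ?thesis using that iI by blast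
qed

lemma qmonos_induct[consumes 2, case_names zero step]:
  assumes "finite I" "m \<in> qmonos I" "P (\<lambda>_. 0)"
    "\<And>i b. i \<in> I \<Longrightarrow> b \<in> qmonos I \<Longrightarrow> (\<forall>j<i. b j = 0) \<Longrightarrow> P b \<Longrightarrow> P (exp_add (var_exp i) b)"
  shows "P m"
  using assms(2)
proof (induction "exp_deg I m" arbitrary: m rule: less_induct)
  case less
  show ?case
  proof (cases "m = (\<lambda>_. 0)")
    case True then show ?thesis using assms(3) by simp
  next
    case False
    obtain i b where ib: "i \<in> I" "b \<in> qmonos I" "\<forall>j<i. b j = 0" "m = exp_add (var_exp i) b"
      using exp_decomp[OF less.prems False] by blast
    have "exp_deg I b < exp_deg I m" using ib exp_deg_add_var_exp[OF assms(1) ib(1), of b] by simp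
    then have "P b" using less.hyps ib(2) by blast
    then show ?thesis using assms(4) ib by simp
  qed
qed

locale qrel_family =
  fixes q :: "nat \<Rightarrow> nat \<Rightarrow> 'k::field" and I :: "nat set" and x :: "nat \<Rightarrow> (nat \<Rightarrow> nat) \<Rightarrow> 'k"
  assumes finI: "finite I"
    and x_qhomog: "\<And>i. i \<in> I \<Longrightarrow> x i \<in> qhomog I 1"
    and rel: "\<And>i j. i \<in> I \<Longrightarrow> j \<in> I \<Longrightarrow> qmult q I (x j) (x i) = (\<lambda>z. q i j * qmult q I (x i) (x j) z)"
begin

lemma x_qcarrier: "i \<in> I \<Longrightarrow> x i \<in> qcarrier I"
  using x_qhomog by (auto simp: qhomog_def)

lemma eval_mono_qhomog: "m \<in> qmonos I \<Longrightarrow> eval_mono q I x m \<in> qhomog I (exp_deg I m)"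
  using finI
proof (induction m rule: qmonos_induct)
  case zero then show ?case using qone_qhomog by (simp add: eval_mono_zero exp_deg_zero)
next
  case (step i b)
  have "qmult q I (x i) (eval_mono q I x b) \<in> qhomog I (1 + exp_deg I b)"
    by (rule qhomog_qmult) (use step x_qhomog in auto)
  then show ?case using step eval_mono_step[OF finI, of i b q x] exp_deg_add_var_exp[OF finI, of i b]
    by simp
qed

lemma eval_mono_qcarrier: "m \<in> qmonos I \<Longrightarrow> eval_mono q I x m \<in> qcarrier I"
  using eval_mono_qhomog by (auto simp: qhomog_def)

lemma finite_qsupp_eval_mono: "m \<in> qmonos I \<Longrightarrow> finite (qsupp (eval_mono q I x m))"
  using eval_mono_qcarrier by (auto simp: qcarrier_def)

lemma finite_qsupp_x: "i \<in> I \<Longrightarrow> finite (qsupp (x i))"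
  using x_qcarrier by (auto simp: qcarrier_def)

lemma qmult_x_eval_mono:
  "b \<in> qmonos I \<Longrightarrow> \<forall>i\<in>I. qmult q I (x i) (eval_mono q I x b)
      = (\<lambda>z. twist q I (var_exp i) b * eval_mono q I x (exp_add b (var_exp i)) z)"
  using finI
proof (induction b rule: qmonos_induct)
  case zero
  show ?case
  proof
    fix i assume i: "i \<in> I"
    have "exp_add (\<lambda>_. 0) (var_exp i) = exp_add (var_exp i) (\<lambda>_. 0)" by (simp add: exp_add_def)
    then have "eval_mono q I x (exp_add (\<lambda>_. 0) (var_exp i)) = qmult q I (x i) qone"
      using eval_mono_step[OF finI i, of "\<lambda>_. 0" q x] by (simp add: eval_mono_zero)
    then show "qmult q I (x i) (eval_mono q I x (\<lambda>_. 0))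
        = (\<lambda>z. twist q I (var_exp i) (\<lambda>_. 0) * eval_mono q I x (exp_add (\<lambda>_. 0) (var_exp i)) z)"
      by (simp add: eval_mono_zero twist_zero_right)
  qed
next
  case (step j b)
  show ?case
  proof
    fix i assume i: "i \<in> I"
    show "qmult q I (x i) (eval_mono q I x (exp_add (var_exp j) b))
        = (\<lambda>z. twist q I (var_exp i) (exp_add (var_exp j) b) * eval_mono q I x (exp_add (exp_add (var_exp j) b) (var_exp i)) z)"
    proof (cases "i \<le> j")
      case True
      have low: "\<forall>l<i. exp_add (var_exp j) b l = 0" using True step(3)
        by (auto simp: exp_add_def var_exp_def)
      have e: "exp_add (exp_add (var_exp j) b) (var_exp i) = exp_add (var_exp i) (exp_add (var_exp j) b)"
        by (auto simp: exp_add_def)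
      show ?thesis
        using eval_mono_step[OF finI i low, of q x] twist_var_exp_below[of i "exp_add (var_exp j) b" q I] low e
        by simp
    next
      case False
      then have ji: "j < i" by simp
      have mb: "exp_add b (var_exp i) \<in> qmonos I" using step(2) i qmonos_exp_add qmonos_var_exp
        by blast
      have low: "\<forall>l<j. exp_add b (var_exp i) l = 0" using ji step(3)
        by (auto simp: exp_add_def var_exp_def)
      have "qmult q I (x i) (eval_mono q I x (exp_add (var_exp j) b))
          = qmult q I (x i) (qmult q I (x j) (eval_mono q I x b))"
        using eval_mono_step[OF finI step(1) step(3), of q x] by simp
      also have "\<dots> = qmult q I (qmult q I (x i) (x j)) (eval_mono q I x b)"
        by (rule qmult_assoc[symmetric]) (use i step finite_qsupp_x finite_qsupp_eval_mono in auto)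
      also have "\<dots> = qmult q I (\<lambda>z. q j i * qmult q I (x j) (x i) z) (eval_mono q I x b)"
        using rel[OF step(1) i] by simp
      also have "\<dots> = (\<lambda>z. q j i * qmult q I (qmult q I (x j) (x i)) (eval_mono q I x b) z)"
        by (rule qmult_scale_left) (use i step finite_qsupp_x finite_qsupp_eval_mono in \<open>auto intro: finite_qsupp_qmult\<close>)
      also have "qmult q I (qmult q I (x j) (x i)) (eval_mono q I x b)
          = qmult q I (x j) (qmult q I (x i) (eval_mono q I x b))"
        by (rule qmult_assoc) (use i step finite_qsupp_x finite_qsupp_eval_mono in auto)
      also have "\<dots> = qmult q I (x j) (\<lambda>z. twist q I (var_exp i) b * eval_mono q I x (exp_add b (var_exp i)) z)"
        using step(4) i by simp
      also have "\<dots> = (\<lambda>z. twist q I (var_exp i) b * qmult q I (x j) (eval_mono q I x (exp_add b (var_exp i))) z)"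
        by (rule qmult_scale_right) (use i step finite_qsupp_x finite_qsupp_eval_mono mb in auto)
      also have "qmult q I (x j) (eval_mono q I x (exp_add b (var_exp i)))
          = eval_mono q I x (exp_add (var_exp j) (exp_add b (var_exp i)))"
        using eval_mono_step[OF finI step(1) low, of q x] by simp
      also have "exp_add (var_exp j) (exp_add b (var_exp i))
          = exp_add (exp_add (var_exp j) b) (var_exp i)"
        by (simp add: exp_add_assoc)
      also have "twist q I (var_exp i) (exp_add (var_exp j) b) = q j i * twist q I (var_exp i) b"
        using twist_add_right[of q I "var_exp i" "var_exp j" b] twist_var_exp_var_exp[OF finI i step(1), of q] ji
        by simp
      ultimately show ?thesis by (simp add: mult.assoc)
    qed
  qed
qed

lemma qmult_eval_mono:
  "a \<in> qmonos I \<Longrightarrow> \<forall>b\<in>qmonos I. qmult q I (eval_mono q I x a) (eval_mono q I x b)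
      = (\<lambda>z. twist q I a b * eval_mono q I x (exp_add a b) z)"
  using finI
proof (induction a rule: qmonos_induct)
  case zero
  have e: "exp_add (\<lambda>_. 0) b = b" for b by (simp add: exp_add_def)
  show ?case
    by (auto simp: eval_mono_zero twist_zero_left e intro!: qmult_one_left finite_qsupp_eval_mono)
next
  case (step i a)
  show ?case
  proof
    fix b assume b: "b \<in> qmonos I"
    have mab: "exp_add a b \<in> qmonos I" using step b qmonos_exp_add by blast
    have "qmult q I (eval_mono q I x (exp_add (var_exp i) a)) (eval_mono q I x b)
        = qmult q I (qmult q I (x i) (eval_mono q I x a)) (eval_mono q I x b)"
      using eval_mono_step[OF finI step(1) step(3), of q x] by simp
    also have "\<dots> = qmult q I (x i) (qmult q I (eval_mono q I x a) (eval_mono q I x b))"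
      by (rule qmult_assoc) (use step b finite_qsupp_x finite_qsupp_eval_mono in auto)
    also have "\<dots> = qmult q I (x i) (\<lambda>z. twist q I a b * eval_mono q I x (exp_add a b) z)"
      using step(4) b by simp
    also have "\<dots> = (\<lambda>z. twist q I a b * qmult q I (x i) (eval_mono q I x (exp_add a b)) z)"
      by (rule qmult_scale_right) (use step finite_qsupp_x finite_qsupp_eval_mono mab in auto)
    also have "qmult q I (x i) (eval_mono q I x (exp_add a b))
        = (\<lambda>z. twist q I (var_exp i) (exp_add a b) * eval_mono q I x (exp_add (exp_add a b) (var_exp i)) z)"
      using qmult_x_eval_mono[OF mab] step(1) by simp
    also have "exp_add (exp_add a b) (var_exp i) = exp_add (exp_add (var_exp i) a) b"
      by (auto simp: exp_add_def)
    also have "twist q I (var_exp i) (exp_add a b) = twist q I (var_exp i) b"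
      using twist_add_right[of q I "var_exp i" a b] twist_var_exp_below[of i a q I] step(3) by simp
    finally have eq: "qmult q I (eval_mono q I x (exp_add (var_exp i) a)) (eval_mono q I x b)
        = (\<lambda>z. twist q I a b *
          (twist q I (var_exp i) b * eval_mono q I x (exp_add (exp_add (var_exp i) a) b) z))" .
    have tw: "twist q I (exp_add (var_exp i) a) b = twist q I (var_exp i) b * twist q I a b"
      by (simp add: twist_add_left)
    show "qmult q I (eval_mono q I x (exp_add (var_exp i) a)) (eval_mono q I x b) =
          (\<lambda>z. twist q I (exp_add (var_exp i) a) b * eval_mono q I x (exp_add (exp_add (var_exp i) a) b) z)"
      unfolding eq tw by (simp add: mult_ac)
  qed
qed

end

definition eval_hom :: "(nat \<Rightarrow> nat \<Rightarrow> 'k::field) \<Rightarrow> nat set \<Rightarrow> (nat \<Rightarrow> (nat \<Rightarrow> nat) \<Rightarrow> 'k)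
   \<Rightarrow> ((nat \<Rightarrow> nat) \<Rightarrow> 'k) \<Rightarrow> (nat \<Rightarrow> nat) \<Rightarrow> 'k" where
  "eval_hom q I x f = (\<lambda>z. \<Sum>m\<in>qsupp f. f m * eval_mono q I x m z)"

lemma eval_hom_eq_sum:
  assumes "finite S" "qsupp f \<subseteq> S"
  shows "eval_hom q I x f = (\<lambda>z. \<Sum>m\<in>S. f m * eval_mono q I x m z)"
proof
  fix z
  show "eval_hom q I x f z = (\<Sum>m\<in>S. f m * eval_mono q I x m z)"
    unfolding eval_hom_def
    by (rule sum.mono_neutral_left) (use assms in \<open>auto simp: qsupp_def\<close>)
qed

lemma eval_hom_lincomb:
  fixes A :: "'a \<Rightarrow> (nat \<Rightarrow> nat) \<Rightarrow> 'k::field"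
  assumes "finite K" "\<And>k. k \<in> K \<Longrightarrow> finite (qsupp (A k))"
  shows "eval_hom q I x (\<lambda>z. \<Sum>k\<in>K. c k * A k z) = (\<lambda>z. \<Sum>k\<in>K. c k * eval_hom q I x (A k) z)"
proof
  fix z
  define S where "S = (\<Union>k\<in>K. qsupp (A k))"
  have fS: "finite S" using assms by (auto simp: S_def)
  have "eval_hom q I x (\<lambda>z. \<Sum>k\<in>K. c k * A k z) z = (\<Sum>m\<in>S. (\<Sum>k\<in>K. c k * A k m) * eval_mono q I x m z)"
    using eval_hom_eq_sum[OF fS qsupp_lincomb[of c A K, folded S_def], of q I x] by simp
  also have "\<dots> = (\<Sum>k\<in>K. c k * (\<Sum>m\<in>S. A k m * eval_mono q I x m z))"
    by (simp add: sum_distrib_right sum_distrib_left mult.assoc sum.swap[of _ S])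
  also have "\<dots> = (\<Sum>k\<in>K. c k * eval_hom q I x (A k) z)"
  proof (intro sum.cong refl)
    fix k assume "k \<in> K"
    then have "eval_hom q I x (A k) = (\<lambda>z. \<Sum>m\<in>S. A k m * eval_mono q I x m z)"
      by (intro eval_hom_eq_sum fS) (auto simp: S_def)
    then show "c k * (\<Sum>m\<in>S. A k m * eval_mono q I x m z) = c k * eval_hom q I x (A k) z" by simp
  qed
  finally show "eval_hom q I x (\<lambda>z. \<Sum>k\<in>K. c k * A k z) z = (\<Sum>k\<in>K. c k * eval_hom q I x (A k) z)" .
qed

lemma eval_hom_add:
  assumes "finite (qsupp f)" "finite (qsupp g)"
  shows "eval_hom q I x (\<lambda>z. f z + g z) = (\<lambda>z. eval_hom q I x f z + eval_hom q I x g z)"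
proof -
  define S where "S = qsupp f \<union> qsupp g"
  have fS: "finite S" using assms by (simp add: S_def)
  have "qsupp (\<lambda>z. f z + g z) \<subseteq> S" by (auto simp: S_def qsupp_def)
  then have a: "eval_hom q I x (\<lambda>z. f z + g z) = (\<lambda>z. \<Sum>m\<in>S. (f m + g m) * eval_mono q I x m z)"
    using eval_hom_eq_sum[OF fS] by blast
  have b: "eval_hom q I x f = (\<lambda>z. \<Sum>m\<in>S. f m * eval_mono q I x m z)"
    by (rule eval_hom_eq_sum[OF fS]) (auto simp: S_def)
  have c: "eval_hom q I x g = (\<lambda>z. \<Sum>m\<in>S. g m * eval_mono q I x m z)"
    by (rule eval_hom_eq_sum[OF fS]) (auto simp: S_def)
  show ?thesis unfolding a b c by (simp add: distrib_right sum.distrib)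
qed

lemma eval_hom_scale:
  assumes "finite (qsupp f)"
  shows "eval_hom q I x (\<lambda>z. c * f z) = (\<lambda>z. c * eval_hom q I x f z)"
proof -
  have a: "eval_hom q I x (\<lambda>z. c * f z) = (\<lambda>z. \<Sum>m\<in>qsupp f. (c * f m) * eval_mono q I x m z)"
    by (rule eval_hom_eq_sum) (use assms in \<open>auto simp: qsupp_def\<close>)
  show ?thesis unfolding a by (simp add: eval_hom_def sum_distrib_left mult.assoc)
qed

lemma eval_hom_qmono: "eval_hom q I x (qmono m) = eval_mono q I x m"
  by (rule ext) (simp add: eval_hom_def qsupp_qmono, simp add: qmono_def)

lemma eval_hom_qone: "eval_hom q I x qone = qone"
  by (simp add: qone_eq_qmono eval_hom_qmono eval_mono_zero)

lemma qcarrier_qmonos: "f \<in> qcarrier I \<Longrightarrow> m \<in> qsupp f \<Longrightarrow> m \<in> qmonos I"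
  by (auto simp: qcarrier_def)

context qrel_family
begin

lemma eval_hom_qcarrier: "f \<in> qcarrier I \<Longrightarrow> eval_hom q I x f \<in> qcarrier I"
  unfolding eval_hom_def using finite_qsupp_qcarrier qcarrier_qmonos eval_mono_qcarrier
  by (intro qcarrier_sum) blast+

lemma eval_hom_qhomog: "f \<in> qhomog I d \<Longrightarrow> eval_hom q I x f \<in> qhomog I d"
  unfolding eval_hom_def
  by (rule qhomog_sum) (use eval_mono_qhomog in \<open>auto simp: qhomog_def qcarrier_def exp_deg_def\<close>)

lemma eval_hom_qvar: "i \<in> I \<Longrightarrow> eval_hom q I x (qvar i) = x i"
proof -
  assume i: "i \<in> I"
  have "var_exp i = exp_add (var_exp i) (\<lambda>_. 0)" by (simp add: exp_add_def)
  then have "eval_mono q I x (var_exp i) = qmult q I (x i) qone"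
    using eval_mono_step[OF finI i, of "\<lambda>_. 0" q x] by (simp add: eval_mono_zero)
  then show ?thesis using qmult_one_right[OF finite_qsupp_x[OF i]]
    by (simp add: qvar_eq_qmono eval_hom_qmono)
qed

lemma eval_hom_qmult:
  assumes f: "f \<in> qcarrier I" and g: "g \<in> qcarrier I"
  shows "eval_hom q I x (qmult q I f g) = qmult q I (eval_hom q I x f) (eval_hom q I x g)"
proof -
  define Sf where "Sf = qsupp f"
  define Sg where "Sg = qsupp g"
  have fin: "finite Sf" "finite Sg" using f g by (auto simp: Sf_def Sg_def qcarrier_def)
  have mon: "\<And>a. a \<in> Sf \<Longrightarrow> a \<in> qmonos I" "\<And>b. b \<in> Sg \<Longrightarrow> b \<in> qmonos I"
    using f g by (auto simp: Sf_def Sg_def qcarrier_def)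
  have ef: "f = (\<lambda>x. \<Sum>a\<in>Sf. f a * qmono a x)"
    by (rule qmono_expansion) (use fin in \<open>auto simp: Sf_def\<close>)
  have eg: "g = (\<lambda>x. \<Sum>a\<in>Sg. g a * qmono a x)"
    by (rule qmono_expansion) (use fin in \<open>auto simp: Sg_def\<close>)
  have "qmult q I f g = qmult q I (\<lambda>x. \<Sum>a\<in>Sf. f a * qmono a x) (\<lambda>x. \<Sum>a\<in>Sg. g a * qmono a x)"
    using ef eg by simp
  also have "\<dots> = (\<lambda>z. \<Sum>a\<in>Sf. \<Sum>b\<in>Sg. f a * g b * qmult q I (qmono a) (qmono b) z)"
    by (rule qmult_lincomb) (use fin finite_qsupp_qmono in auto)
  also have "\<dots> = (\<lambda>z. \<Sum>p\<in>Sf \<times> Sg. (f (fst p) * g (snd p) * twist q I (fst p) (snd p)) * qmono (exp_add (fst p) (snd p)) z)"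
    by (simp add: sum.cartesian_product case_prod_beta qmult_qmono mult.assoc)
  finally have e1: "qmult q I f g = \<dots>" .
  have "eval_hom q I x (qmult q I f g) = (\<lambda>z. \<Sum>p\<in>Sf \<times> Sg. (f (fst p) * g (snd p) * twist q I (fst p) (snd p)) * eval_mono q I x (exp_add (fst p) (snd p)) z)"
    unfolding e1
    by (subst eval_hom_lincomb) (use fin finite_qsupp_qmono in \<open>auto simp: eval_hom_qmono\<close>)
  also have "\<dots> = (\<lambda>z. \<Sum>a\<in>Sf. \<Sum>b\<in>Sg. (f a * g b * twist q I a b) * eval_mono q I x (exp_add a b) z)"
    by (simp only: sum.cartesian_product' fst_conv snd_conv)
  finally have L: "eval_hom q I x (qmult q I f g) = \<dots>" .
  have pf: "eval_hom q I x f = (\<lambda>z. \<Sum>a\<in>Sf. f a * eval_mono q I x a z)"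
    by (simp add: eval_hom_def Sf_def)
  have pg: "eval_hom q I x g = (\<lambda>z. \<Sum>a\<in>Sg. g a * eval_mono q I x a z)"
    by (simp add: eval_hom_def Sg_def)
  have "qmult q I (eval_hom q I x f) (eval_hom q I x g)
      = (\<lambda>z. \<Sum>a\<in>Sf. \<Sum>b\<in>Sg. f a * g b * qmult q I (eval_mono q I x a) (eval_mono q I x b) z)"
    unfolding pf pg by (rule qmult_lincomb) (use fin mon finite_qsupp_eval_mono in auto)
  also have "\<dots> = (\<lambda>z. \<Sum>a\<in>Sf. \<Sum>b\<in>Sg. (f a * g b * twist q I a b) * eval_mono q I x (exp_add a b) z)"
    by (intro ext sum.cong refl) (use mon qmult_eval_mono in \<open>auto simp: mult.assoc\<close>)
  finally show ?thesis using L by simp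
qed

end

section \<open>Graded automorphisms as q-compatible matrices\<close>

definition mat_on :: "nat set \<Rightarrow> (nat \<Rightarrow> nat \<Rightarrow> 'k::zero) \<Rightarrow> bool" where
  "mat_on I g \<longleftrightarrow> (\<forall>a b. (a \<notin> I \<or> b \<notin> I) \<longrightarrow> g a b = 0)"

lemma mat_on_matmul: "mat_on I (matmul I g h)"
  by (simp add: mat_on_def matmul_def)

lemma mat_on_matid: "mat_on I (matid I)"
  by (simp add: mat_on_def matid_def)

lemma matmul_assoc: "matmul I (matmul I g h) k = matmul I g (matmul I h k)"
proof (intro ext)
  fix a b
  show "matmul I (matmul I g h) k a b = matmul I g (matmul I h k) a b"
  proof (cases "a \<in> I \<and> b \<in> I")
    case True
    have "matmul I (matmul I g h) k a b = (\<Sum>c\<in>I. (\<Sum>d\<in>I. g a d * h d c) * k c b)"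
      using True by (simp add: matmul_def)
    also have "\<dots> = (\<Sum>c\<in>I. \<Sum>d\<in>I. g a d * h d c * k c b)"
      by (simp add: sum_distrib_right)
    also have "\<dots> = (\<Sum>d\<in>I. \<Sum>c\<in>I. g a d * h d c * k c b)"
      by (rule sum.swap)
    also have "\<dots> = (\<Sum>d\<in>I. g a d * (\<Sum>c\<in>I. h d c * k c b))"
      by (simp add: sum_distrib_left mult.assoc)
    also have "\<dots> = matmul I g (matmul I h k) a b"
      using True by (simp add: matmul_def)
    finally show ?thesis .
  next
    case False then show ?thesis by (auto simp: matmul_def)
  qed
qed

lemma matmul_matid_left:
  assumes "mat_on I g" "finite I" shows "matmul I (matid I) g = g"
proof (intro ext)
  fix a b
  show "matmul I (matid I) g a b = g a b"
  proof (cases "a \<in> I \<and> b \<in> I")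
    case True
    have "matmul I (matid I) g a b = (\<Sum>c\<in>I. if c = a then g c b else 0)"
      using True by (simp add: matmul_def matid_def) (intro sum.cong refl, auto)
    also have "\<dots> = g a b" using True assms by (simp add: sum.delta')
    finally show ?thesis .
  next
    case False then show ?thesis using assms by (auto simp: matmul_def mat_on_def)
  qed
qed

definition qalg_endo :: "(nat \<Rightarrow> nat \<Rightarrow> 'k::field) \<Rightarrow> nat set
    \<Rightarrow> (((nat \<Rightarrow> nat) \<Rightarrow> 'k) \<Rightarrow> ((nat \<Rightarrow> nat) \<Rightarrow> 'k)) \<Rightarrow> bool" where
  "qalg_endo q I \<psi> \<longleftrightarrow> (\<forall>f\<in>qcarrier I. \<psi> f \<in> qcarrier I)
   \<and> (\<forall>f\<in>qcarrier I. \<forall>g\<in>qcarrier I. \<psi> (\<lambda>m. f m + g m) = (\<lambda>m. \<psi> f m + \<psi> g m))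
   \<and> (\<forall>c. \<forall>f\<in>qcarrier I. \<psi> (\<lambda>m. c * f m) = (\<lambda>m. c * \<psi> f m))
   \<and> (\<forall>f\<in>qcarrier I. \<forall>g\<in>qcarrier I. \<psi> (qmult q I f g) = qmult q I (\<psi> f) (\<psi> g))
   \<and> \<psi> qone = qone"

lemma graded_aut_qalg_endo: "graded_aut q I \<phi> \<Longrightarrow> qalg_endo q I \<phi>"
  by (auto simp: graded_aut_def qalg_endo_def bij_betw_def)

lemma qone_qcarrier: "qone \<in> qcarrier I"
  using qone_qhomog by (auto simp: qhomog_def)

lemma qalg_endo_zero:
  assumes "qalg_endo q I \<psi>" shows "\<psi> (\<lambda>_. 0) = (\<lambda>_. 0)"
proof -
  have "\<psi> (\<lambda>m. 0 * qone m) = (\<lambda>m. 0 * \<psi> qone m)"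
    using assms qone_qcarrier unfolding qalg_endo_def by blast
  then show ?thesis by simp
qed

lemma qalg_endo_lincomb:
  fixes A :: "'a \<Rightarrow> (nat \<Rightarrow> nat) \<Rightarrow> 'k::field"
  assumes "qalg_endo q I \<psi>" "finite K" "\<And>k. k \<in> K \<Longrightarrow> A k \<in> qcarrier I"
  shows "\<psi> (\<lambda>z. \<Sum>k\<in>K. c k * A k z) = (\<lambda>z. \<Sum>k\<in>K. c k * \<psi> (A k) z)"
  using assms(2,3)
proof (induction K rule: finite_induct)
  case empty
  then show ?case using qalg_endo_zero[OF assms(1)] by simp
next
  case (insert k K)
  have s1: "(\<lambda>z. c k * A k z) \<in> qcarrier I" using insert by (intro qcarrier_scale) auto
  have s2: "(\<lambda>z. \<Sum>k\<in>K. c k * A k z) \<in> qcarrier I" using insert by (intro qcarrier_sum) auto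
  have "\<psi> (\<lambda>z. \<Sum>k\<in>insert k K. c k * A k z) = \<psi> (\<lambda>z. c k * A k z + (\<Sum>k\<in>K. c k * A k z))"
    using insert by simp
  also have "\<dots> = (\<lambda>z. \<psi> (\<lambda>z. c k * A k z) z + \<psi> (\<lambda>z. \<Sum>k\<in>K. c k * A k z) z)"
    using assms(1) s1 s2 by (simp add: qalg_endo_def)
  also have "\<dots> = (\<lambda>z. c k * \<psi> (A k) z + (\<Sum>k\<in>K. c k * \<psi> (A k) z))"
    using insert assms(1) by (simp add: qalg_endo_def)
  finally show ?case using insert by simp
qed

lemma qhomog_qcarrier: "f \<in> qhomog I d \<Longrightarrow> f \<in> qcarrier I"
  by (simp add: qhomog_def)

lemma qalg_endo_qmono:
  fixes \<psi> :: "((nat \<Rightarrow> nat) \<Rightarrow> 'k::field) \<Rightarrow> ((nat \<Rightarrow> nat) \<Rightarrow> 'k)"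
  assumes "qalg_endo q I \<psi>" "finite I" "m \<in> qmonos I"
  shows "\<psi> (qmono m) = eval_mono q I (\<lambda>i. \<psi> (qvar i)) m"
  using assms(2,3)
proof (induction m rule: qmonos_induct)
  case zero
  then show ?case using assms(1) by (simp add: eval_mono_zero qone_eq_qmono[symmetric] qalg_endo_def)
next
  case (step i b)
  have "qmono (exp_add (var_exp i) b) = qmult q I (qvar i) (qmono b)"
    using twist_var_exp_below[of i b q I] step(3) by (simp add: qvar_eq_qmono qmult_qmono)
  moreover have "(qvar i :: (nat \<Rightarrow> nat) \<Rightarrow> 'k) \<in> qcarrier I"
    by (rule qhomog_qcarrier[OF qvar_qhomog[OF assms(2) step(1)]])
  moreover have "(qmono b :: (nat \<Rightarrow> nat) \<Rightarrow> 'k) \<in> qcarrier I" using qmono_qcarrier step(2) by blast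
  ultimately have "\<psi> (qmono (exp_add (var_exp i) b)) = qmult q I (\<psi> (qvar i)) (\<psi> (qmono b))"
    using assms(1) unfolding qalg_endo_def by metis
  also have "\<dots> = eval_mono q I (\<lambda>i. \<psi> (qvar i)) (exp_add (var_exp i) b)"
    using eval_mono_step[OF assms(2) step(1) step(3), of q "\<lambda>i. \<psi> (qvar i)"] step(4) by simp
  finally show ?case .
qed

lemma qalg_endo_eq_eval_hom:
  assumes "qalg_endo q I \<psi>" "finite I" "f \<in> qcarrier I"
  shows "\<psi> f = eval_hom q I (\<lambda>i. \<psi> (qvar i)) f"
proof -
  have fin: "finite (qsupp f)" using assms by (simp add: qcarrier_def)
  have e: "f = (\<lambda>x. \<Sum>a\<in>qsupp f. f a * qmono a x)" by (rule qmono_expansion[OF fin]) simp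
  have "\<psi> f = (\<lambda>x. \<Sum>a\<in>qsupp f. f a * \<psi> (qmono a) x)"
    by (subst e, rule qalg_endo_lincomb[OF assms(1) fin]) (use assms in \<open>auto intro: qmono_qcarrier qcarrier_qmonos\<close>)
  also have "\<dots> = eval_hom q I (\<lambda>i. \<psi> (qvar i)) f"
    unfolding eval_hom_def
    by (intro ext sum.cong refl) (simp add: qalg_endo_qmono[OF assms(1,2)] qcarrier_qmonos[OF assms(3)])
  finally show ?thesis .
qed

lemma qalg_endo_id: "qalg_endo q I id"
  by (simp add: qalg_endo_def qcarrier_add qcarrier_scale qcarrier_qmult)

lemma qalg_endo_comp: "qalg_endo q I \<psi>1 \<Longrightarrow> qalg_endo q I \<psi>2 \<Longrightarrow> qalg_endo q I (\<psi>1 \<circ> \<psi>2)"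
  by (simp add: qalg_endo_def)

lemma eval_mono_cong:
  assumes "finite I" "\<forall>i\<in>I. x i = y i" "m \<in> qmonos I"
  shows "eval_mono q I x m = eval_mono q I y m"
  using assms(1,3)
proof (induction m rule: qmonos_induct)
  case zero then show ?case by (simp add: eval_mono_zero)
next
  case (step i b) then show ?case
    using eval_mono_step[OF assms(1) step(1) step(3), of q x] eval_mono_step[OF assms(1) step(1) step(3), of q y] assms(2)
    by simp
qed

lemma eval_hom_cong:
  assumes "finite I" "\<forall>i\<in>I. x i = y i" "f \<in> qcarrier I"
  shows "eval_hom q I x f = eval_hom q I y f"
  unfolding eval_hom_def
  by (intro ext sum.cong refl) (simp add: eval_mono_cong[OF assms(1,2)] qcarrier_qmonos[OF assms(3)])

lemma qalg_endo_fixing_qvar: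
  assumes "qalg_endo q I \<psi>" "finite I" "\<forall>i\<in>I. \<psi> (qvar i) = qvar i" "f \<in> qcarrier I"
  shows "\<psi> f = f"
proof -
  have "\<psi> f = eval_hom q I (\<lambda>i. \<psi> (qvar i)) f" by (rule qalg_endo_eq_eval_hom) fact+
  also have "\<dots> = eval_hom q I (\<lambda>i. id (qvar i)) f" by (rule eval_hom_cong) (use assms in auto)
  also have "\<dots> = id f"
    by (rule qalg_endo_eq_eval_hom[symmetric]) (use assms qalg_endo_id in \<open>auto simp: id_def\<close>)
  finally show ?thesis by simp
qed

definition qrel_mat :: "(nat \<Rightarrow> nat \<Rightarrow> 'k::field) \<Rightarrow> nat set \<Rightarrow> (nat \<Rightarrow> nat \<Rightarrow> 'k) \<Rightarrow> bool" where
  "qrel_mat q I g \<longleftrightarrow> (\<forall>i\<in>I. \<forall>j\<in>I. qmult q I (lin_of I g j) (lin_of I g i)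
       = (\<lambda>z. q i j * qmult q I (lin_of I g i) (lin_of I g j) z))"

lemma lin_of_qhomog:
  fixes g :: "nat \<Rightarrow> nat \<Rightarrow> 'k::field"
  assumes "finite I" shows "lin_of I g i \<in> qhomog I 1"
  unfolding lin_of_def by (rule qhomog_sum) (use assms qvar_qhomog in auto)

lemma lin_of_qcarrier:
  fixes g :: "nat \<Rightarrow> nat \<Rightarrow> 'k::field"
  assumes "finite I" shows "lin_of I g i \<in> qcarrier I"
  by (rule qhomog_qcarrier[OF lin_of_qhomog[OF assms]])

lemma qvar_qcarrier: "finite I \<Longrightarrow> i \<in> I \<Longrightarrow> (qvar i :: _ \<Rightarrow> 'k::field) \<in> qcarrier I"
  by (rule qhomog_qcarrier[OF qvar_qhomog])

lemma qalg_endo_lin_of: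
  fixes u :: "nat \<Rightarrow> nat \<Rightarrow> 'k::field"
  assumes "qalg_endo q I \<psi>" "finite I"
  shows "\<psi> (lin_of I u i) = (\<lambda>z. \<Sum>a\<in>I. u a i * \<psi> (qvar a) z)"
  unfolding lin_of_def by (rule qalg_endo_lincomb[OF assms(1,2)]) (use assms qvar_qcarrier in auto)

lemma qalg_endo_lin_of_matmul:
  fixes u :: "nat \<Rightarrow> nat \<Rightarrow> 'k::field"
  assumes "qalg_endo q I \<psi>" "finite I" "i \<in> I" "\<forall>a\<in>I. \<psi> (qvar a) = lin_of I g a"
  shows "\<psi> (lin_of I u i) = lin_of I (matmul I g u) i"
proof
  fix z
  have "\<psi> (lin_of I u i) z = (\<Sum>a\<in>I. u a i * (\<Sum>c\<in>I. g c a * qvar c z))"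
    using qalg_endo_lin_of[OF assms(1,2), of u i] assms(4) by (simp add: lin_of_def)
  also have "\<dots> = (\<Sum>a\<in>I. \<Sum>c\<in>I. u a i * g c a * qvar c z)"
    by (simp add: sum_distrib_left mult.assoc)
  also have "\<dots> = (\<Sum>c\<in>I. \<Sum>a\<in>I. u a i * g c a * qvar c z)" by (rule sum.swap)
  also have "\<dots> = (\<Sum>c\<in>I. matmul I g u c i * qvar c z)"
    using assms(3) by (simp add: matmul_def sum_distrib_right sum_distrib_left mult_ac)
  finally show "\<psi> (lin_of I u i) z = lin_of I (matmul I g u) i z" by (simp add: lin_of_def)
qed

lemma lin_of_matid:
  assumes "finite I" "i \<in> I" shows "lin_of I (matid I :: _ \<Rightarrow> _ \<Rightarrow> 'k::field) i = qvar i"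
proof
  fix z
  have "lin_of I (matid I :: _ \<Rightarrow> _ \<Rightarrow> 'k::field) i z = (\<Sum>a\<in>I. if a = i then qvar i z else 0)"
    unfolding lin_of_def matid_def by (intro sum.cong refl) auto
  then show "lin_of I (matid I :: _ \<Rightarrow> _ \<Rightarrow> 'k::field) i z = qvar i z" using assms
    by (simp add: sum.delta')
qed

lemma qrel_family_lin_of:
  fixes g :: "nat \<Rightarrow> nat \<Rightarrow> 'k::field"
  assumes "finite I" "qrel_mat q I g"
  shows "qrel_family q I (lin_of I g)"
  using assms lin_of_qhomog unfolding qrel_mat_def by unfold_locales blast+

lemma qalg_endo_eval_hom:
  fixes x :: "nat \<Rightarrow> (nat \<Rightarrow> nat) \<Rightarrow> 'k::field"
  assumes "qrel_family q I x" shows "qalg_endo q I (eval_hom q I x)"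
proof -
  interpret qrel_family q I x by fact
  show ?thesis
    unfolding qalg_endo_def
  proof (intro conjI ballI allI)
    fix f g :: "(nat \<Rightarrow> nat) \<Rightarrow> 'k" assume f: "f \<in> qcarrier I" and g: "g \<in> qcarrier I"
    show "eval_hom q I x (\<lambda>m. f m + g m) = (\<lambda>m. eval_hom q I x f m + eval_hom q I x g m)"
      by (rule eval_hom_add) (use f g finite_qsupp_qcarrier in blast)+
    show "eval_hom q I x (qmult q I f g) = qmult q I (eval_hom q I x f) (eval_hom q I x g)"
      by (rule eval_hom_qmult[OF f g])
  next
    fix c and f :: "(nat \<Rightarrow> nat) \<Rightarrow> 'k" assume f: "f \<in> qcarrier I"
    show "eval_hom q I x (\<lambda>m. c * f m) = (\<lambda>m. c * eval_hom q I x f m)"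
      by (rule eval_hom_scale) (use f finite_qsupp_qcarrier in blast)
  next
    fix f :: "(nat \<Rightarrow> nat) \<Rightarrow> 'k" assume f: "f \<in> qcarrier I"
    show "eval_hom q I x f \<in> qcarrier I" by (rule eval_hom_qcarrier[OF f])
  next
    show "eval_hom q I x qone = qone" by (rule eval_hom_qone)
  qed
qed

lemma qalg_endo_comp_matid:
  fixes g h :: "nat \<Rightarrow> nat \<Rightarrow> 'k::field"
  assumes fin: "finite I" and \<phi>: "qalg_endo q I \<phi>" and \<psi>: "qalg_endo q I \<psi>"
    and v\<phi>: "\<forall>a\<in>I. \<phi> (qvar a) = lin_of I g a" and v\<psi>: "\<forall>a\<in>I. \<psi> (qvar a) = lin_of I h a"
    and gh: "matmul I g h = matid I" and f: "f \<in> qcarrier I"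
  shows "\<phi> (\<psi> f) = f"
proof -
  have "(\<phi> \<circ> \<psi>) f = f"
  proof (rule qalg_endo_fixing_qvar[OF qalg_endo_comp[OF \<phi> \<psi>] fin _ f], intro ballI)
    fix i assume i: "i \<in> I"
    have "(\<phi> \<circ> \<psi>) (qvar i) = \<phi> (lin_of I h i)" using v\<psi> i by simp
    also have "\<dots> = lin_of I (matmul I g h) i" by (rule qalg_endo_lin_of_matmul[OF \<phi> fin i v\<phi>])
    also have "\<dots> = qvar i" using gh lin_of_matid[OF fin i] by simp
    finally show "(\<phi> \<circ> \<psi>) (qvar i) = qvar i" .
  qed
  then show ?thesis by simp
qed

lemma AutGr_setI:
  fixes g h :: "nat \<Rightarrow> nat \<Rightarrow> 'k::field"
  assumes fin: "finite I" and g_on: "mat_on I g"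
    and gh: "matmul I g h = matid I" and hg: "matmul I h g = matid I"
    and rg: "qrel_mat q I g" and rh: "qrel_mat q I h"
  shows "g \<in> AutGr_set q I"
proof -
  interpret G: qrel_family q I "lin_of I g" by (rule qrel_family_lin_of[OF fin rg])
  interpret H: qrel_family q I "lin_of I h" by (rule qrel_family_lin_of[OF fin rh])
  define \<phi> where "\<phi> = eval_hom q I (lin_of I g)"
  define \<psi> where "\<psi> = eval_hom q I (lin_of I h)"
  have endo: "qalg_endo q I \<phi>" "qalg_endo q I \<psi>"
    unfolding \<phi>_def \<psi>_def by (rule qalg_endo_eval_hom, unfold_locales)+
  have v: "\<forall>a\<in>I. \<phi> (qvar a) = lin_of I g a" "\<forall>a\<in>I. \<psi> (qvar a) = lin_of I h a"
    unfolding \<phi>_def \<psi>_def using G.eval_hom_qvar H.eval_hom_qvar by blast+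
  have "bij_betw \<phi> (qcarrier I) (qcarrier I)"
    using endo qalg_endo_comp_matid[OF fin endo v gh] qalg_endo_comp_matid[OF fin endo(2,1) v(2,1) hg]
    by (intro bij_betw_byWitness[where f'=\<psi>]) (auto simp: qalg_endo_def)
  moreover have "\<forall>d. \<forall>f\<in>qhomog I d. \<phi> f \<in> qhomog I d" unfolding \<phi>_def using G.eval_hom_qhomog by blast
  ultimately have "graded_aut q I \<phi>" using endo by (simp add: graded_aut_def qalg_endo_def)
  then show ?thesis using v g_on unfolding AutGr_set_def mat_on_def by blast
qed

lemma exp_add_commute: "exp_add a b = exp_add b a"
  by (auto simp: exp_add_def)

lemma qmult_qvar_commute:
  assumes "finite I" "qpm I q" "i \<in> I" "j \<in> I"
  shows "qmult q I (qvar j) (qvar i) = (\<lambda>z. q i j * qmult q I (qvar i) (qvar j) (z::nat\<Rightarrow>nat))"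
  using twist_var_exp_commute[OF assms(1,2,4,3)]
  by (simp add: qvar_eq_qmono qmult_qmono exp_add_commute[of "var_exp j"] mult.assoc)

lemma var_exp_eq_iff: "var_exp a = var_exp c \<longleftrightarrow> a = c"
proof
  assume "var_exp a = var_exp c"
  then have "var_exp a a = var_exp c a" by simp
  then show "a = c" by (simp add: var_exp_def split: if_splits)
qed simp

lemma lin_of_var_exp:
  assumes "finite I" "a \<in> I"
  shows "lin_of I u i (var_exp a) = u a i"
proof -
  have "lin_of I u i (var_exp a) = (\<Sum>c\<in>I. if c = a then u a i else 0)"
    unfolding lin_of_def qvar_eq_qmono qmono_def by (intro sum.cong refl) (auto simp: var_exp_eq_iff)
  then show ?thesis using assms by (simp add: sum.delta')
qed

lemma exp_deg_eq_1:
  assumes "finite I" "m \<in> qmonos I" "exp_deg I m = 1"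
  shows "\<exists>c\<in>I. m = var_exp c"
proof -
  obtain c where c: "c \<in> I" "m c = Suc 0" "\<forall>b\<in>I. b \<noteq> c \<longrightarrow> m b = 0"
    using assms(3) sum_eq_Suc0_iff[OF assms(1), of m] by (auto simp: exp_deg_def)
  have "m = var_exp c"
  proof
    fix b show "m b = var_exp c b"
      using c assms(2) by (cases "b \<in> I") (auto simp: var_exp_def qmonos_def)
  qed
  then show ?thesis using c by blast
qed

lemma AutGr_qrel_mat:
  fixes g :: "nat \<Rightarrow> nat \<Rightarrow> 'k::field"
  assumes "finite I" "qpm I q" "g \<in> AutGr_set q I"
  shows "qrel_mat q I g"
proof -
  obtain \<phi> where ga: "graded_aut q I \<phi>" and v: "\<forall>i\<in>I. \<phi> (qvar i) = lin_of I g i"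
    using assms(3) by (auto simp: AutGr_set_def)
  have a: "qalg_endo q I \<phi>" by (rule graded_aut_qalg_endo[OF ga])
  have mult: "\<And>f g. f \<in> qcarrier I \<Longrightarrow> g \<in> qcarrier I \<Longrightarrow> \<phi> (qmult q I f g) = qmult q I (\<phi> f) (\<phi> g)"
    using a by (simp add: qalg_endo_def)
  have scale: "\<And>c f. f \<in> qcarrier I \<Longrightarrow> \<phi> (\<lambda>z. c * f z) = (\<lambda>z. c * \<phi> f z)"
    using a by (simp add: qalg_endo_def)
  show ?thesis unfolding qrel_mat_def
  proof (intro ballI)
    fix i j assume i: "i \<in> I" and j: "j \<in> I"
    have ci: "(qvar i :: _ \<Rightarrow> 'k) \<in> qcarrier I" and cj: "(qvar j :: _ \<Rightarrow> 'k) \<in> qcarrier I"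
      using qvar_qcarrier[OF assms(1)] i j by auto
    have cij: "qmult q I (qvar i) (qvar j) \<in> qcarrier I" using ci cj by (rule qcarrier_qmult)
    have "qmult q I (lin_of I g j) (lin_of I g i) = \<phi> (qmult q I (qvar j) (qvar i))"
      using mult[OF cj ci] v i j by simp
    also have "\<dots> = \<phi> (\<lambda>z. q i j * qmult q I (qvar i) (qvar j) z)"
      using qmult_qvar_commute[OF assms(1,2) i j] by simp
    also have "\<dots> = (\<lambda>z. q i j * \<phi> (qmult q I (qvar i) (qvar j)) z)"
      by (rule scale[OF cij])
    also have "\<phi> (qmult q I (qvar i) (qvar j)) = qmult q I (lin_of I g i) (lin_of I g j)"
      using mult[OF ci cj] v i j by simp
    finally show "qmult q I (lin_of I g j) (lin_of I g i)
        = (\<lambda>z. q i j * qmult q I (lin_of I g i) (lin_of I g j) z)" .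
  qed
qed

lemma AutGr_mat_on: "g \<in> AutGr_set q I \<Longrightarrow> mat_on I g"
  by (auto simp: AutGr_set_def mat_on_def)

lemma graded_qalg_endo_coeff_var:
  fixes g :: "nat \<Rightarrow> nat \<Rightarrow> 'k::field"
  assumes fin: "finite I" and ah: "qalg_endo q I \<phi>"
    and graded: "\<And>d f. f \<in> qhomog I d \<Longrightarrow> \<phi> f \<in> qhomog I d"
    and v: "\<forall>c\<in>I. \<phi> (qvar c) = lin_of I g c" and u: "u \<in> qcarrier I" and a: "a \<in> I"
  shows "\<phi> u (var_exp a) = (\<Sum>c\<in>I. g a c * u (var_exp c))"
proof -
  define S where "S = qsupp u \<union> var_exp ` I"
  have fS: "finite S" using u fin by (auto simp: S_def qcarrier_def)
  have mS: "m \<in> qmonos I" if "m \<in> S" for m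
    using that u qmonos_var_exp by (auto simp: S_def qcarrier_def)
  have "\<phi> u = \<phi> (\<lambda>x. \<Sum>m\<in>S. u m * qmono m x)"
    using qmono_expansion[OF fS, of u] by (simp add: S_def)
  also have "\<dots> = (\<lambda>z. \<Sum>m\<in>S. u m * \<phi> (qmono m) z)"
    by (rule qalg_endo_lincomb[OF ah fS]) (use mS qmono_qcarrier in blast)
  finally have "\<phi> u (var_exp a) = (\<Sum>m\<in>S. u m * \<phi> (qmono m) (var_exp a))" by simp
  also have "\<dots> = (\<Sum>m\<in>var_exp ` I. u m * \<phi> (qmono m) (var_exp a))"
  proof (rule sum.mono_neutral_right[OF fS])
    show "var_exp ` I \<subseteq> S" by (auto simp: S_def)
    show "\<forall>m\<in>S - var_exp ` I. u m * \<phi> (qmono m) (var_exp a) = 0"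
    proof
      fix m assume m: "m \<in> S - var_exp ` I"
      have hm: "\<phi> (qmono m) \<in> qhomog I (exp_deg I m)" using graded qmono_qhomog mS m by blast
      show "u m * \<phi> (qmono m) (var_exp a) = 0"
      proof (rule ccontr)
        assume "u m * \<phi> (qmono m) (var_exp a) \<noteq> 0"
        then have "var_exp a \<in> qsupp (\<phi> (qmono m))" by (auto simp: qsupp_def)
        then have "exp_deg I m = 1" using hm exp_deg_var_exp[OF fin a]
          by (auto simp: qhomog_def exp_deg_def)
        then show False using exp_deg_eq_1[OF fin mS] m by auto
      qed
    qed
  qed
  also have "\<dots> = (\<Sum>c\<in>I. u (var_exp c) * \<phi> (qmono (var_exp c)) (var_exp a))"
    by (subst sum.reindex) (auto simp: inj_on_def var_exp_eq_iff)
  also have "\<dots> = (\<Sum>c\<in>I. g a c * u (var_exp c))"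
    by (intro sum.cong refl) (use v a fin in \<open>auto simp: qvar_eq_qmono[symmetric] lin_of_var_exp\<close>)
  finally show ?thesis .
qed

lemma AutGr_inverse_pair:
  fixes g :: "nat \<Rightarrow> nat \<Rightarrow> 'k::field"
  assumes fin: "finite I" and gA: "g \<in> AutGr_set q I"
  shows "\<exists>h. mat_on I h \<and> matmul I g h = matid I \<and> matmul I h g = matid I"
proof -
  obtain \<phi> where ga: "graded_aut q I \<phi>" and v: "\<forall>i\<in>I. \<phi> (qvar i) = lin_of I g i"
    using gA by (auto simp: AutGr_set_def)
  have ah: "qalg_endo q I \<phi>" by (rule graded_aut_qalg_endo[OF ga])
  have bij: "bij_betw \<phi> (qcarrier I) (qcarrier I)" using ga by (simp add: graded_aut_def)
  have graded: "\<And>d f. f \<in> qhomog I d \<Longrightarrow> \<phi> f \<in> qhomog I d" using ga by (simp add: graded_aut_def)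
  have "\<forall>i\<in>I. \<exists>u\<in>qcarrier I. \<phi> u = qvar i"
    using bij qvar_qcarrier[OF fin] unfolding bij_betw_def by (metis imageE)
  then obtain U where Uc: "\<And>i. i \<in> I \<Longrightarrow> U i \<in> qcarrier I"
    and Uv: "\<And>i. i \<in> I \<Longrightarrow> \<phi> (U i) = qvar i" by metis
  \<comment> \<open>h a i is the coefficient of v_a in a preimage of v_i\<close>
  define h where "h = (\<lambda>a i. if a \<in> I \<and> i \<in> I then U i (var_exp a) else (0::'k))"
  have gh: "matmul I g h = matid I"
  proof (intro ext)
    fix a i
    have "(\<Sum>c\<in>I. g a c * U i (var_exp c)) = (if a = i then 1 else 0)" if a: "a \<in> I" and i: "i \<in> I"
    proof -
      have "(\<Sum>c\<in>I. g a c * U i (var_exp c)) = \<phi> (U i) (var_exp a)"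
        using graded_qalg_endo_coeff_var[OF fin ah graded v Uc[OF i] a] by simp
      also have "\<dots> = qvar i (var_exp a)" by (simp add: Uv[OF i])
      finally show ?thesis by (simp add: qvar_eq_qmono qmono_def var_exp_eq_iff)
    qed
    then show "matmul I g h a i = matid I a i" by (auto simp: matmul_def matid_def h_def)
  qed
  have hg: "matmul I h g = matid I"
  proof (intro ext)
    fix a i
    show "matmul I h g a i = matid I a i"
    proof (cases "a \<in> I \<and> i \<in> I")
      case False then show ?thesis by (auto simp: matmul_def matid_def)
    next
      case True
      then have aI: "a \<in> I" and iI: "i \<in> I" by auto
      have "\<phi> (lin_of I (matmul I h g) i) = lin_of I (matmul I g (matmul I h g)) i"
        by (rule qalg_endo_lin_of_matmul[OF ah fin iI v])
      also have "matmul I g (matmul I h g) = g"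
        using gh matmul_matid_left[OF AutGr_mat_on[OF gA] fin] by (simp add: matmul_assoc[symmetric])
      also have "lin_of I g i = \<phi> (qvar i)" using v iI by simp
      finally have "lin_of I (matmul I h g) i = qvar i"
        using bij lin_of_qcarrier[OF fin, of "matmul I h g" i] qvar_qcarrier[OF fin iI]
        by (auto simp: bij_betw_def inj_on_def)
      then have "lin_of I (matmul I h g) i (var_exp a) = qvar i (var_exp a)" by simp
      then show ?thesis
        using aI iI
        by (simp add: lin_of_var_exp[OF fin aI] matid_def qvar_eq_qmono qmono_def var_exp_eq_iff)
    qed
  qed
  moreover have "mat_on I h" by (simp add: mat_on_def h_def)
  ultimately show ?thesis using gh by blast
qed

definition lincomb_vars :: "nat set \<Rightarrow> (nat \<Rightarrow> 'k::field) \<Rightarrow> (nat \<Rightarrow> nat) \<Rightarrow> 'k" where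
  "lincomb_vars I u = (\<lambda>z. \<Sum>a\<in>I. u a * qvar a z)"

lemma lin_of_eq_lincomb_vars: "lin_of I g i = lincomb_vars I (\<lambda>a. g a i)"
  by (simp add: lin_of_def lincomb_vars_def)

lemma exp_add_var_exp_eq_iff:
  "exp_add (var_exp a') (var_exp c') = exp_add (var_exp a) (var_exp c)
    \<longleftrightarrow> (a' = a \<and> c' = c) \<or> (a' = c \<and> c' = a)"
proof
  assume h: "exp_add (var_exp a') (var_exp c') = exp_add (var_exp a) (var_exp c)"
  have p: "var_exp a' k + var_exp c' k = var_exp a k + var_exp c k" for k
    using fun_cong[OF h, of k] by (simp add: exp_add_def)
  have p1: "a' = a \<or> a' = c"
  proof (rule ccontr)
    assume "\<not> (a' = a \<or> a' = c)"
    then show False using p[of a'] by (simp add: var_exp_def)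
  qed
  show "(a' = a \<and> c' = c) \<or> (a' = c \<and> c' = a)"
  proof (cases "a' = a")
    case True
    then have "c' = c" using p[of c'] by (simp add: var_exp_def split: if_splits)
    then show ?thesis using True by simp
  next
    case False
    then have ac: "a' = c" using p1 by simp
    then have "c' = a" using p[of c'] False by (simp add: var_exp_def split: if_splits)
    then show ?thesis using ac by simp
  qed
qed (auto simp: exp_add_def)

lemma qmult_lincomb_vars:
  fixes u w :: "nat \<Rightarrow> 'k::field"
  assumes "finite I"
  shows "qmult q I (lincomb_vars I u) (lincomb_vars I w)
      = (\<lambda>z. \<Sum>a\<in>I. \<Sum>c\<in>I. u a * w c * (twist q I (var_exp a) (var_exp c) * qmono (exp_add (var_exp a) (var_exp c)) z))"
proof -
  have "qmult q I (lincomb_vars I u) (lincomb_vars I w)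
      = (\<lambda>z. \<Sum>a\<in>I. \<Sum>c\<in>I. u a * w c * qmult q I (qvar a) (qvar c) z)"
    unfolding lincomb_vars_def
    by (rule qmult_lincomb) (use assms qvar_qcarrier finite_qsupp_qcarrier in blast)+
  then show ?thesis by (simp add: qvar_eq_qmono qmult_qmono)
qed

lemma qmult_lincomb_vars_at:
  fixes u w :: "nat \<Rightarrow> 'k::field"
  assumes fin: "finite I" and a: "a \<in> I" and c: "c \<in> I"
  shows "qmult q I (lincomb_vars I u) (lincomb_vars I w) (exp_add (var_exp a) (var_exp c)) =
    (if a = c then u a * w a else u a * w c * twist q I (var_exp a) (var_exp c) + u c * w a * twist q I (var_exp c) (var_exp a))"
proof -
  define F where "F = (\<lambda>a' c'. u a' * w c' * twist q I (var_exp a') (var_exp c'))"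
  have "qmult q I (lincomb_vars I u) (lincomb_vars I w) (exp_add (var_exp a) (var_exp c)) =
      (\<Sum>a'\<in>I. \<Sum>c'\<in>I. if exp_add (var_exp a') (var_exp c') = exp_add (var_exp a) (var_exp c) then F a' c' else 0)"
    unfolding qmult_lincomb_vars[OF fin] F_def by (intro sum.cong refl) (auto simp: qmono_def)
  also have "\<dots> = (\<Sum>a'\<in>I. if a' = a then F a c else if a' = c then F c a else 0)"
  proof (intro sum.cong refl)
    fix a' assume a': "a' \<in> I"
    show "(\<Sum>c'\<in>I. if exp_add (var_exp a') (var_exp c') = exp_add (var_exp a) (var_exp c) then F a' c' else 0) =
        (if a' = a then F a c else if a' = c then F c a else 0)"
    proof (cases "a' = a")
      case True
      then have "(\<Sum>c'\<in>I. if exp_add (var_exp a') (var_exp c') = exp_add (var_exp a) (var_exp c) then F a' c' else 0)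
          = (\<Sum>c'\<in>I. if c' = c then F a c else 0)"
        by (intro sum.cong refl) (auto simp: exp_add_var_exp_eq_iff)
      then show ?thesis using True c fin by (simp add: sum.delta')
    next
      case False
      then have "(\<Sum>c'\<in>I. if exp_add (var_exp a') (var_exp c') = exp_add (var_exp a) (var_exp c) then F a' c' else 0)
          = (\<Sum>c'\<in>I. if a' = c \<and> c' = a then F c a else 0)"
        by (intro sum.cong refl) (auto simp: exp_add_var_exp_eq_iff)
      then show ?thesis using False a fin by (cases "a' = c") (simp_all add: sum.delta')
    qed
  qed
  also have "\<dots> = (\<Sum>a'\<in>I. (if a' = a then F a c else 0) + (if a' = c then (if a \<noteq> c then F c a else 0) else 0))"
    by (intro sum.cong refl) auto
  also have "\<dots> = F a c + (if a \<noteq> c then F c a else 0)"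
    using fin a c by (simp only: sum.distrib sum.delta if_True)
  finally show ?thesis
    using twist_var_exp_var_exp[OF fin a a, of q] by (auto simp: F_def)
qed

lemma qmult_lincomb_vars_diag:
  fixes u w :: "nat \<Rightarrow> 'k::field"
  assumes "finite I" "c \<in> I"
  shows "qmult q I (lincomb_vars I u) (lincomb_vars I w) (exp_add (var_exp c) (var_exp c)) = u c * w c"
  using qmult_lincomb_vars_at[OF assms(1,2,2)] by simp

lemma qmult_lincomb_vars_offdiag:
  fixes u w :: "nat \<Rightarrow> 'k::field"
  assumes "finite I" "a \<in> I" "c \<in> I" "a < c"
  shows "qmult q I (lincomb_vars I u) (lincomb_vars I w) (exp_add (var_exp a) (var_exp c))
      = u a * w c + u c * w a * q a c"
  using qmult_lincomb_vars_at[OF assms(1,2,3), of q u w] twist_var_exp_var_exp[OF assms(1,2,3), of q] twist_var_exp_var_exp[OF assms(1,3,2), of q] assms(4)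
  by simp

lemma qvar_eq_lincomb_vars:
  assumes "finite I" "b \<in> I"
  shows "qvar b = lincomb_vars I (\<lambda>c. if c = b then 1 else (0::'k::field))"
proof
  fix z
  have "lincomb_vars I (\<lambda>c. if c = b then 1 else (0::'k)) z = (\<Sum>a\<in>I. if a = b then qvar b z else 0)"
    unfolding lincomb_vars_def by (intro sum.cong refl) auto
  with assms show "qvar b z = lincomb_vars I (\<lambda>c. if c = b then 1 else (0::'k)) z"
    by (simp add: sum.delta')
qed

lemma qvar_mult_eq_mult_lincomb_vars:
  fixes xv yv :: "nat \<Rightarrow> 'k::field"
  assumes fin: "finite I" and qpm: "qpm I q" and aI: "a \<in> I" and bI: "b \<in> I" and xa: "xv a \<noteq> 0"
    and E: "qmult q I (qvar b) (lincomb_vars I xv) = qmult q I (lincomb_vars I xv) (lincomb_vars I yv)"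
    and cI: "c \<in> I"
  shows "yv c = (if c = b then q a b else 0)"
proof -
  define eb where "eb = (\<lambda>c. if c = b then 1 else (0::'k))"
  from E have E': "qmult q I (lincomb_vars I eb) (lincomb_vars I xv)
      = qmult q I (lincomb_vars I xv) (lincomb_vars I yv)"
    by (simp add: qvar_eq_lincomb_vars[OF fin bI] eb_def)
  have diag: "eb c * xv c = xv c * yv c" if "c \<in> I" for c
    using fun_cong[OF E', of "exp_add (var_exp c) (var_exp c)"]
    by (simp only: qmult_lincomb_vars_diag[OF fin that])
  have offdiag: "eb a' * xv c + eb c * xv a' * q a' c = xv a' * yv c + xv c * yv a' * q a' c"
    if "a' \<in> I" "c \<in> I" "a' < c" for a' c
    using fun_cong[OF E', of "exp_add (var_exp a') (var_exp c)"]
    by (simp only: qmult_lincomb_vars_offdiag[OF fin that])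
  have qinv: "q a' c * q c a' = 1" if "a' \<in> I" "c \<in> I" for a' c
    using qpm that by (auto simp: qpm_def)
  have off_b: "yv c = 0" if cI: "c \<in> I" and cb: "c \<noteq> b" for c
  proof (cases "xv c = 0")
    case False
    then show ?thesis using diag[OF cI] cb by (simp add: eb_def)
  next
    case True
    then have "a \<noteq> c" using xa by auto
    then consider "a < c" | "c < a" by linarith
    then show ?thesis
    proof cases
      case 1
      then show ?thesis using offdiag[OF aI cI 1] True cb xa by (simp add: eb_def)
    next
      case 2
      have "q c a \<noteq> 0" using qinv[OF cI aI] by auto
      then show ?thesis using offdiag[OF cI aI 2] True cb xa by (simp add: eb_def)
    qed
  qed
  have at_b: "yv b = q a b"
  proof -
    consider "a = b" | "a < b" | "b < a" by linarith
    then show ?thesis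
    proof cases
      case 1
      then have "yv b = 1" using diag[OF bI] xa by (simp add: eb_def)
      then show ?thesis using 1 qpm bI by (simp add: qpm_def)
    next
      case 2
      then show ?thesis using offdiag[OF aI bI 2] off_b[OF aI] xa by (simp add: eb_def)
    next
      case 3
      then have "1 = yv b * q b a" using offdiag[OF bI aI 3] off_b[OF aI] xa by (simp add: eb_def)
      then have "q a b = q a b * q b a * yv b" by (simp add: mult_ac)
      then show ?thesis using qinv[OF aI bI] by simp
    qed
  qed
  show ?thesis using off_b[OF cI] at_b by simp
qed

lemma qvar_eq_sum_lin_of:
  fixes g h :: "nat \<Rightarrow> nat \<Rightarrow> 'k::field"
  assumes fin: "finite I" and gh: "matmul I g h = matid I" and bI: "b \<in> I"
  shows "qvar b = (\<lambda>z. \<Sum>l\<in>I. h l b * lin_of I g l z)"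
proof
  fix z
  have "qvar b z = lin_of I (matmul I g h) b z" unfolding gh lin_of_matid[OF fin bI] ..
  also have "\<dots> = (\<Sum>c\<in>I. (\<Sum>l\<in>I. g c l * h l b) * qvar c z)"
    using bI by (simp add: lin_of_def matmul_def)
  also have "\<dots> = (\<Sum>c\<in>I. \<Sum>l\<in>I. h l b * (g c l * qvar c z))"
    by (simp only: sum_distrib_right) (simp add: mult_ac)
  also have "\<dots> = (\<Sum>l\<in>I. \<Sum>c\<in>I. h l b * (g c l * qvar c z))" by (rule sum.swap)
  also have "\<dots> = (\<Sum>l\<in>I. h l b * lin_of I g l z)"
    by (simp add: lin_of_def sum_distrib_left)
  finally show "qvar b z = (\<Sum>l\<in>I. h l b * lin_of I g l z)" .
qed

lemma qrel_mat_inverse_entries: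
  fixes g h :: "nat \<Rightarrow> nat \<Rightarrow> 'k::field"
  assumes fin: "finite I" and qpm: "qpm I q"
    and gh: "matmul I g h = matid I" and hg: "matmul I h g = matid I"
    and rg: "qrel_mat q I g"
    and iI: "i \<in> I" and jI: "j \<in> I" and aI: "a \<in> I" and bI: "b \<in> I"
    and gai: "g a i \<noteq> 0" and hjb: "h j b \<noteq> 0"
  shows "q i j = q a b"
proof -
  define yv where "yv = (\<lambda>c. \<Sum>l\<in>I. g c l * (h l b * q i l))"
  have lc: "\<And>l. finite (qsupp (lin_of I g l))" using lin_of_qcarrier[OF fin] finite_qsupp_qcarrier
    by blast
  have qb: "qvar b = (\<lambda>z. \<Sum>l\<in>I. h l b * lin_of I g l z)" by (rule qvar_eq_sum_lin_of[OF fin gh bI])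
  have ly: "(\<lambda>z. \<Sum>l\<in>I. (h l b * q i l) * lin_of I g l z) = lincomb_vars I yv"
  proof
    fix z
    have "(\<Sum>l\<in>I. (h l b * q i l) * lin_of I g l z) = (\<Sum>l\<in>I. \<Sum>c\<in>I. g c l * (h l b * q i l) * qvar c z)"
      by (simp add: lin_of_def sum_distrib_left mult_ac)
    also have "\<dots> = (\<Sum>c\<in>I. \<Sum>l\<in>I. g c l * (h l b * q i l) * qvar c z)" by (rule sum.swap)
    also have "\<dots> = lincomb_vars I yv z" by (simp add: lincomb_vars_def yv_def sum_distrib_right)
    finally show "(\<Sum>l\<in>I. (h l b * q i l) * lin_of I g l z) = lincomb_vars I yv z" .
  qed
  have "qmult q I (qvar b) (lin_of I g i)
      = (\<lambda>z. \<Sum>l\<in>I. qmult q I (\<lambda>z. h l b * lin_of I g l z) (lin_of I g i) z)"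
    unfolding qb by (rule qmult_sum_left) (use fin lc finite_qsupp_scale in auto)
  also have "\<dots> = (\<lambda>z. \<Sum>l\<in>I. h l b * qmult q I (lin_of I g l) (lin_of I g i) z)"
    by (simp add: qmult_scale_left[OF lc lc])
  also have "\<dots> = (\<lambda>z. \<Sum>l\<in>I. qmult q I (lin_of I g i) (\<lambda>z. (h l b * q i l) * lin_of I g l z) z)"
  proof (intro ext sum.cong refl)
    fix z l assume "l \<in> I"
    then have "qmult q I (lin_of I g l) (lin_of I g i)
        = (\<lambda>z. q i l * qmult q I (lin_of I g i) (lin_of I g l) z)"
      using rg iI unfolding qrel_mat_def by blast
    then show "h l b * qmult q I (lin_of I g l) (lin_of I g i) z
        = qmult q I (lin_of I g i) (\<lambda>z. (h l b * q i l) * lin_of I g l z) z"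
      by (simp only: qmult_scale_right[OF lc lc]) (simp add: mult.assoc)
  qed
  also have "\<dots> = qmult q I (lin_of I g i) (\<lambda>z. \<Sum>l\<in>I. (h l b * q i l) * lin_of I g l z)"
    by (rule qmult_sum_right[symmetric]) (use fin lc finite_qsupp_scale in auto)
  also note ly
  finally have "qmult q I (qvar b) (lin_of I g i) = qmult q I (lin_of I g i) (lincomb_vars I yv)" .
  then have y: "yv c = (if c = b then q a b else 0)" if "c \<in> I" for c
    using qvar_mult_eq_mult_lincomb_vars[OF fin qpm aI bI, where xv = "\<lambda>c. g c i" and yv = yv] gai that
    unfolding lin_of_eq_lincomb_vars by blast
  have "h j b * q a b = (\<Sum>c\<in>I. if c = b then h j b * q a b else 0)"
    using fin bI by (simp add: sum.delta)
  also have "\<dots> = (\<Sum>c\<in>I. h j c * yv c)" by (intro sum.cong refl) (simp add: y)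
  also have "\<dots> = (\<Sum>c\<in>I. \<Sum>l\<in>I. h j c * g c l * (h l b * q i l))"
    by (simp add: yv_def sum_distrib_left mult_ac)
  also have "\<dots> = (\<Sum>l\<in>I. \<Sum>c\<in>I. h j c * g c l * (h l b * q i l))" by (rule sum.swap)
  also have "\<dots> = (\<Sum>l\<in>I. matmul I h g j l * (h l b * q i l))"
    using jI by (simp add: matmul_def sum_distrib_right)
  also have "\<dots> = (\<Sum>l\<in>I. if l = j then h j b * q i j else 0)"
    unfolding hg by (intro sum.cong refl) (use jI in \<open>auto simp: matid_def\<close>)
  also have "\<dots> = h j b * q i j" using jI fin by (simp add: sum.delta')
  finally show ?thesis using hjb by simp
qed

definition qcompat :: "(nat \<Rightarrow> nat \<Rightarrow> 'k::field) \<Rightarrow> nat set \<Rightarrow> (nat \<Rightarrow> nat \<Rightarrow> 'k) \<Rightarrow> bool" where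
  "qcompat q I g \<longleftrightarrow> (\<forall>i\<in>I. \<forall>j\<in>I. \<forall>a\<in>I. \<forall>b\<in>I. g a i \<noteq> 0 \<longrightarrow> g b j \<noteq> 0 \<longrightarrow> q a b = q i j)"

definition inverse_pair :: "nat set \<Rightarrow> (nat \<Rightarrow> nat \<Rightarrow> 'k::field) \<Rightarrow> (nat \<Rightarrow> nat \<Rightarrow> 'k) \<Rightarrow> bool" where
  "inverse_pair I g h \<longleftrightarrow> mat_on I g \<and> mat_on I h \<and> matmul I g h = matid I \<and> matmul I h g = matid I"

lemma qpm_inv: "qpm I q \<Longrightarrow> a \<in> I \<Longrightarrow> b \<in> I \<Longrightarrow> q a b = inverse (q b a)"
proof -
  assume "qpm I q" "a \<in> I" "b \<in> I"
  then have "q b a * q a b = 1" by (simp add: qpm_def)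
  then show ?thesis by (simp add: inverse_unique)
qed

lemma matmul_matid_nonzero:
  fixes g h :: "nat \<Rightarrow> nat \<Rightarrow> 'k::field"
  assumes "matmul I g h = matid I" "a \<in> I"
  shows "\<exists>i\<in>I. g a i \<noteq> 0 \<and> h i a \<noteq> 0"
proof (rule ccontr)
  assume "\<not> ?thesis"
  then have "(\<Sum>i\<in>I. g a i * h i a) = 0" by (intro sum.neutral) auto
  moreover have "matmul I g h a a = 1" using assms by (simp add: matid_def)
  ultimately show False using assms(2) by (simp add: matmul_def)
qed

lemma qcompat_of_inverse_entries:
  fixes g h :: "nat \<Rightarrow> nat \<Rightarrow> 'k::field"
  assumes qpm: "qpm I q" and gh: "matmul I g h = matid I" and hg: "matmul I h g = matid I"
    and key: "\<And>i j a b. i \<in> I \<Longrightarrow> j \<in> I \<Longrightarrow> a \<in> I \<Longrightarrow> b \<in> I \<Longrightarrow> g a i \<noteq> 0 \<Longrightarrow> h j b \<noteq> 0 \<Longrightarrow> q i j = q a b"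
  shows "qcompat q I g"
  unfolding qcompat_def
proof (intro ballI impI)
  fix i j a b assume ij: "i \<in> I" "j \<in> I" "a \<in> I" "b \<in> I" and ga: "g a i \<noteq> 0" and gb: "g b j \<noteq> 0"
  obtain b0 where b0: "b0 \<in> I" "g b0 j \<noteq> 0" "h j b0 \<noteq> 0" using matmul_matid_nonzero[OF hg ij(2)]
    by blast
  obtain j0 where j0: "j0 \<in> I" "h j0 a \<noteq> 0" using matmul_matid_nonzero[OF gh ij(3)] by blast
  have "q i j = q a b0" by (rule key[OF ij(1,2,3) b0(1) ga b0(3)])
  moreover have "q b a = q b0 a"
    using key[OF ij(2) j0(1) ij(4) ij(3) gb j0(2)] key[OF ij(2) j0(1) b0(1) ij(3) b0(2) j0(2)] by simp
  then have "q a b = q a b0" using qpm_inv[OF qpm ij(3) ij(4)] qpm_inv[OF qpm ij(3) b0(1)] by simp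
  ultimately show "q a b = q i j" by simp
qed

lemma qrel_mat_imp_qcompat:
  fixes g h :: "nat \<Rightarrow> nat \<Rightarrow> 'k::field"
  assumes fin: "finite I" and qpm: "qpm I q"
    and gh: "matmul I g h = matid I" and hg: "matmul I h g = matid I"
    and rg: "qrel_mat q I g"
  shows "qcompat q I g" and "qcompat q I h"
proof -
  note key = qrel_mat_inverse_entries[OF fin qpm gh hg rg]
  show "qcompat q I g" by (rule qcompat_of_inverse_entries[OF qpm gh hg key])
  show "qcompat q I h"
  proof (rule qcompat_of_inverse_entries[OF qpm hg gh])
    fix i j a b assume "i \<in> I" "j \<in> I" "a \<in> I" "b \<in> I" "h a i \<noteq> 0" "g j b \<noteq> 0"
    then show "q i j = q a b" using key[of b a j i] qpm_inv[OF qpm] by metis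
  qed
qed

lemma qcompat_imp_qrel_mat:
  fixes g :: "nat \<Rightarrow> nat \<Rightarrow> 'k::field"
  assumes fin: "finite I" and qpm: "qpm I q" and mc: "qcompat q I g"
  shows "qrel_mat q I g"
  unfolding qrel_mat_def
proof (intro ballI)
  fix i j assume i: "i \<in> I" and j: "j \<in> I"
  define T where "T = (\<lambda>a c. (twist q I (var_exp a) (var_exp c) :: 'k))"
  define D where "D = (\<lambda>a c. (qmono (exp_add (var_exp a) (var_exp c)) :: _ \<Rightarrow> 'k))"
  have dc: "D a c = D c a" for a c by (simp add: D_def exp_add_commute)
  have L: "qmult q I (lin_of I g j) (lin_of I g i) = (\<lambda>z. \<Sum>a\<in>I. \<Sum>c\<in>I. g a j * g c i * (T a c * D a c z))"
    unfolding lin_of_eq_lincomb_vars qmult_lincomb_vars[OF fin] T_def D_def by simp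
  have R: "qmult q I (lin_of I g i) (lin_of I g j) = (\<lambda>z. \<Sum>c\<in>I. \<Sum>a\<in>I. g c i * g a j * (T c a * D c a z))"
    unfolding lin_of_eq_lincomb_vars qmult_lincomb_vars[OF fin] T_def D_def by simp
  have trm: "g a j * g c i * T a c = q i j * (g c i * g a j * T c a)" if "a \<in> I" "c \<in> I" for a c
  proof (cases "g a j * g c i = 0")
    case False
    then have "q c a = q i j" using mc that i j by (auto simp: qcompat_def)
    then show ?thesis using twist_var_exp_commute[OF fin qpm that] by (simp add: T_def mult_ac)
  qed (auto simp: mult_ac)
  show "qmult q I (lin_of I g j) (lin_of I g i)
      = (\<lambda>z. q i j * qmult q I (lin_of I g i) (lin_of I g j) z)"
  proof
    fix z
    have "(\<Sum>a\<in>I. \<Sum>c\<in>I. g a j * g c i * (T a c * D a c z))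
        = (\<Sum>a\<in>I. \<Sum>c\<in>I. q i j * (g c i * g a j * (T c a * D c a z)))"
      by (intro sum.cong refl) (use trm dc in \<open>simp add: mult.assoc[symmetric]\<close>)
    also have "\<dots> = q i j * (\<Sum>c\<in>I. \<Sum>a\<in>I. g c i * g a j * (T c a * D c a z))"
      by (subst sum.swap) (simp add: sum_distrib_left)
    finally show "qmult q I (lin_of I g j) (lin_of I g i) z
        = q i j * qmult q I (lin_of I g i) (lin_of I g j) z"
      unfolding L R by simp
  qed
qed

theorem AutGr_set_iff:
  fixes g :: "nat \<Rightarrow> nat \<Rightarrow> 'k::field"
  assumes fin: "finite I" and qpm: "qpm I q"
  shows "g \<in> AutGr_set q I \<longleftrightarrow> (\<exists>h. inverse_pair I g h) \<and> qcompat q I g"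
proof
  assume gA: "g \<in> AutGr_set q I"
  obtain h where h: "mat_on I h" "matmul I g h = matid I" "matmul I h g = matid I"
    using AutGr_inverse_pair[OF fin gA] by blast
  then have "inverse_pair I g h" using AutGr_mat_on[OF gA] by (simp add: inverse_pair_def)
  moreover have "qcompat q I g"
    by (rule qrel_mat_imp_qcompat(1)[OF fin qpm h(2,3) AutGr_qrel_mat[OF fin qpm gA]])
  ultimately show "(\<exists>h. inverse_pair I g h) \<and> qcompat q I g" by blast
next
  assume "(\<exists>h. inverse_pair I g h) \<and> qcompat q I g"
  then obtain h where ip: "inverse_pair I g h" and mc: "qcompat q I g" by blast
  have gh: "matmul I g h = matid I" and hg: "matmul I h g = matid I" and g_on: "mat_on I g"
    using ip by (auto simp: inverse_pair_def)
  have rg: "qrel_mat q I g" by (rule qcompat_imp_qrel_mat[OF fin qpm mc])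
  have rh: "qrel_mat q I h"
    by (rule qcompat_imp_qrel_mat[OF fin qpm qrel_mat_imp_qcompat(2)[OF fin qpm gh hg rg]])
  show "g \<in> AutGr_set q I" by (rule AutGr_setI[OF fin g_on gh hg rg rh])
qed

lemma qcompat_inverse:
  fixes g :: "nat \<Rightarrow> nat \<Rightarrow> 'k::field"
  assumes fin: "finite I" and qpm: "qpm I q" and ip: "inverse_pair I g h" and mc: "qcompat q I g"
  shows "qcompat q I h"
  using ip qrel_mat_imp_qcompat(2)[OF fin qpm _ _ qcompat_imp_qrel_mat[OF fin qpm mc]]
  by (simp add: inverse_pair_def)

lemma qcompat_matmul:
  fixes g g' :: "nat \<Rightarrow> nat \<Rightarrow> 'k::field"
  assumes "qcompat q I g" "qcompat q I g'"
  shows "qcompat q I (matmul I g g')"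
  unfolding qcompat_def
proof (intro ballI impI)
  fix i j a b assume ij: "i \<in> I" "j \<in> I" "a \<in> I" "b \<in> I"
    and n1: "matmul I g g' a i \<noteq> 0" and n2: "matmul I g g' b j \<noteq> 0"
  obtain c where c: "c \<in> I" "g a c \<noteq> 0" "g' c i \<noteq> 0"
    using n1 ij by (auto simp: matmul_def intro: sum.not_neutral_contains_not_neutral)
  obtain d where d: "d \<in> I" "g b d \<noteq> 0" "g' d j \<noteq> 0"
    using n2 ij by (auto simp: matmul_def intro: sum.not_neutral_contains_not_neutral)
  have "q a b = q c d" using assms(1) ij c d by (auto simp: qcompat_def)
  also have "\<dots> = q i j" using assms(2) ij c d by (auto simp: qcompat_def)
  finally show "q a b = q i j" .
qed

lemma qcompat_matid: "qcompat q I (matid I)"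
  by (auto simp: qcompat_def matid_def)

lemma inverse_pair_matmul:
  fixes g g' :: "nat \<Rightarrow> nat \<Rightarrow> 'k::field"
  assumes fin: "finite I" and "inverse_pair I g h" "inverse_pair I g' h'"
  shows "inverse_pair I (matmul I g g') (matmul I h' h)"
proof -
  have s: "mat_on I g" "mat_on I h" "mat_on I g'" "mat_on I h'"
    and e: "matmul I g h = matid I" "matmul I h g = matid I"
      "matmul I g' h' = matid I" "matmul I h' g' = matid I"
    using assms by (auto simp: inverse_pair_def)
  have "matmul I (matmul I g g') (matmul I h' h) = matmul I g (matmul I (matmul I g' h') h)"
    by (simp add: matmul_assoc)
  also have "\<dots> = matid I" using e s fin by (simp add: matmul_matid_left)
  finally have 1: "matmul I (matmul I g g') (matmul I h' h) = matid I" .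
  have "matmul I (matmul I h' h) (matmul I g g') = matmul I h' (matmul I (matmul I h g) g')"
    by (simp add: matmul_assoc)
  also have "\<dots> = matid I" using e s fin by (simp add: matmul_matid_left)
  finally have 2: "matmul I (matmul I h' h) (matmul I g g') = matid I" .
  show ?thesis using 1 2 by (simp add: inverse_pair_def mat_on_matmul)
qed

lemma inverse_pair_matid: "inverse_pair I (matid I :: nat \<Rightarrow> nat \<Rightarrow> 'k::field) (matid I)" if "finite I"
  using that by (simp add: inverse_pair_def mat_on_matid matmul_matid_left)

lemma inverse_pair_sym: "inverse_pair I g h \<Longrightarrow> inverse_pair I h g"
  by (auto simp: inverse_pair_def)

lemma AutGr_carrier: "carrier (AutGr q I) = AutGr_set q I"
  by (simp add: AutGr_def)

lemma AutGr_mult: "x \<otimes>\<^bsub>AutGr q I\<^esub> y = matmul I x y"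
  by (simp add: AutGr_def)

lemma AutGr_one: "\<one>\<^bsub>AutGr q I\<^esub> = matid I"
  by (simp add: AutGr_def)

lemma AutGr_group:
  fixes q :: "nat \<Rightarrow> nat \<Rightarrow> 'k::field"
  assumes fin: "finite I" and qpm: "qpm I q"
  shows "group (AutGr q I)"
proof (rule groupI)
  note ch = AutGr_set_iff[OF fin qpm]
  fix x y assume "x \<in> carrier (AutGr q I)" "y \<in> carrier (AutGr q I)"
  then obtain hx hy where h: "inverse_pair I x hx" "qcompat q I x" "inverse_pair I y hy" "qcompat q I y"
    by (auto simp: AutGr_carrier ch)
  have "inverse_pair I (matmul I x y) (matmul I hy hx)"
    by (rule inverse_pair_matmul[OF fin h(1) h(3)])
  moreover have "qcompat q I (matmul I x y)" by (rule qcompat_matmul[OF h(2) h(4)])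
  ultimately show "x \<otimes>\<^bsub>AutGr q I\<^esub> y \<in> carrier (AutGr q I)"
    by (auto simp: AutGr_carrier ch AutGr_mult)
next
  show "\<one>\<^bsub>AutGr q I\<^esub> \<in> carrier (AutGr q I)"
    using inverse_pair_matid[OF fin] qcompat_matid
    by (auto simp: AutGr_carrier AutGr_set_iff[OF fin qpm] AutGr_one)
next
  fix x y z show "x \<otimes>\<^bsub>AutGr q I\<^esub> y \<otimes>\<^bsub>AutGr q I\<^esub> z = x \<otimes>\<^bsub>AutGr q I\<^esub> (y \<otimes>\<^bsub>AutGr q I\<^esub> z)"
    by (simp add: AutGr_mult matmul_assoc)
next
  fix x assume "x \<in> carrier (AutGr q I)"
  then have "mat_on I x" by (auto simp: AutGr_carrier AutGr_set_iff[OF fin qpm] inverse_pair_def)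
  then show "\<one>\<^bsub>AutGr q I\<^esub> \<otimes>\<^bsub>AutGr q I\<^esub> x = x"
    by (simp add: AutGr_one AutGr_mult matmul_matid_left fin)
next
  fix x assume "x \<in> carrier (AutGr q I)"
  then obtain h where ip: "inverse_pair I x h" and mc: "qcompat q I x"
    by (auto simp: AutGr_carrier AutGr_set_iff[OF fin qpm])
  have "qcompat q I h" by (rule qcompat_inverse[OF fin qpm ip mc])
  then have "h \<in> carrier (AutGr q I)" using inverse_pair_sym[OF ip]
    by (auto simp: AutGr_carrier AutGr_set_iff[OF fin qpm])
  moreover have "h \<otimes>\<^bsub>AutGr q I\<^esub> x = \<one>\<^bsub>AutGr q I\<^esub>" using ip
    by (simp add: inverse_pair_def AutGr_mult AutGr_one)
  ultimately show "\<exists>y\<in>carrier (AutGr q I). y \<otimes>\<^bsub>AutGr q I\<^esub> x = \<one>\<^bsub>AutGr q I\<^esub>" by blast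
qed

lemma Gperm_carrier: "carrier (Gperm n q P) = Gperm_set n q P"
  by (simp add: Gperm_def)

lemma Gperm_mult: "x \<otimes>\<^bsub>Gperm n q P\<^esub> y = x \<circ> y"
  by (simp add: Gperm_def)

lemma Gperm_one: "\<one>\<^bsub>Gperm n q P\<^esub> = id"
  by (simp add: Gperm_def)

lemma GpermI:
  assumes "\<sigma> permutes P" "\<And>D. D \<in> P \<Longrightarrow> card (\<sigma> D) = card D" "\<tau> permutes {1..n}"
    "\<And>D. D \<in> P \<Longrightarrow> \<tau> ` D = \<sigma> D" "\<And>i j. i \<in> {1..n} \<Longrightarrow> j \<in> {1..n} \<Longrightarrow> q (\<tau> i) (\<tau> j) = q i j"
  shows "\<sigma> \<in> Gperm_set n q P"
  unfolding Gperm_set_def by (intro CollectI conjI ballI exI[of _ \<tau>]) (use assms in auto)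

lemma GpermE:
  assumes "\<sigma> \<in> Gperm_set n q P"
  obtains \<tau> where "\<sigma> permutes P" "\<tau> permutes {1..n}" "\<And>D. D \<in> P \<Longrightarrow> \<tau> ` D = \<sigma> D"
    "\<And>i j. i \<in> {1..n} \<Longrightarrow> j \<in> {1..n} \<Longrightarrow> q (\<tau> i) (\<tau> j) = q i j"
proof -
  have "\<exists>\<tau>. \<tau> permutes {1..n} \<and> (\<forall>D\<in>P. \<tau> ` D = \<sigma> D) \<and> (\<forall>i\<in>{1..n}. \<forall>j\<in>{1..n}. q (\<tau> i) (\<tau> j) = q i j)"
    and "\<sigma> permutes P"
    using assms by (simp_all add: Gperm_set_def)
  then obtain \<tau> where "\<tau> permutes {1..n}" "\<forall>D\<in>P. \<tau> ` D = \<sigma> D"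
    "\<forall>i\<in>{1..n}. \<forall>j\<in>{1..n}. q (\<tau> i) (\<tau> j) = q i j" "\<sigma> permutes P"
    by blast
  then show thesis by (intro that[of \<tau>]) simp_all
qed

lemma Gperm_card: "\<sigma> \<in> Gperm_set n q P \<Longrightarrow> D \<in> P \<Longrightarrow> card (\<sigma> D) = card D"
  by (simp add: Gperm_set_def)

lemma Gperm_permutes: "\<sigma> \<in> Gperm_set n q P \<Longrightarrow> \<sigma> permutes P"
  by (simp add: Gperm_set_def)

lemma Gperm_block: "\<sigma> \<in> Gperm_set n q P \<Longrightarrow> D \<in> P \<Longrightarrow> \<sigma> D \<in> P"
  by (simp add: Gperm_permutes permutes_in_image)

lemma Gperm_id: "id \<in> Gperm_set n q P"
  by (rule GpermI[where \<tau> = id]) (simp_all add: permutes_id)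

lemma Gperm_comp:
  assumes \<sigma>: "\<sigma> \<in> Gperm_set n q P" and \<rho>: "\<rho> \<in> Gperm_set n q P"
  shows "\<sigma> \<circ> \<rho> \<in> Gperm_set n q P"
proof -
  obtain \<tau> where \<tau>: "\<sigma> permutes P" "\<tau> permutes {1..n}"
    "\<And>D. D \<in> P \<Longrightarrow> \<tau> ` D = \<sigma> D" "\<And>i j. i \<in> {1..n} \<Longrightarrow> j \<in> {1..n} \<Longrightarrow> q (\<tau> i) (\<tau> j) = q i j"
    using GpermE[OF \<sigma>] by metis
  obtain \<upsilon> where \<upsilon>: "\<rho> permutes P" "\<upsilon> permutes {1..n}"
    "\<And>D. D \<in> P \<Longrightarrow> \<upsilon> ` D = \<rho> D" "\<And>i j. i \<in> {1..n} \<Longrightarrow> j \<in> {1..n} \<Longrightarrow> q (\<upsilon> i) (\<upsilon> j) = q i j"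
    using GpermE[OF \<rho>] by metis
  show ?thesis
  proof (rule GpermI[where \<tau> = "\<tau> \<circ> \<upsilon>"])
    show "\<sigma> \<circ> \<rho> permutes P" "\<tau> \<circ> \<upsilon> permutes {1..n}"
      using \<tau>(1,2) \<upsilon>(1,2) by (simp_all add: permutes_compose)
    show "card ((\<sigma> \<circ> \<rho>) D) = card D" "(\<tau> \<circ> \<upsilon>) ` D = (\<sigma> \<circ> \<rho>) D" if "D \<in> P" for D
      unfolding image_comp[symmetric]
      using that \<tau>(3) \<upsilon>(3) Gperm_block[OF \<rho> that] Gperm_card[OF \<sigma>] Gperm_card[OF \<rho>] by simp_all
    show "q ((\<tau> \<circ> \<upsilon>) i) ((\<tau> \<circ> \<upsilon>) j) = q i j" if "i \<in> {1..n}" "j \<in> {1..n}" for i j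
      using that \<tau>(4) \<upsilon>(4) permutes_in_image[OF \<upsilon>(2)] by simp
  qed
qed

lemma Gperm_inv:
  assumes \<sigma>: "\<sigma> \<in> Gperm_set n q P"
  shows "Hilbert_Choice.inv \<sigma> \<in> Gperm_set n q P"
proof -
  obtain \<tau> where \<tau>: "\<sigma> permutes P" "\<tau> permutes {1..n}"
    "\<And>D. D \<in> P \<Longrightarrow> \<tau> ` D = \<sigma> D" "\<And>i j. i \<in> {1..n} \<Longrightarrow> j \<in> {1..n} \<Longrightarrow> q (\<tau> i) (\<tau> j) = q i j"
    using GpermE[OF \<sigma>] by metis
  have inv_in: "Hilbert_Choice.inv \<sigma> D \<in> P" and \<sigma>_inv: "\<sigma> (Hilbert_Choice.inv \<sigma> D) = D" if "D \<in> P" for D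
    using that \<tau>(1) by (simp_all add: permutes_inv permutes_in_image permutes_inverses)
  show ?thesis
  proof (rule GpermI[where \<tau> = "Hilbert_Choice.inv \<tau>"])
    show "Hilbert_Choice.inv \<sigma> permutes P" "Hilbert_Choice.inv \<tau> permutes {1..n}"
      using \<tau>(1,2) by (simp_all add: permutes_inv)
    show "card (Hilbert_Choice.inv \<sigma> D) = card D" if "D \<in> P" for D
      using Gperm_card[OF \<sigma> inv_in[OF that]] \<sigma>_inv[OF that] by simp
    show "Hilbert_Choice.inv \<tau> ` D = Hilbert_Choice.inv \<sigma> D" if "D \<in> P" for D
    proof -
      have "Hilbert_Choice.inv \<tau> ` D = Hilbert_Choice.inv \<tau> ` \<tau> ` Hilbert_Choice.inv \<sigma> D"
        using \<tau>(3)[OF inv_in[OF that]] \<sigma>_inv[OF that] by simp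
      also have "\<dots> = Hilbert_Choice.inv \<sigma> D" using permutes_inj[OF \<tau>(2)] by (simp add: image_inv_f_f)
      finally show ?thesis .
    qed
    show "q (Hilbert_Choice.inv \<tau> i) (Hilbert_Choice.inv \<tau> j) = q i j"
      if "i \<in> {1..n}" "j \<in> {1..n}" for i j
    proof -
      have "Hilbert_Choice.inv \<tau> i \<in> {1..n}" "Hilbert_Choice.inv \<tau> j \<in> {1..n}"
        using that by (simp_all only: permutes_in_image[OF permutes_inv[OF \<tau>(2)]])
      then show ?thesis using \<tau>(4) by (metis permutes_inverses(1)[OF \<tau>(2)])
    qed
  qed
qed

lemma Gperm_group: "group (Gperm n q P)"
proof (rule groupI)
  fix \<sigma> assume \<sigma>: "\<sigma> \<in> carrier (Gperm n q P)"
  then have "Hilbert_Choice.inv \<sigma> \<in> carrier (Gperm n q P)" "Hilbert_Choice.inv \<sigma> \<circ> \<sigma> = id"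
    by (simp_all add: Gperm_carrier Gperm_inv permutes_inv_o(2)[OF Gperm_permutes])
  then show "\<exists>\<rho>\<in>carrier (Gperm n q P). \<rho> \<otimes>\<^bsub>Gperm n q P\<^esub> \<sigma> = \<one>\<^bsub>Gperm n q P\<^esub>"
    by (auto simp: Gperm_mult Gperm_one)
qed (auto simp: Gperm_carrier Gperm_mult Gperm_one Gperm_id Gperm_comp o_assoc)

section \<open>Rows of q permuted by an automorphism\<close>

interpretation fun_vs: vector_space "\<lambda>(c::'k::field) (f::nat \<Rightarrow> 'k). (\<lambda>x. c * f x)"
  by unfold_locales (auto simp: fun_eq_iff algebra_simps)

lemma sum_fun_apply: "(\<Sum>v\<in>t. F v) x = (\<Sum>v\<in>t. F v x)"
  by (induction t rule: infinite_finite_induct) auto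

lemma finite_support_in_span:
  fixes w :: "nat \<Rightarrow> 'k::field"
  assumes fC: "finite C" and supp: "\<And>j. w j \<noteq> 0 \<Longrightarrow> j \<in> C"
  shows "w \<in> fun_vs.span ((\<lambda>j x. if x = j then 1 else 0) ` C)"
proof -
  have "w = (\<Sum>j\<in>C. (\<lambda>x. w j * (if x = j then 1 else 0)))"
  proof
    fix x
    have "(\<Sum>j\<in>C. (\<lambda>x. w j * (if x = j then 1 else 0))) x = (\<Sum>j\<in>C. if j = x then w x else 0)"
      by (simp add: sum_fun_apply) (intro sum.cong refl, auto)
    also have "\<dots> = w x" using supp[of x] fC by (auto simp: sum.delta)
    finally show "w x = (\<Sum>j\<in>C. (\<lambda>x. w j * (if x = j then 1 else 0))) x" by simp
  qed
  also have "\<dots> \<in> fun_vs.span ((\<lambda>j x. if x = j then 1 else 0) ` C)"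
  proof (rule fun_vs.span_sum)
    fix j assume "j \<in> C"
    then have "(\<lambda>x. if x = j then 1 else (0::'k)) \<in> fun_vs.span ((\<lambda>j x. if x = j then 1 else 0) ` C)"
      by (intro fun_vs.span_base) auto
    then show "(\<lambda>x. w j * (if x = j then 1 else 0)) \<in> fun_vs.span ((\<lambda>j x. if x = j then 1 else 0) ` C)"
      by (rule fun_vs.span_scale)
  qed
  finally show ?thesis .
qed

lemma biorthogonal_independent:
  fixes w G :: "nat \<Rightarrow> nat \<Rightarrow> 'k::field"
  assumes biorth: "\<And>a b. a \<in> R \<Longrightarrow> b \<in> R \<Longrightarrow> (\<Sum>j\<in>C. G b j * w a j) = (if a = b then 1 else 0)"
  shows "inj_on w R" and "\<not> fun_vs.dependent (w ` R)"
proof -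
  show inj: "inj_on w R"
  proof (rule inj_onI)
    fix a b assume a: "a \<in> R" and b: "b \<in> R" and e: "w a = w b"
    have "(\<Sum>j\<in>C. G b j * w a j) = 1" using biorth[OF b b] e by simp
    then show "a = b" using biorth[OF a b] by (auto split: if_splits)
  qed
  show "\<not> fun_vs.dependent (w ` R)"
  proof
    assume "fun_vs.dependent (w ` R)"
    then obtain t u where t: "finite t" "t \<subseteq> w ` R" and z: "(\<Sum>v\<in>t. (\<lambda>x. u v * v x)) = 0"
      and v0: "\<exists>v\<in>t. u v \<noteq> 0"
      unfolding fun_vs.dependent_explicit by blast
    obtain v where v: "v \<in> t" "u v \<noteq> 0" using v0 by blast
    obtain b where b: "b \<in> R" "v = w b" using v t by blast
    have zj: "(\<Sum>v\<in>t. u v * v j) = 0" for j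
      using fun_cong[OF z, of j] by (simp add: sum_fun_apply)
    have "0 = (\<Sum>j\<in>C. G b j * (\<Sum>v\<in>t. u v * v j))" by (simp add: zj)
    also have "\<dots> = (\<Sum>v\<in>t. u v * (\<Sum>j\<in>C. G b j * v j))"
      by (simp add: sum_distrib_left sum_distrib_right mult_ac sum.swap[of _ C])
    also have "\<dots> = (\<Sum>v'\<in>t. if v' = v then u v else 0)"
    proof (intro sum.cong refl)
      fix v' assume v': "v' \<in> t"
      then obtain a where a: "a \<in> R" "v' = w a" using t by blast
      have "(\<Sum>j\<in>C. G b j * v' j) = (if a = b then 1 else 0)" using biorth[OF a(1) b(1)] a by simp
      also have "\<dots> = (if v' = v then 1 else 0)" using inj a b by (auto simp: inj_on_def)
      finally show "u v' * (\<Sum>j\<in>C. G b j * v' j) = (if v' = v then u v else 0)" by simp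
    qed
    also have "\<dots> = u v" using v t by (simp add: sum.delta')
    finally show False using v by simp
  qed
qed

lemma card_le_of_biorthogonal:
  fixes w G :: "nat \<Rightarrow> nat \<Rightarrow> 'k::field"
  assumes fC: "finite C" and supp: "\<And>a j. a \<in> R \<Longrightarrow> w a j \<noteq> 0 \<Longrightarrow> j \<in> C"
    and biorth: "\<And>a b. a \<in> R \<Longrightarrow> b \<in> R \<Longrightarrow> (\<Sum>j\<in>C. G b j * w a j) = (if a = b then 1 else 0)"
  shows "card R \<le> card C"
proof -
  have span: "w ` R \<subseteq> fun_vs.span ((\<lambda>j x. if x = j then 1 else 0) ` C)"
    using finite_support_in_span[OF fC] supp by blast
  have "card R = card (w ` R)" using card_image[OF biorthogonal_independent(1)[OF biorth]] by simp
  also have "\<dots> \<le> card ((\<lambda>j x. if x = j then 1 else (0::'k)) ` C)"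
    using fun_vs.independent_span_bound[OF finite_imageI[OF fC] biorthogonal_independent(2)[OF biorth] span]
    by simp
  also have "\<dots> \<le> card C" by (rule card_image_le[OF fC])
  finally show ?thesis .
qed

definition same_row :: "nat set \<Rightarrow> (nat \<Rightarrow> nat \<Rightarrow> 'k) \<Rightarrow> nat \<Rightarrow> nat \<Rightarrow> bool" where
  "same_row I q a b \<longleftrightarrow> (\<forall>l\<in>I. q a l = q b l)"

definition row_class :: "nat set \<Rightarrow> (nat \<Rightarrow> nat \<Rightarrow> 'k) \<Rightarrow> nat \<Rightarrow> nat set" where
  "row_class I q a = {b\<in>I. same_row I q a b}"

lemma same_row_refl: "same_row I q a a" by (simp add: same_row_def)
lemma same_row_sym: "same_row I q a b \<Longrightarrow> same_row I q b a" by (simp add: same_row_def)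
lemma same_row_trans:
  "same_row I q a b \<Longrightarrow> same_row I q b c \<Longrightarrow> same_row I q a c" by (simp add: same_row_def)

lemma row_class_eq: "same_row I q a b \<Longrightarrow> row_class I q a = row_class I q b"
  unfolding row_class_def using same_row_trans same_row_sym by blast

lemma row_class_subset: "row_class I q a \<subseteq> I"
  by (auto simp: row_class_def)

lemma row_class_iff: "b \<in> row_class I q a \<longleftrightarrow> b \<in> I \<and> same_row I q a b"
  by (simp add: row_class_def)

locale compat_aut =
  fixes q :: "nat \<Rightarrow> nat \<Rightarrow> 'k::field" and I :: "nat set" and g h :: "nat \<Rightarrow> nat \<Rightarrow> 'k"
  assumes fin: "finite I" and qpm: "qpm I q" and ip: "inverse_pair I g h" and mc: "qcompat q I g"
begin

lemma gh: "matmul I g h = matid I" and hg: "matmul I h g = matid I"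
  and g_on: "mat_on I g"
  using ip by (auto simp: inverse_pair_def)

lemma qcompat_h: "qcompat q I h" by (rule qcompat_inverse[OF fin qpm ip mc])

lemma col_nonzero: "i \<in> I \<Longrightarrow> \<exists>a\<in>I. g a i \<noteq> 0 \<and> h i a \<noteq> 0"
  using matmul_matid_nonzero[OF hg] by blast

lemma row_nonzero: "a \<in> I \<Longrightarrow> \<exists>i\<in>I. g a i \<noteq> 0 \<and> h i a \<noteq> 0"
  using matmul_matid_nonzero[OF gh] by blast

lemma g_nonzero_in: "g a i \<noteq> 0 \<Longrightarrow> a \<in> I \<and> i \<in> I"
  using g_on by (auto simp: mat_on_def)

lemma same_row_rows: "g a i \<noteq> 0 \<Longrightarrow> g a' i' \<noteq> 0 \<Longrightarrow> same_row I q i i' \<Longrightarrow> same_row I q a a'"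
  unfolding same_row_def
proof
  fix l assume ga: "g a i \<noteq> 0" and ga': "g a' i' \<noteq> 0" and r: "\<forall>l\<in>I. q i l = q i' l" and l: "l \<in> I"
  obtain j where j: "j \<in> I" "g l j \<noteq> 0" using row_nonzero[OF l] by blast
  have "q a l = q i j" using mc ga j g_nonzero_in[OF ga] l by (auto simp: qcompat_def)
  also have "\<dots> = q i' j" using r j by simp
  also have "\<dots> = q a' l" using mc ga' j g_nonzero_in[OF ga'] l by (auto simp: qcompat_def)
  finally show "q a l = q a' l" .
qed

lemma same_row_cols: "g a i \<noteq> 0 \<Longrightarrow> g a' j \<noteq> 0 \<Longrightarrow> same_row I q a a' \<Longrightarrow> same_row I q i j"
  unfolding same_row_def
proof
  fix l assume ga: "g a i \<noteq> 0" and ga': "g a' j \<noteq> 0" and r: "\<forall>l\<in>I. q a l = q a' l" and l: "l \<in> I"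
  obtain b where b: "b \<in> I" "g b l \<noteq> 0" using col_nonzero[OF l] by blast
  have "q i l = q a b" using mc ga b g_nonzero_in[OF ga] l by (auto simp: qcompat_def)
  also have "\<dots> = q a' b" using r b by simp
  also have "\<dots> = q j l" using mc ga' b g_nonzero_in[OF ga'] l by (auto simp: qcompat_def)
  finally show "q i l = q j l" .
qed

definition class_image :: "nat set \<Rightarrow> nat set" where
  "class_image C = row_class I q (SOME a. a \<in> I \<and> (\<exists>i\<in>C. g a i \<noteq> 0))"

lemma class_image_eq:
  assumes "g a i \<noteq> 0" shows "class_image (row_class I q i) = row_class I q a"
proof -
  have ex: "\<exists>a. a \<in> I \<and> (\<exists>i'\<in>row_class I q i. g a i' \<noteq> 0)"
  proof -
    have "i \<in> row_class I q i" using g_nonzero_in[OF assms] same_row_refl[of I q i]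
      by (simp add: row_class_iff)
    then show ?thesis using assms g_nonzero_in[OF assms] by blast
  qed
  define a0 where "a0 = (SOME a. a \<in> I \<and> (\<exists>i'\<in>row_class I q i. g a i' \<noteq> 0))"
  have "a0 \<in> I \<and> (\<exists>i'\<in>row_class I q i. g a0 i' \<noteq> 0)" unfolding a0_def by (rule someI_ex[OF ex])
  then obtain i' where i': "i' \<in> row_class I q i" "g a0 i' \<noteq> 0" by blast
  have "same_row I q a0 a" using same_row_rows[OF i'(2) assms] i'(1) same_row_sym
    by (auto simp: row_class_iff)
  then show ?thesis unfolding class_image_def a0_def[symmetric] by (rule row_class_eq)
qed

lemma card_row_class_le:
  assumes a: "g a i \<noteq> 0" shows "card (row_class I q i) \<le> card (row_class I q a)"
proof (rule card_le_of_biorthogonal[where w = "\<lambda>i a. g a i" and G = h])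
  show "finite (row_class I q a)" using fin by (auto simp: row_class_def)
next
  fix i' a' assume i': "i' \<in> row_class I q i" and g': "g a' i' \<noteq> 0"
  have "same_row I q a a'" using same_row_rows[OF a g'] i' by (auto simp: row_class_iff)
  then show "a' \<in> row_class I q a" using g_nonzero_in[OF g'] by (simp add: row_class_iff)
next
  fix i1 i2 assume i1: "i1 \<in> row_class I q i" and i2: "i2 \<in> row_class I q i"
  have "(\<Sum>j\<in>row_class I q a. h i2 j * g j i1) = (\<Sum>j\<in>I. h i2 j * g j i1)"
  proof (rule sum.mono_neutral_left[OF fin row_class_subset], intro ballI)
    fix j assume j: "j \<in> I - row_class I q a"
    show "h i2 j * g j i1 = 0"
    proof (rule ccontr)
      assume "h i2 j * g j i1 \<noteq> 0"
      then have "same_row I q a j" using same_row_rows[OF a] i1 by (auto simp: row_class_iff)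
      then show False using j by (simp add: row_class_iff)
    qed
  qed
  also have "\<dots> = matmul I h g i2 i1" using i1 i2 by (simp add: matmul_def row_class_def)
  also have "\<dots> = (if i1 = i2 then 1 else 0)" using hg i1 i2 by (auto simp: matid_def row_class_def)
  finally show "(\<Sum>j\<in>row_class I q a. h i2 j * g j i1) = (if i1 = i2 then 1 else 0)" .
qed

lemma compat_aut_inverse: "compat_aut q I h g"
  using fin qpm ip qcompat_h by unfold_locales (auto simp: inverse_pair_def)

lemma card_class_image:
  assumes i: "i \<in> I" shows "card (row_class I q i) = card (class_image (row_class I q i))"
proof -
  obtain a where a: "a \<in> I" "g a i \<noteq> 0" using col_nonzero[OF i] by blast
  obtain j where j: "j \<in> I" "g a j \<noteq> 0" "h j a \<noteq> 0" using row_nonzero[OF a(1)] by blast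
  have "row_class I q j = row_class I q i"
    using same_row_cols[OF j(2) a(2) same_row_refl] by (simp add: row_class_eq)
  then have "card (row_class I q a) \<le> card (row_class I q i)"
    using compat_aut.card_row_class_le[OF compat_aut_inverse j(3)] by simp
  then show ?thesis using card_row_class_le[OF a(2)] class_image_eq[OF a(2)] by simp
qed

text \<open>row_perm moves every row class of q as g does.  For g in Aut_gr it is the index permutation
  that witnesses membership of the induced block permutation in G.\<close>

definition class_bij :: "nat set \<Rightarrow> nat \<Rightarrow> nat" where
  "class_bij C = (SOME b. bij_betw b C (class_image C))"

definition row_perm :: "nat \<Rightarrow> nat" where
  "row_perm i = (if i \<in> I then class_bij (row_class I q i) i else i)"

lemma row_class_self: "i \<in> I \<Longrightarrow> i \<in> row_class I q i"
  by (simp add: row_class_iff same_row_refl)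

lemma class_bij_bij:
  assumes i: "i \<in> I"
  shows "bij_betw (class_bij (row_class I q i)) (row_class I q i) (class_image (row_class I q i))"
proof -
  obtain a where a: "a \<in> I" "g a i \<noteq> 0" using col_nonzero[OF i] by blast
  have f: "finite (row_class I q i)" "finite (class_image (row_class I q i))"
    using fin class_image_eq[OF a(2)] by (auto simp: row_class_def)
  have "\<exists>b. bij_betw b (row_class I q i) (class_image (row_class I q i))"
    by (rule finite_same_card_bij[OF f card_class_image[OF i]])
  then show ?thesis unfolding class_bij_def by (rule someI_ex)
qed

lemma same_row_row_perm: assumes "g a i \<noteq> 0" shows "same_row I q a (row_perm i)"
proof -
  have i: "i \<in> I" using g_nonzero_in[OF assms] by simp
  have "row_perm i \<in> class_image (row_class I q i)" using class_bij_bij[OF i] row_class_self[OF i]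
    by (auto simp: row_perm_def bij_betw_def i)
  then show ?thesis using class_image_eq[OF assms] by (simp add: row_class_iff)
qed

lemma row_perm_in: "i \<in> I \<Longrightarrow> row_perm i \<in> I"
  using col_nonzero same_row_row_perm
  by (metis row_class_iff class_image_eq class_bij_bij bij_betw_apply row_class_self row_perm_def)

lemma inj_on_row_perm: "inj_on row_perm I"
proof (rule inj_onI)
  fix i j assume i: "i \<in> I" and j: "j \<in> I" and e: "row_perm i = row_perm j"
  obtain a where a: "a \<in> I" "g a i \<noteq> 0" using col_nonzero[OF i] by blast
  obtain b where b: "b \<in> I" "g b j \<noteq> 0" using col_nonzero[OF j] by blast
  have "same_row I q a b"
    using same_row_row_perm[OF a(2)] same_row_row_perm[OF b(2)] e same_row_sym same_row_trans by metis
  then have r: "same_row I q i j" by (rule same_row_cols[OF a(2) b(2)])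
  then have c: "row_class I q i = row_class I q j" by (rule row_class_eq)
  have "j \<in> row_class I q i" using r j by (simp add: row_class_iff)
  moreover have "class_bij (row_class I q i) i = class_bij (row_class I q i) j" using e i j c
    by (simp add: row_perm_def)
  ultimately show "i = j" using class_bij_bij[OF i] row_class_self[OF i]
    by (auto simp: bij_betw_def inj_on_def)
qed

lemma row_perm_permutes: "row_perm permutes I"
proof (rule bij_imp_permutes)
  have "row_perm ` I \<subseteq> I" using row_perm_in by blast
  then have "row_perm ` I = I" using endo_inj_surj[OF fin _ inj_on_row_perm] by blast
  then show "bij_betw row_perm I I" using inj_on_row_perm by (simp add: bij_betw_def)
next
  fix x assume "x \<notin> I" then show "row_perm x = x" by (simp add: row_perm_def)
qed

lemma q_row_perm: assumes i: "i \<in> I" and j: "j \<in> I" shows "q (row_perm i) (row_perm j) = q i j"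
proof -
  obtain a where a: "a \<in> I" "g a i \<noteq> 0" using col_nonzero[OF i] by blast
  obtain b where b: "b \<in> I" "g b j \<noteq> 0" using col_nonzero[OF j] by blast
  have ra: "same_row I q a (row_perm i)" by (rule same_row_row_perm[OF a(2)])
  have rb: "same_row I q b (row_perm j)" by (rule same_row_row_perm[OF b(2)])
  have ti: "row_perm i \<in> I" "row_perm j \<in> I" using row_perm_in i j by auto
  have "q (row_perm i) (row_perm j) = q a (row_perm j)" using ra ti by (simp add: same_row_def)
  also have "\<dots> = inverse (q (row_perm j) a)" by (rule qpm_inv[OF qpm a(1) ti(2)])
  also have "q (row_perm j) a = q b a" using rb a(1) by (simp add: same_row_def)
  also have "inverse (q b a) = q a b" using qpm_inv[OF qpm a(1) b(1)] by simp
  also have "\<dots> = q i j" using mc a b i j by (auto simp: qcompat_def)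
  finally show ?thesis .
qed

end

section \<open>Block permutations\<close>

lemma split_epi_semidirect:
  assumes p: "group_hom G Q p" and s: "group_hom Q G s"
    and p_s: "\<And>x. x \<in> carrier Q \<Longrightarrow> p (s x) = x"
  shows "kernel G Q p \<lhd> G"
    and "subgroup (s ` carrier Q) G"
    and "kernel G Q p \<inter> s ` carrier Q = {\<one>\<^bsub>G\<^esub>}"
    and "kernel G Q p <#>\<^bsub>G\<^esub> s ` carrier Q = carrier G"
    and "G\<lparr>carrier := s ` carrier Q\<rparr> \<cong> Q"
proof -
  interpret p: group_hom G Q p by (fact p)
  interpret s: group_hom Q G s by (fact s)
  have "p \<circ> s \<in> iso Q Q"
    by (rule p.H.iso_eq[OF id_iso]) (simp add: p_s)
  then show "kernel G Q p \<inter> s ` carrier Q = {\<one>\<^bsub>G\<^esub>}"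
    and "kernel G Q p <#>\<^bsub>G\<^esub> s ` carrier Q = carrier G"
    using group_semidirect_sum_ker_image[OF _ s.homh p.homh] by auto
  show "kernel G Q p \<lhd> G" by (rule p.normal_kernel)
  show "subgroup (s ` carrier Q) G" by (rule s.img_is_subgroup)
  have "p \<in> hom (G\<lparr>carrier := s ` carrier Q\<rparr>) Q"
    using p.homh s.hom_closed by (auto simp: hom_def)
  moreover have "bij_betw p (s ` carrier Q) (carrier Q)"
    by (rule bij_betw_byWitness[where f' = s]) (auto simp: p_s)
  ultimately show "G\<lparr>carrier := s ` carrier Q\<rparr> \<cong> Q"
    unfolding is_iso_def iso_def by auto
qed

locale block_setting =
  fixes q :: "nat \<Rightarrow> nat \<Rightarrow> 'k::field" and n :: nat and P :: "nat set set"
  assumes qpm: "qpm {1..n} q"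
    and part: "partition_on {1..n} P"
    and refd: "refined_by_Bq n q P"
    and cst: "\<forall>D\<in>P. \<forall>E\<in>P. D \<noteq> E \<longrightarrow> (\<exists>c. \<forall>i\<in>D. \<forall>j\<in>E. q i j = c)"
    and sep: "\<forall>D\<in>P. \<forall>E\<in>P. \<forall>F\<in>P. D \<noteq> E \<longrightarrow> (\<forall>i\<in>D. \<forall>j\<in>E. \<forall>a\<in>F. \<forall>b\<in>F. q i j \<noteq> q a b)"
begin

lemma block_subset: "D \<in> P \<Longrightarrow> D \<subseteq> {1..n}"
  using part by (auto simp: partition_on_def)

lemma block_nonempty: "D \<in> P \<Longrightarrow> D \<noteq> {}"
  using part by (auto simp: partition_on_def)

lemma block_disjoint: "D \<in> P \<Longrightarrow> E \<in> P \<Longrightarrow> x \<in> D \<Longrightarrow> x \<in> E \<Longrightarrow> D = E"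
  using part unfolding partition_on_def disjoint_def by blast

lemma block_cover: "i \<in> {1..n} \<Longrightarrow> \<exists>D\<in>P. i \<in> D"
  using part by (auto simp: partition_on_def)

lemma finite_blocks: "finite P"
proof -
  have "P \<subseteq> Pow {1..n}" using block_subset by auto
  then show ?thesis by (rule finite_subset) simp
qed

definition block_of :: "nat \<Rightarrow> nat set" where
  "block_of i = (THE D. D \<in> P \<and> i \<in> D)"

lemma block_of_eq: assumes "D \<in> P" "i \<in> D" shows "block_of i = D"
  unfolding block_of_def
proof (rule the_equality)
  show "D \<in> P \<and> i \<in> D" using assms by simp
  fix E assume "E \<in> P \<and> i \<in> E"
  then show "E = D" using block_disjoint assms by blast
qed

lemma block_of_in: "i \<in> {1..n} \<Longrightarrow> block_of i \<in> P \<and> i \<in> block_of i"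
  using block_cover block_of_eq by metis

lemma same_block_iff_q_eq:
  assumes "i \<in> {1..n}" "j \<in> {1..n}" "a \<in> {1..n}" "b \<in> {1..n}" and q: "q a b = q i j"
  shows "block_of a = block_of b \<longleftrightarrow> block_of i = block_of j"
proof -
  have "q i j \<noteq> q a b" if "block_of a = block_of b" "block_of i \<noteq> block_of j"
    using sep block_of_in[OF assms(1)] block_of_in[OF assms(2)] block_of_in[OF assms(3)]
      block_of_in[OF assms(4)] that by metis
  moreover have "q a b \<noteq> q i j" if "block_of a \<noteq> block_of b" "block_of i = block_of j"
    using sep block_of_in[OF assms(1)] block_of_in[OF assms(2)] block_of_in[OF assms(3)]
      block_of_in[OF assms(4)] that by metis
  ultimately show ?thesis using q by auto
qed

lemma AutGr_compat_aut:
  assumes "g \<in> AutGr_set q {1..n}"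
  obtains h where "compat_aut q {1..n} g h"
proof -
  obtain h where "inverse_pair {1..n} g h" "qcompat q {1..n} g"
    using assms AutGr_set_iff[OF finite_atLeastAtMost qpm] by blast
  then show ?thesis using that qpm by (auto simp: compat_aut_def)
qed

definition block_perm :: "(nat \<Rightarrow> nat \<Rightarrow> 'k) \<Rightarrow> nat set \<Rightarrow> nat set" where
  "block_perm g D = (if D \<in> P then block_of (SOME a. a \<in> {1..n} \<and> (\<exists>i\<in>D. g a i \<noteq> 0)) else D)"

lemma block_perm_witness:
  assumes gA: "g \<in> AutGr_set q {1..n}" and D: "D \<in> P"
  shows "\<exists>a0 i0. a0 \<in> {1..n} \<and> i0 \<in> D \<and> g a0 i0 \<noteq> 0 \<and> block_perm g D = block_of a0"
proof -
  obtain h where "compat_aut q {1..n} g h" using AutGr_compat_aut[OF gA] by blast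
  then interpret compat_aut q "{1..n}" g h .
  obtain i where i: "i \<in> D" using block_nonempty[OF D] by blast
  obtain a where a: "a \<in> {1..n}" "g a i \<noteq> 0" using col_nonzero block_subset[OF D] i by blast
  have ex: "\<exists>a. a \<in> {1..n} \<and> (\<exists>i\<in>D. g a i \<noteq> 0)" using a i by blast
  define a0 where "a0 = (SOME a. a \<in> {1..n} \<and> (\<exists>i\<in>D. g a i \<noteq> 0))"
  have "a0 \<in> {1..n} \<and> (\<exists>i\<in>D. g a0 i \<noteq> 0)" unfolding a0_def by (rule someI_ex[OF ex])
  moreover have "block_perm g D = block_of a0" using D by (simp add: block_perm_def a0_def)
  ultimately show ?thesis by blast
qed

lemma block_perm_in: "D \<in> P \<Longrightarrow> g \<in> AutGr_set q {1..n} \<Longrightarrow> block_perm g D \<in> P"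
  using block_perm_witness block_of_in by metis

lemma block_perm_mem:
  assumes gA: "g \<in> AutGr_set q {1..n}" and D: "D \<in> P" and i: "i \<in> D" and ga: "g a i \<noteq> 0"
  shows "a \<in> block_perm g D"
proof -
  obtain h where "compat_aut q {1..n} g h" using AutGr_compat_aut[OF gA] by blast
  then interpret compat_aut q "{1..n}" g h .
  obtain a0 i0 where a0: "a0 \<in> {1..n}" "i0 \<in> D" "g a0 i0 \<noteq> 0" "block_perm g D = block_of a0"
    using block_perm_witness[OF gA D] by blast
  have iI: "i \<in> {1..n}" "i0 \<in> {1..n}" "a \<in> {1..n}" using g_nonzero_in ga a0 by auto
  have "q a a0 = q i i0" using mc ga a0 iI by (auto simp: qcompat_def)
  moreover have "block_of i = block_of i0" using block_of_eq[OF D i] block_of_eq[OF D a0(2)] by simp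
  ultimately have "block_of a = block_of a0" using same_block_iff_q_eq iI a0(1) by blast
  then show ?thesis using block_of_in[OF iI(3)] a0(4) by simp
qed

lemma block_perm_eq:
  assumes gA: "g \<in> AutGr_set q {1..n}" and D: "D \<in> P" and i: "i \<in> D" and ga: "g a i \<noteq> 0"
  shows "block_perm g D = block_of a"
  using block_of_eq[OF block_perm_in[OF D gA] block_perm_mem[OF gA D i ga]] by simp

lemma inj_on_block_perm:
  assumes gA: "g \<in> AutGr_set q {1..n}"
  shows "inj_on (block_perm g) P"
proof (rule inj_onI)
  fix D E assume D: "D \<in> P" and E: "E \<in> P" and e: "block_perm g D = block_perm g E"
  obtain h where "compat_aut q {1..n} g h" using AutGr_compat_aut[OF gA] by blast
  then interpret compat_aut q "{1..n}" g h .
  obtain i where i: "i \<in> D" using block_nonempty[OF D] by blast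
  obtain j where j: "j \<in> E" using block_nonempty[OF E] by blast
  obtain a where a: "a \<in> {1..n}" "g a i \<noteq> 0" using col_nonzero block_subset[OF D] i by blast
  obtain b where b: "b \<in> {1..n}" "g b j \<noteq> 0" using col_nonzero block_subset[OF E] j by blast
  have iI: "i \<in> {1..n}" "j \<in> {1..n}" using block_subset[OF D] block_subset[OF E] i j by blast+
  have q: "q a b = q i j" using mc a b iI by (auto simp: qcompat_def)
  show "D = E"
  proof (rule ccontr)
    assume "D \<noteq> E"
    then have "block_of i \<noteq> block_of j" using block_of_eq D E i j by metis
    then have "block_of a \<noteq> block_of b" using same_block_iff_q_eq iI a(1) b(1) q by blast
    then show False using e block_perm_eq[OF gA D i a(2)] block_perm_eq[OF gA E j b(2)] by simp
  qed
qed

lemma block_perm_permutes: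
  assumes gA: "g \<in> AutGr_set q {1..n}"
  shows "block_perm g permutes P"
proof (rule bij_imp_permutes)
  have "block_perm g ` P \<subseteq> P" using block_perm_in gA by blast
  then have "block_perm g ` P = P" using endo_inj_surj[OF finite_blocks _ inj_on_block_perm[OF gA]]
    by blast
  then show "bij_betw (block_perm g) P P" using inj_on_block_perm[OF gA] by (simp add: bij_betw_def)
next
  fix x assume "x \<notin> P" then show "block_perm g x = x" by (simp add: block_perm_def)
qed

lemma AutGr_is_group: "group (AutGr q {1..n})" by (rule AutGr_group[OF finite_atLeastAtMost qpm])

lemma AutGr_matmul_closed:
  "g \<in> AutGr_set q {1..n} \<Longrightarrow> g' \<in> AutGr_set q {1..n} \<Longrightarrow> matmul {1..n} g g' \<in> AutGr_set q {1..n}"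
  using group.subgroup_self[OF AutGr_is_group] by (metis AutGr_carrier AutGr_mult subgroup.m_closed)

lemma matid_AutGr: "matid {1..n} \<in> AutGr_set q {1..n}"
  using group.subgroup_self[OF AutGr_is_group] by (metis AutGr_carrier AutGr_one subgroup.one_closed)

lemma block_perm_Gperm:
  assumes gA: "g \<in> AutGr_set q {1..n}"
  shows "block_perm g \<in> Gperm_set n q P"
proof -
  obtain h where "compat_aut q {1..n} g h" using AutGr_compat_aut[OF gA] by blast
  then interpret compat_aut q "{1..n}" g h .
  have tb: "row_perm i \<in> block_perm g (block_of i)" if i: "i \<in> {1..n}" for i
  proof -
    obtain a where a: "a \<in> {1..n}" "g a i \<noteq> 0" using col_nonzero[OF i] by blast
    have aS: "a \<in> block_perm g (block_of i)" using block_perm_mem[OF gA _ _ a(2)] block_of_in[OF i]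
      by blast
    have r: "\<forall>l\<in>{1..n}. q a l = q (row_perm i) l" using same_row_row_perm[OF a(2)]
      by (simp add: same_row_def)
    have "row_perm i \<in> {1..n}" using row_perm_in[OF i] .
    then show ?thesis using refd block_perm_in[OF _ gA] block_of_in[OF i] aS r
      unfolding refined_by_Bq_def by blast
  qed
  have img: "row_perm ` D = block_perm g D" if D: "D \<in> P" for D
  proof
    show "row_perm ` D \<subseteq> block_perm g D"
    proof
      fix y assume "y \<in> row_perm ` D"
      then obtain x where x: "x \<in> D" "y = row_perm x" by blast
      have "x \<in> {1..n}" using block_subset[OF D] x(1) by blast
      then show "y \<in> block_perm g D" using tb block_of_eq[OF D x(1)] x(2) by metis
    qed
  next
    show "block_perm g D \<subseteq> row_perm ` D"
    proof
      fix y assume y: "y \<in> block_perm g D"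
      have yI: "y \<in> {1..n}" using y block_subset[OF block_perm_in[OF D gA]] by blast
      then obtain x where x: "x \<in> {1..n}" "y = row_perm x"
        using permutes_image[OF row_perm_permutes] by (metis imageE)
      have "y \<in> block_perm g (block_of x)" using tb[OF x(1)] x(2) by simp
      then have "block_perm g (block_of x) = block_perm g D"
        using block_disjoint block_perm_in[OF _ gA] block_of_in[OF x(1)] D y by blast
      then have "block_of x = D" using inj_on_block_perm[OF gA] block_of_in[OF x(1)] D
        by (auto simp: inj_on_def)
      then show "y \<in> row_perm ` D" using x block_of_in[OF x(1)] by auto
    qed
  qed
  show ?thesis
  proof (rule GpermI[where \<tau> = row_perm])
    show "card (block_perm g D) = card D" if "D \<in> P" for D
      using img[OF that] card_image[OF inj_on_subset[OF inj_on_row_perm block_subset[OF that]]]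
      by simp
  qed (use block_perm_permutes[OF gA] row_perm_permutes img q_row_perm in auto)
qed

lemma block_perm_matmul:
  assumes gA: "g \<in> AutGr_set q {1..n}" and gA': "g' \<in> AutGr_set q {1..n}"
  shows "block_perm (matmul {1..n} g g') = block_perm g \<circ> block_perm g'"
proof
  fix D
  show "block_perm (matmul {1..n} g g') D = (block_perm g \<circ> block_perm g') D"
  proof (cases "D \<in> P")
    case False then show ?thesis by (simp add: block_perm_def)
  next
    case D: True
    have gg: "matmul {1..n} g g' \<in> AutGr_set q {1..n}" by (rule AutGr_matmul_closed[OF gA gA'])
    obtain h where "compat_aut q {1..n} (matmul {1..n} g g') h" using AutGr_compat_aut[OF gg] by blast
    then interpret G2: compat_aut q "{1..n}" "matmul {1..n} g g'" h .
    obtain i where i: "i \<in> D" using block_nonempty[OF D] by blast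
    obtain b where b: "b \<in> {1..n}" "matmul {1..n} g g' b i \<noteq> 0"
      using G2.col_nonzero block_subset[OF D] i by blast
    obtain c where c: "c \<in> {1..n}" "g b c \<noteq> 0" "g' c i \<noteq> 0"
      using b by (auto simp: matmul_def split: if_splits intro: sum.not_neutral_contains_not_neutral)
    have "c \<in> block_perm g' D" by (rule block_perm_mem[OF gA' D i c(3)])
    then have "b \<in> block_perm g (block_perm g' D)"
      using block_perm_mem[OF gA block_perm_in[OF D gA'] _ c(2)] by blast
    moreover have "b \<in> block_perm (matmul {1..n} g g') D" by (rule block_perm_mem[OF gg D i b(2)])
    ultimately show ?thesis using block_disjoint block_perm_in D gA gA' gg by (metis comp_apply)
  qed
qed

lemma block_perm_matid: "block_perm (matid {1..n}) = id"
proof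
  fix D
  show "block_perm (matid {1..n}) D = id D"
  proof (cases "D \<in> P")
    case False then show ?thesis by (simp add: block_perm_def)
  next
    case D: True
    obtain i where i: "i \<in> D" using block_nonempty[OF D] by blast
    have "matid {1..n} i i \<noteq> (0::'k)" using block_subset[OF D] i by (auto simp: matid_def)
    then have "i \<in> block_perm (matid {1..n}) D" using block_perm_mem[OF matid_AutGr D i] by blast
    then show ?thesis using block_disjoint block_perm_in[OF D matid_AutGr] D i by auto
  qed
qed

lemma block_perm_hom: "block_perm \<in> hom (AutGr q {1..n}) (Gperm n q P)"
  unfolding hom_def using block_perm_Gperm block_perm_matmul
  by (auto simp: AutGr_carrier Gperm_carrier AutGr_mult Gperm_mult)

lemma block_perm_group_hom: "group_hom (AutGr q {1..n}) (Gperm n q P) block_perm"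
  using AutGr_is_group Gperm_group block_perm_hom by (simp add: group_hom_def group_hom_axioms_def)

subsection \<open>Lifting block permutations to automorphisms\<close>

definition perm_mat :: "(nat \<Rightarrow> nat) \<Rightarrow> nat \<Rightarrow> nat \<Rightarrow> 'k" where
  "perm_mat \<tau> = (\<lambda>a b. if b \<in> {1..n} \<and> a = \<tau> b then 1 else 0)"

lemma matmul_perm_mat:
  assumes t: "\<tau> ` {1..n} \<subseteq> {1..n}" and t': "\<tau>' ` {1..n} \<subseteq> {1..n}"
  shows "matmul {1..n} (perm_mat \<tau>) (perm_mat \<tau>') = perm_mat (\<tau> \<circ> \<tau>')"
proof (intro ext)
  fix a b
  show "matmul {1..n} (perm_mat \<tau>) (perm_mat \<tau>') a b = perm_mat (\<tau> \<circ> \<tau>') a b"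
  proof (cases "a \<in> {1..n} \<and> b \<in> {1..n}")
    case True
    then have tb: "\<tau>' b \<in> {1..n}" using t' by blast
    have "matmul {1..n} (perm_mat \<tau>) (perm_mat \<tau>') a b = (\<Sum>c\<in>{1..n}. perm_mat \<tau> a c * perm_mat \<tau>' c b)"
      using True by (simp add: matmul_def)
    also have "\<dots> = (\<Sum>c\<in>{1..n}. if c = \<tau>' b then (if a = \<tau> c then 1 else 0) else 0)"
      by (intro sum.cong refl) (use True in \<open>auto simp: perm_mat_def\<close>)
    also have "\<dots> = (if a = \<tau> (\<tau>' b) then 1 else 0)" using tb by (simp add: sum.delta')
    finally show ?thesis using True by (simp add: perm_mat_def)
  next
    case False
    show ?thesis
    proof (cases "b \<in> {1..n}")
      case True
      then have "a \<notin> {1..n}" using False by simp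
      moreover have "\<tau> (\<tau>' b) \<in> {1..n}" using t t' True by blast
      ultimately show ?thesis using False by (auto simp: matmul_def perm_mat_def)
    next
      case False then show ?thesis by (auto simp: matmul_def perm_mat_def)
    qed
  qed
qed

lemma perm_mat_id: "perm_mat id = matid {1..n}"
  by (auto simp: perm_mat_def matid_def fun_eq_iff)

lemma perm_mat_cong: "(\<And>i. i \<in> {1..n} \<Longrightarrow> \<tau> i = \<tau>' i) \<Longrightarrow> perm_mat \<tau> = perm_mat \<tau>'"
  by (auto simp: perm_mat_def fun_eq_iff)

lemma perm_mat_AutGr:
  assumes p: "\<tau> permutes {1..n}" and qq: "\<And>i j. i \<in> {1..n} \<Longrightarrow> j \<in> {1..n} \<Longrightarrow> q (\<tau> i) (\<tau> j) = q i j"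
  shows "perm_mat \<tau> \<in> AutGr_set q {1..n}"
proof -
  have ip: "Hilbert_Choice.inv \<tau> permutes {1..n}" by (rule permutes_inv[OF p])
  have im: "\<tau> ` {1..n} \<subseteq> {1..n}" "Hilbert_Choice.inv \<tau> ` {1..n} \<subseteq> {1..n}"
    using permutes_image[OF p] permutes_image[OF ip] by auto
  have s1: "mat_on {1..n} (perm_mat \<tau>)" "mat_on {1..n} (perm_mat (Hilbert_Choice.inv \<tau>))"
    using im unfolding mat_on_def perm_mat_def image_subset_iff by (auto simp del: atLeastAtMost_iff)
  have e1: "matmul {1..n} (perm_mat \<tau>) (perm_mat (Hilbert_Choice.inv \<tau>)) = matid {1..n}"
    using matmul_perm_mat[OF im(1) im(2)] permutes_inv_o(1)[OF p] perm_mat_id by simp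
  have e2: "matmul {1..n} (perm_mat (Hilbert_Choice.inv \<tau>)) (perm_mat \<tau>) = matid {1..n}"
    using matmul_perm_mat[OF im(2) im(1)] permutes_inv_o(2)[OF p] perm_mat_id by simp
  have "inverse_pair {1..n} (perm_mat \<tau>) (perm_mat (Hilbert_Choice.inv \<tau>))"
    unfolding inverse_pair_def using s1 e1 e2 by blast
  moreover have "qcompat q {1..n} (perm_mat \<tau>)"
    unfolding qcompat_def using qq by (auto simp: perm_mat_def)
  ultimately show ?thesis using AutGr_set_iff[OF finite_atLeastAtMost qpm] by blast
qed

lemma block_perm_perm_mat:
  assumes p: "\<tau> permutes {1..n}" and qq: "\<And>i j. i \<in> {1..n} \<Longrightarrow> j \<in> {1..n} \<Longrightarrow> q (\<tau> i) (\<tau> j) = q i j"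
    and s: "\<sigma> permutes P" and maps_blocks: "\<And>D i. D \<in> P \<Longrightarrow> i \<in> D \<Longrightarrow> \<tau> i \<in> \<sigma> D"
  shows "block_perm (perm_mat \<tau>) = \<sigma>"
proof
  fix D
  show "block_perm (perm_mat \<tau>) D = \<sigma> D"
  proof (cases "D \<in> P")
    case False then show ?thesis using s by (simp add: block_perm_def permutes_not_in)
  next
    case D: True
    obtain i where i: "i \<in> D" using block_nonempty[OF D] by blast
    have "perm_mat \<tau> (\<tau> i) i \<noteq> 0" using block_subset[OF D] i by (auto simp: perm_mat_def)
    then have "\<tau> i \<in> block_perm (perm_mat \<tau>) D" using block_perm_mem[OF perm_mat_AutGr[OF p qq] D i]
      by blast
    moreover have "\<tau> i \<in> \<sigma> D" by (rule maps_blocks[OF D i])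
    moreover have "\<sigma> D \<in> P" using s D by (simp add: permutes_in_image)
    ultimately show ?thesis using block_disjoint block_perm_in[OF D perm_mat_AutGr[OF p qq]] by blast
  qed
qed

definition block_orbit :: "nat set \<Rightarrow> nat set set" where
  "block_orbit D = {\<sigma> D | \<sigma>. \<sigma> \<in> Gperm_set n q P}"

definition orbit_rep :: "nat set \<Rightarrow> nat set" where
  "orbit_rep D = (SOME E. E \<in> block_orbit D)"

lemma block_orbit_self: "D \<in> block_orbit D"
proof -
  have "D = id D" by simp
  then show ?thesis using Gperm_id unfolding block_orbit_def by blast
qed

lemma block_orbit_act:
  assumes r: "\<rho> \<in> Gperm_set n q P" shows "block_orbit (\<rho> D) = block_orbit D"
proof
  show "block_orbit (\<rho> D) \<subseteq> block_orbit D"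
  proof
    fix E assume "E \<in> block_orbit (\<rho> D)"
    then obtain \<sigma> where s: "\<sigma> \<in> Gperm_set n q P" "E = \<sigma> (\<rho> D)" unfolding block_orbit_def by blast
    have "E = (\<sigma> \<circ> \<rho>) D" using s by simp
    then show "E \<in> block_orbit D" unfolding block_orbit_def using Gperm_comp[OF s(1) r] by blast
  qed
next
  have r': "Hilbert_Choice.inv \<rho> \<in> Gperm_set n q P" "Hilbert_Choice.inv \<rho> \<circ> \<rho> = id"
    using Gperm_inv[OF r] permutes_inv_o(2)[OF Gperm_permutes[OF r]] by simp_all
  show "block_orbit D \<subseteq> block_orbit (\<rho> D)"
  proof
    fix E assume "E \<in> block_orbit D"
    then obtain \<sigma> where s: "\<sigma> \<in> Gperm_set n q P" "E = \<sigma> D" by (auto simp: block_orbit_def)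
    have "E = (\<sigma> \<circ> Hilbert_Choice.inv \<rho>) (\<rho> D)" using s r'(2) by (metis comp_apply id_apply)
    then show "E \<in> block_orbit (\<rho> D)" unfolding block_orbit_def using Gperm_comp[OF s(1) r'(1)]
      by blast
  qed
qed

lemma orbit_rep_in: "orbit_rep D \<in> block_orbit D"
  unfolding orbit_rep_def using block_orbit_self by (rule someI)

lemma orbit_rep_act: "\<rho> \<in> Gperm_set n q P \<Longrightarrow> orbit_rep (\<rho> D) = orbit_rep D"
  by (simp add: orbit_rep_def block_orbit_act)

definition rep_iso :: "nat set \<Rightarrow> nat \<Rightarrow> nat" where
  "rep_iso D = (SOME f. bij_betw f (orbit_rep D) D
    \<and> (\<forall>x\<in>orbit_rep D. \<forall>y\<in>orbit_rep D. q (f x) (f y) = q x y))"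

lemma rep_iso_bij:
  assumes D: "D \<in> P"
  shows "bij_betw (rep_iso D) (orbit_rep D) D
    \<and> (\<forall>x\<in>orbit_rep D. \<forall>y\<in>orbit_rep D. q (rep_iso D x) (rep_iso D y) = q x y)"
proof -
  obtain \<sigma>0 where s0: "\<sigma>0 \<in> Gperm_set n q P" "orbit_rep D = \<sigma>0 D" using orbit_rep_in
    unfolding block_orbit_def by blast
  obtain \<tau> where t: "\<tau> permutes {1..n}" "\<And>D. D \<in> P \<Longrightarrow> \<tau> ` D = \<sigma>0 D"
    "\<And>i j. i \<in> {1..n} \<Longrightarrow> j \<in> {1..n} \<Longrightarrow> q (\<tau> i) (\<tau> j) = q i j"
    using GpermE[OF s0(1)] by metis
  have injD: "inj_on \<tau> D" by (rule permutes_inj_on[OF t(1)])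
  have b: "bij_betw \<tau> D (orbit_rep D)" using injD t(2)[OF D] s0(2) by (simp add: bij_betw_def)
  define f where "f = inv_into D \<tau>"
  have bf: "bij_betw f (orbit_rep D) D" unfolding f_def by (rule bij_betw_inv_into[OF b])
  have qf: "\<forall>x\<in>orbit_rep D. \<forall>y\<in>orbit_rep D. q (f x) (f y) = q x y"
  proof (intro ballI)
    fix x y assume x: "x \<in> orbit_rep D" and y: "y \<in> orbit_rep D"
    have fx: "f x \<in> D" "f y \<in> D" using bf x y by (auto simp: bij_betw_def)
    have "q (\<tau> (f x)) (\<tau> (f y)) = q (f x) (f y)" using t(3) fx block_subset[OF D] by blast
    moreover have "\<tau> (f x) = x" "\<tau> (f y) = y" using b x y unfolding f_def
      by (auto simp: bij_betw_def f_inv_into_f)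
    ultimately show "q (f x) (f y) = q x y" by simp
  qed
  have ex: "\<exists>f. bij_betw f (orbit_rep D) D \<and> (\<forall>x\<in>orbit_rep D. \<forall>y\<in>orbit_rep D. q (f x) (f y) = q x y)"
    using bf qf by blast
  show ?thesis unfolding rep_iso_def by (rule someI_ex[OF ex])
qed

definition to_rep :: "nat set \<Rightarrow> nat \<Rightarrow> nat" where
  "to_rep D = inv_into (orbit_rep D) (rep_iso D)"

lemma to_rep_bij: "D \<in> P \<Longrightarrow> bij_betw (to_rep D) D (orbit_rep D)"
  unfolding to_rep_def using rep_iso_bij bij_betw_inv_into by blast

lemma rep_iso_to_rep: "D \<in> P \<Longrightarrow> i \<in> D \<Longrightarrow> rep_iso D (to_rep D i) = i"
  unfolding to_rep_def using rep_iso_bij by (metis bij_betw_def f_inv_into_f)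

text \<open>lift_perm \<sigma> moves the block D onto \<sigma> D by way of the representative of their common
  orbit.  As the identifications with the representative do not depend on \<sigma>, the lift is
  multiplicative in \<sigma> (lemma lift_perm_comp).\<close>

definition lift_perm :: "(nat set \<Rightarrow> nat set) \<Rightarrow> nat \<Rightarrow> nat" where
  "lift_perm \<sigma> i = (if i \<in> {1..n} then rep_iso (\<sigma> (block_of i)) (to_rep (block_of i) i) else i)"

lemma lift_perm_in:
  assumes s: "\<sigma> \<in> Gperm_set n q P" and D: "D \<in> P" and i: "i \<in> D"
  shows "lift_perm \<sigma> i \<in> \<sigma> D"
proof -
  have iI: "i \<in> {1..n}" using block_subset[OF D] i by blast
  have k: "to_rep D i \<in> orbit_rep (\<sigma> D)" using to_rep_bij[OF D] i orbit_rep_act[OF s]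
    by (auto simp: bij_betw_def)
  have "rep_iso (\<sigma> D) (to_rep D i) \<in> \<sigma> D" using rep_iso_bij[OF Gperm_block[OF s D]] k
    by (auto simp: bij_betw_def)
  then show ?thesis using iI block_of_eq[OF D i] by (simp add: lift_perm_def)
qed

lemma lift_perm_range: "\<sigma> \<in> Gperm_set n q P \<Longrightarrow> i \<in> {1..n} \<Longrightarrow> lift_perm \<sigma> i \<in> {1..n}"
  using lift_perm_in block_of_in block_subset Gperm_block by blast

lemma inj_on_lift_perm:
  assumes s: "\<sigma> \<in> Gperm_set n q P"
  shows "inj_on (lift_perm \<sigma>) {1..n}"
proof (rule inj_onI)
  fix i j assume i: "i \<in> {1..n}" and j: "j \<in> {1..n}" and e: "lift_perm \<sigma> i = lift_perm \<sigma> j"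
  have Di: "block_of i \<in> P" "i \<in> block_of i" and Dj: "block_of j \<in> P" "j \<in> block_of j"
    using block_of_in i j by auto
  have "lift_perm \<sigma> i \<in> \<sigma> (block_of i)" "lift_perm \<sigma> j \<in> \<sigma> (block_of j)"
    using lift_perm_in[OF s] Di Dj by auto
  then have "\<sigma> (block_of i) = \<sigma> (block_of j)" using e block_disjoint Gperm_block[OF s] Di Dj by metis
  then have bij: "block_of i = block_of j" using GpermE[OF s] permutes_inj by (metis injD)
  define D where "D = block_of i"
  have D: "D \<in> P" "i \<in> D" "j \<in> D" using Di Dj bij by (auto simp: D_def)
  have ki: "to_rep D i \<in> orbit_rep D" "to_rep D j \<in> orbit_rep D" using to_rep_bij[OF D(1)] D
    by (auto simp: bij_betw_def)
  have "rep_iso (\<sigma> D) (to_rep D i) = rep_iso (\<sigma> D) (to_rep D j)" using e i j bij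
    by (simp add: lift_perm_def D_def)
  moreover have "inj_on (rep_iso (\<sigma> D)) (orbit_rep D)"
    using rep_iso_bij[OF Gperm_block[OF s D(1)]] orbit_rep_act[OF s] by (simp add: bij_betw_def)
  ultimately have "to_rep D i = to_rep D j" using ki by (auto simp: inj_on_def)
  then show "i = j" using to_rep_bij[OF D(1)] D by (auto simp: bij_betw_def inj_on_def)
qed

lemma lift_perm_permutes:
  assumes s: "\<sigma> \<in> Gperm_set n q P"
  shows "lift_perm \<sigma> permutes {1..n}"
proof (rule bij_imp_permutes)
  have "lift_perm \<sigma> ` {1..n} \<subseteq> {1..n}" using lift_perm_range[OF s] by blast
  then have "lift_perm \<sigma> ` {1..n} = {1..n}" using endo_inj_surj[OF finite_atLeastAtMost _ inj_on_lift_perm[OF s]]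
    by blast
  then show "bij_betw (lift_perm \<sigma>) {1..n} {1..n}" using inj_on_lift_perm[OF s]
    by (simp add: bij_betw_def)
next
  fix x assume "x \<notin> {1..n}" then show "lift_perm \<sigma> x = x" unfolding lift_perm_def by (rule if_not_P)
qed

lemma q_lift_perm:
  assumes s: "\<sigma> \<in> Gperm_set n q P" and i: "i \<in> {1..n}" and j: "j \<in> {1..n}"
  shows "q (lift_perm \<sigma> i) (lift_perm \<sigma> j) = q i j"
proof (cases "block_of i = block_of j")
  case True
  define D where "D = block_of i"
  have D: "D \<in> P" "i \<in> D" "j \<in> D" using block_of_in i j True by (auto simp: D_def)
  have ki: "to_rep D i \<in> orbit_rep D" "to_rep D j \<in> orbit_rep D" using to_rep_bij[OF D(1)] D
    by (auto simp: bij_betw_def)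
  have "q (lift_perm \<sigma> i) (lift_perm \<sigma> j) = q (rep_iso (\<sigma> D) (to_rep D i)) (rep_iso (\<sigma> D) (to_rep D j))"
    using i j True by (simp add: lift_perm_def D_def)
  also have "\<dots> = q (to_rep D i) (to_rep D j)"
    using rep_iso_bij[OF Gperm_block[OF s D(1)]] orbit_rep_act[OF s] ki by simp
  also have "\<dots> = q (rep_iso D (to_rep D i)) (rep_iso D (to_rep D j))" using rep_iso_bij[OF D(1)] ki
    by simp
  also have "\<dots> = q i j" using rep_iso_to_rep[OF D(1)] D by simp
  finally show ?thesis .
next
  case False
  obtain \<tau> where t: "\<sigma> permutes P" "\<tau> permutes {1..n}" "\<And>D. D \<in> P \<Longrightarrow> \<tau> ` D = \<sigma> D"
    "\<And>i j. i \<in> {1..n} \<Longrightarrow> j \<in> {1..n} \<Longrightarrow> q (\<tau> i) (\<tau> j) = q i j"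
    using GpermE[OF s] by metis
  have Di: "block_of i \<in> P" "i \<in> block_of i" and Dj: "block_of j \<in> P" "j \<in> block_of j"
    using block_of_in i j by auto
  have ne: "\<sigma> (block_of i) \<noteq> \<sigma> (block_of j)" using False permutes_inj[OF t(1)] by (metis injD)
  obtain c where c: "\<forall>x\<in>\<sigma> (block_of i). \<forall>y\<in>\<sigma> (block_of j). q x y = c"
    using cst Gperm_block[OF s Di(1)] Gperm_block[OF s Dj(1)] ne by blast
  have "\<tau> i \<in> \<sigma> (block_of i)" "\<tau> j \<in> \<sigma> (block_of j)" using t(3) Di Dj by blast+
  then have "q (\<tau> i) (\<tau> j) = c" using c by blast
  moreover have "q (lift_perm \<sigma> i) (lift_perm \<sigma> j) = c" using c lift_perm_in[OF s] Di Dj by blast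
  ultimately show ?thesis using t(4)[OF i j] by simp
qed

lemma lift_perm_comp:
  assumes r: "\<rho> \<in> Gperm_set n q P" and i: "i \<in> {1..n}"
  shows "lift_perm (\<sigma> \<circ> \<rho>) i = lift_perm \<sigma> (lift_perm \<rho> i)"
proof -
  define D where "D = block_of i"
  have D: "D \<in> P" "i \<in> D" using block_of_in i by (auto simp: D_def)
  have ri: "lift_perm \<rho> i \<in> \<rho> D" by (rule lift_perm_in[OF r D])
  have rD: "\<rho> D \<in> P" by (rule Gperm_block[OF r D(1)])
  have ri': "lift_perm \<rho> i \<in> {1..n}" using ri block_subset[OF rD] by blast
  have bri: "block_of (lift_perm \<rho> i) = \<rho> D" by (rule block_of_eq[OF rD ri])
  have k: "to_rep D i \<in> orbit_rep (\<rho> D)" using to_rep_bij[OF D(1)] D(2) orbit_rep_act[OF r]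
    by (auto simp: bij_betw_def)
  have "to_rep (\<rho> D) (lift_perm \<rho> i) = to_rep (\<rho> D) (rep_iso (\<rho> D) (to_rep D i))"
    using i by (simp add: lift_perm_def D_def)
  also have "\<dots> = to_rep D i"
  proof -
    have "inj_on (rep_iso (\<rho> D)) (orbit_rep (\<rho> D))" using rep_iso_bij[OF rD]
      by (simp add: bij_betw_def)
    then show ?thesis unfolding to_rep_def[of "\<rho> D"] using k by (rule inv_into_f_f)
  qed
  finally have kk: "to_rep (\<rho> D) (lift_perm \<rho> i) = to_rep D i" .
  show ?thesis using i ri' bri kk by (simp add: lift_perm_def D_def)
qed

definition block_section :: "(nat set \<Rightarrow> nat set) \<Rightarrow> nat \<Rightarrow> nat \<Rightarrow> 'k" where
  "block_section \<sigma> = perm_mat (lift_perm \<sigma>)"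

lemma block_section_AutGr: "\<sigma> \<in> Gperm_set n q P \<Longrightarrow> block_section \<sigma> \<in> AutGr_set q {1..n}"
  unfolding block_section_def using perm_mat_AutGr lift_perm_permutes q_lift_perm by blast

lemma block_perm_block_section: "\<sigma> \<in> Gperm_set n q P \<Longrightarrow> block_perm (block_section \<sigma>) = \<sigma>"
  unfolding block_section_def
  using block_perm_perm_mat lift_perm_permutes q_lift_perm lift_perm_in GpermE by metis

lemma block_section_comp:
  assumes s: "\<sigma> \<in> Gperm_set n q P" and r: "\<rho> \<in> Gperm_set n q P"
  shows "block_section (\<sigma> \<circ> \<rho>) = matmul {1..n} (block_section \<sigma>) (block_section \<rho>)"
proof -
  have im: "lift_perm \<sigma> ` {1..n} \<subseteq> {1..n}" "lift_perm \<rho> ` {1..n} \<subseteq> {1..n}" using lift_perm_range s r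
    by blast+
  have "block_section (\<sigma> \<circ> \<rho>) = perm_mat (lift_perm \<sigma> \<circ> lift_perm \<rho>)"
    unfolding block_section_def by (rule perm_mat_cong) (simp add: lift_perm_comp[OF r])
  also have "\<dots> = matmul {1..n} (block_section \<sigma>) (block_section \<rho>)" unfolding block_section_def
    by (rule matmul_perm_mat[OF im, symmetric])
  finally show ?thesis .
qed

subsection \<open>Block-diagonal automorphisms\<close>

definition block_diag :: "(nat \<Rightarrow> nat \<Rightarrow> 'k) set" where
  "block_diag = {g \<in> AutGr_set q {1..n}. block_perm g = id}"

definition restrict_blocks :: "(nat \<Rightarrow> nat \<Rightarrow> 'k) \<Rightarrow> nat set \<Rightarrow> nat \<Rightarrow> nat \<Rightarrow> 'k" where
  "restrict_blocks g = (\<lambda>D\<in>P. (\<lambda>a b. if a \<in> D \<and> b \<in> D then g a b else 0))"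

lemma block_diag_entry:
  assumes g: "g \<in> block_diag" and ga: "g a i \<noteq> 0"
  shows "i \<in> {1..n}" "a \<in> block_of i"
proof -
  have gA: "g \<in> AutGr_set q {1..n}" and s: "block_perm g = id" using g by (auto simp: block_diag_def)
  show i: "i \<in> {1..n}" using AutGr_mat_on[OF gA] ga by (auto simp: mat_on_def)
  have "a \<in> block_perm g (block_of i)" using block_perm_mem[OF gA _ _ ga] block_of_in[OF i] by blast
  then show "a \<in> block_of i" using s by simp
qed

lemma block_diag_inverse:
  assumes g: "g \<in> block_diag"
  obtains h where "inverse_pair {1..n} g h" "h \<in> block_diag"
proof -
  have gA: "g \<in> AutGr_set q {1..n}" and s: "block_perm g = id" using g by (auto simp: block_diag_def)
  obtain h where ip: "inverse_pair {1..n} g h" and mc: "qcompat q {1..n} g"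
    using gA AutGr_set_iff[OF finite_atLeastAtMost qpm] by blast
  have mh: "qcompat q {1..n} h" by (rule qcompat_inverse[OF finite_atLeastAtMost qpm ip mc])
  have hA: "h \<in> AutGr_set q {1..n}" using inverse_pair_sym[OF ip] mh AutGr_set_iff[OF finite_atLeastAtMost qpm]
    by blast
  have "block_perm h = block_perm h \<circ> block_perm g" using s by simp
  also have "\<dots> = block_perm (matmul {1..n} h g)" by (rule block_perm_matmul[OF hA gA, symmetric])
  also have "matmul {1..n} h g = matid {1..n}" using ip by (simp add: inverse_pair_def)
  finally have "block_perm h = block_perm (matid {1..n})" .
  from this block_perm_matid have "block_perm h = id" by (rule trans)
  then show ?thesis using that ip hA by (auto simp: block_diag_def)
qed

lemma restrict_blocks_matmul:
  assumes g: "g \<in> block_diag" and g': "g' \<in> block_diag" and D: "D \<in> P"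
  shows "matmul D (restrict_blocks g D) (restrict_blocks g' D) = restrict_blocks (matmul {1..n} g g') D"
proof (intro ext)
  fix a b
  show "matmul D (restrict_blocks g D) (restrict_blocks g' D) a b
      = restrict_blocks (matmul {1..n} g g') D a b"
  proof (cases "a \<in> D \<and> b \<in> D")
    case True
    have sub: "D \<subseteq> {1..n}" by (rule block_subset[OF D])
    have "matmul D (restrict_blocks g D) (restrict_blocks g' D) a b = (\<Sum>c\<in>D. g a c * g' c b)"
      using True D by (simp add: matmul_def restrict_blocks_def)
    also have "\<dots> = (\<Sum>c\<in>{1..n}. g a c * g' c b)"
    proof (rule sum.mono_neutral_left[OF finite_atLeastAtMost sub], intro ballI)
      fix c assume c: "c \<in> {1..n} - D"
      show "g a c * g' c b = 0"
      proof (rule ccontr)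
        assume "g a c * g' c b \<noteq> 0"
        then have "g' c b \<noteq> 0" by auto
        then have "c \<in> block_of b" using block_diag_entry[OF g'] by blast
        then show False using block_of_eq[OF D] True c by auto
      qed
    qed
    also have "\<dots> = restrict_blocks (matmul {1..n} g g') D a b"
      using True D sub by (auto simp: matmul_def restrict_blocks_def)
    finally show ?thesis .
  next
    case False then show ?thesis using D by (auto simp: matmul_def restrict_blocks_def)
  qed
qed

lemma qpm_block: assumes D: "D \<in> P" shows "qpm D q"
proof -
  have s: "D \<subseteq> {1..n}" by (rule block_subset[OF D])
  show ?thesis using qpm s unfolding qpm_def by blast
qed

lemma finite_block: "D \<in> P \<Longrightarrow> finite D"
  by (rule finite_subset[OF block_subset]) simp_all

lemma restrict_blocks_AutGr:
  assumes g: "g \<in> block_diag" and D: "D \<in> P"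
  shows "restrict_blocks g D \<in> AutGr_set q D"
proof -
  obtain h where ip: "inverse_pair {1..n} g h" and h: "h \<in> block_diag"
    by (rule block_diag_inverse[OF g])
  have gA: "g \<in> AutGr_set q {1..n}" using g by (simp add: block_diag_def)
  have mc: "qcompat q {1..n} g" using gA AutGr_set_iff[OF finite_atLeastAtMost qpm] by blast
  have e1: "matmul D (restrict_blocks g D) (restrict_blocks h D) = matid D"
    using restrict_blocks_matmul[OF g h D] ip D block_subset[OF D]
    by (auto simp: inverse_pair_def restrict_blocks_def matid_def fun_eq_iff)
  have e2: "matmul D (restrict_blocks h D) (restrict_blocks g D) = matid D"
    using restrict_blocks_matmul[OF h g D] ip D block_subset[OF D]
    by (auto simp: inverse_pair_def restrict_blocks_def matid_def fun_eq_iff)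
  have "inverse_pair D (restrict_blocks g D) (restrict_blocks h D)"
    using e1 e2 D by (simp add: inverse_pair_def mat_on_def restrict_blocks_def)
  moreover have "qcompat q D (restrict_blocks g D)" unfolding qcompat_def
  proof (intro ballI impI)
    fix i j a b assume ij: "i \<in> D" "j \<in> D" "a \<in> D" "b \<in> D"
      and n1: "restrict_blocks g D a i \<noteq> 0" and n2: "restrict_blocks g D b j \<noteq> 0"
    have "g a i \<noteq> 0" "g b j \<noteq> 0" using n1 n2 ij D by (auto simp: restrict_blocks_def)
    moreover have "i \<in> {1..n}" "j \<in> {1..n}" "a \<in> {1..n}" "b \<in> {1..n}" using ij block_subset[OF D]
      by blast+
    ultimately show "q a b = q i j" using mc unfolding qcompat_def by blast
  qed
  ultimately show ?thesis using AutGr_set_iff[OF finite_block[OF D] qpm_block[OF D]] by blast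
qed

lemma inj_on_restrict_blocks: "inj_on restrict_blocks block_diag"
proof (rule inj_onI)
  fix g g' assume g: "g \<in> block_diag" and g': "g' \<in> block_diag"
    and e: "restrict_blocks g = restrict_blocks g'"
  have gA: "g \<in> AutGr_set q {1..n}" "g' \<in> AutGr_set q {1..n}" using g g'
    by (auto simp: block_diag_def)
  show "g = g'"
  proof (intro ext)
    fix a b
    show "g a b = g' a b"
    proof (cases "b \<in> {1..n} \<and> a \<in> block_of b")
      case True
      then have D: "block_of b \<in> P" "b \<in> block_of b" using block_of_in by auto
      have "restrict_blocks g (block_of b) a b = restrict_blocks g' (block_of b) a b" using e by simp
      then show ?thesis using True D by (simp add: restrict_blocks_def)
    next
      case False
      then have "g a b = 0" "g' a b = 0" using block_diag_entry[OF g] block_diag_entry[OF g']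
        by blast+
      then show ?thesis by simp
    qed
  qed
qed

definition glue_blocks :: "(nat set \<Rightarrow> nat \<Rightarrow> nat \<Rightarrow> 'k) \<Rightarrow> nat \<Rightarrow> nat \<Rightarrow> 'k" where
  "glue_blocks f = (\<lambda>a b. if a \<in> {1..n} \<and> b \<in> {1..n} \<and> block_of a = block_of b then f (block_of b) a b else 0)"

lemma matmul_glue_blocks:
  "matmul {1..n} (glue_blocks f) (glue_blocks f') = glue_blocks (\<lambda>D. matmul D (f D) (f' D))"
proof (intro ext)
  fix a b
  show "matmul {1..n} (glue_blocks f) (glue_blocks f') a b = glue_blocks (\<lambda>D. matmul D (f D) (f' D)) a b"
  proof (cases "a \<in> {1..n} \<and> b \<in> {1..n}")
    case False then show ?thesis by (auto simp: matmul_def glue_blocks_def)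
  next
    case True
    have Db: "block_of b \<in> P" "b \<in> block_of b" using block_of_in True by auto
    have sub: "block_of b \<subseteq> {1..n}" by (rule block_subset[OF Db(1)])
    have "matmul {1..n} (glue_blocks f) (glue_blocks f') a b
        = (\<Sum>c\<in>{1..n}. glue_blocks f a c * glue_blocks f' c b)"
      using True by (simp add: matmul_def)
    also have "\<dots> = (\<Sum>c\<in>block_of b. glue_blocks f a c * glue_blocks f' c b)"
    proof (rule sum.mono_neutral_right[OF finite_atLeastAtMost sub], intro ballI)
      fix c assume c: "c \<in> {1..n} - block_of b"
      have "block_of c \<noteq> block_of b" using c block_of_in by auto
      then show "glue_blocks f a c * glue_blocks f' c b = 0" by (simp add: glue_blocks_def)
    qed
    also have "\<dots> = (if block_of a = block_of b then (\<Sum>c\<in>block_of b. f (block_of b) a c * f' (block_of b) c b) else 0)"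
    proof (cases "block_of a = block_of b")
      case True
      have "(\<Sum>c\<in>block_of b. glue_blocks f a c * glue_blocks f' c b)
          = (\<Sum>c\<in>block_of b. f (block_of b) a c * f' (block_of b) c b)"
      proof (intro sum.cong refl)
        fix c assume c: "c \<in> block_of b"
        have "block_of c = block_of b" using block_of_eq[OF Db(1) c] .
        then show "glue_blocks f a c * glue_blocks f' c b = f (block_of b) a c * f' (block_of b) c b"
          using True \<open>a \<in> {1..n} \<and> b \<in> {1..n}\<close> c sub by (auto simp: glue_blocks_def)
      qed
      then show ?thesis using True by simp
    next
      case False
      have "(\<Sum>c\<in>block_of b. glue_blocks f a c * glue_blocks f' c b) = 0"
      proof (intro sum.neutral ballI)
        fix c assume c: "c \<in> block_of b"
        have "block_of c = block_of b" using block_of_eq[OF Db(1) c] .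
        then show "glue_blocks f a c * glue_blocks f' c b = 0" using False
          by (simp add: glue_blocks_def)
      qed
      then show ?thesis using False by simp
    qed
    also have "\<dots> = glue_blocks (\<lambda>D. matmul D (f D) (f' D)) a b"
    proof (cases "block_of a = block_of b")
      case True
      have "a \<in> block_of b" using True block_of_in \<open>a \<in> {1..n} \<and> b \<in> {1..n}\<close> by metis
      then show ?thesis using True \<open>a \<in> {1..n} \<and> b \<in> {1..n}\<close> Db
        by (simp add: glue_blocks_def matmul_def)
    next
      case False then show ?thesis by (simp add: glue_blocks_def)
    qed
    finally show ?thesis .
  qed
qed

lemma glue_blocks_cong: "(\<And>D. D \<in> P \<Longrightarrow> f D = f' D) \<Longrightarrow> glue_blocks f = glue_blocks f'"
  by (auto simp: glue_blocks_def fun_eq_iff block_of_in)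

lemma glue_blocks_matid: "glue_blocks (\<lambda>D. matid D) = matid {1..n}"
  by (auto simp: glue_blocks_def matid_def fun_eq_iff block_of_in)

lemma glue_blocks_AutGr:
  assumes f: "f \<in> (\<Pi>\<^sub>E D\<in>P. AutGr_set q D)"
  shows "glue_blocks f \<in> AutGr_set q {1..n}"
proof -
  have "\<forall>D\<in>P. \<exists>h. inverse_pair D (f D) h \<and> qcompat q D (f D)"
    using f AutGr_set_iff[OF finite_block qpm_block] by blast
  then obtain hh where hh: "\<And>D. D \<in> P \<Longrightarrow> inverse_pair D (f D) (hh D) \<and> qcompat q D (f D)" by metis
  have "glue_blocks (\<lambda>D. matmul D (f D) (hh D)) = glue_blocks (\<lambda>D. matid D)"
    and "glue_blocks (\<lambda>D. matmul D (hh D) (f D)) = glue_blocks (\<lambda>D. matid D)"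
    by (rule glue_blocks_cong, use hh in \<open>simp add: inverse_pair_def\<close>)+
  then have "inverse_pair {1..n} (glue_blocks f) (glue_blocks hh)"
    using matmul_glue_blocks[of f hh] matmul_glue_blocks[of hh f] glue_blocks_matid
    by (simp add: inverse_pair_def mat_on_def glue_blocks_def)
  moreover have "qcompat q {1..n} (glue_blocks f)"
    unfolding qcompat_def
  proof (intro ballI impI)
    fix i j a b assume ij: "i \<in> {1..n}" "j \<in> {1..n}" "a \<in> {1..n}" "b \<in> {1..n}"
      and ga: "glue_blocks f a i \<noteq> 0" and gb: "glue_blocks f b j \<noteq> 0"
    have bi: "block_of a = block_of i" "block_of b = block_of j"
      using ga gb by (auto simp: glue_blocks_def split: if_splits)
    have Di: "block_of i \<in> P" "i \<in> block_of i" "a \<in> block_of i"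
      and Dj: "block_of j \<in> P" "j \<in> block_of j" "b \<in> block_of j"
      using block_of_in ij bi by metis+
    show "q a b = q i j"
    proof (cases "block_of i = block_of j")
      case True
      have "f (block_of i) a i \<noteq> 0" "f (block_of i) b j \<noteq> 0"
        using ga gb ij bi True by (auto simp: glue_blocks_def)
      then show ?thesis using hh[OF Di(1)] Di Dj True unfolding qcompat_def by metis
    next
      case False
      obtain c where "\<forall>x\<in>block_of i. \<forall>y\<in>block_of j. q x y = c" using cst Di(1) Dj(1) False by blast
      then show ?thesis using Di Dj by metis
    qed
  qed
  ultimately show ?thesis using AutGr_set_iff[OF finite_atLeastAtMost qpm] by blast
qed

lemma block_perm_glue_blocks:
  assumes f: "f \<in> (\<Pi>\<^sub>E D\<in>P. AutGr_set q D)"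
  shows "block_perm (glue_blocks f) = id"
proof
  fix D
  have gA: "glue_blocks f \<in> AutGr_set q {1..n}" by (rule glue_blocks_AutGr[OF f])
  show "block_perm (glue_blocks f) D = id D"
  proof (cases "D \<in> P")
    case False then show ?thesis by (simp add: block_perm_def)
  next
    case D: True
    obtain i where i: "i \<in> D" using block_nonempty[OF D] by blast
    obtain h where "compat_aut q {1..n} (glue_blocks f) h" using AutGr_compat_aut[OF gA] by blast
    then obtain a where a: "a \<in> {1..n}" "glue_blocks f a i \<noteq> 0"
      using compat_aut.col_nonzero block_subset[OF D] i by blast
    have "block_of a = block_of i" using a by (auto simp: glue_blocks_def split: if_splits)
    then have "a \<in> D" using block_of_in[OF a(1)] block_of_eq[OF D i] by simp
    then show ?thesis using block_perm_eq[OF gA D i a(2)] block_of_eq[OF D] by simp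
  qed
qed

lemma glue_blocks_block_diag: "f \<in> (\<Pi>\<^sub>E D\<in>P. AutGr_set q D) \<Longrightarrow> glue_blocks f \<in> block_diag"
  using glue_blocks_AutGr block_perm_glue_blocks by (simp add: block_diag_def)

lemma restrict_glue_blocks:
  assumes f: "f \<in> (\<Pi>\<^sub>E D\<in>P. AutGr_set q D)"
  shows "restrict_blocks (glue_blocks f) = f"
proof
  fix D
  show "restrict_blocks (glue_blocks f) D = f D"
  proof (cases "D \<in> P")
    case False then show ?thesis using f by (simp add: restrict_blocks_def PiE_def extensional_def)
  next
    case D: True
    have "mat_on D (f D)" using f D AutGr_mat_on by blast
    then show ?thesis
      using D block_of_eq[OF D] block_subset[OF D]
      by (auto simp: restrict_blocks_def glue_blocks_def mat_on_def fun_eq_iff)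
  qed
qed

lemma block_diag_eq_kernel: "block_diag = kernel (AutGr q {1..n}) (Gperm n q P) block_perm"
  by (auto simp: block_diag_def kernel_def AutGr_carrier Gperm_one)

lemma block_section_hom: "block_section \<in> hom (Gperm n q P) (AutGr q {1..n})"
  unfolding hom_def using block_section_AutGr block_section_comp
  by (auto simp: AutGr_carrier Gperm_carrier AutGr_mult Gperm_mult)

lemma block_section_group_hom: "group_hom (Gperm n q P) (AutGr q {1..n}) block_section"
  using AutGr_is_group Gperm_group block_section_hom by (simp add: group_hom_def group_hom_axioms_def)

lemma restrict_blocks_iso:
  "restrict_blocks \<in> iso ((AutGr q {1..n})\<lparr>carrier := block_diag\<rparr>) (product_group P (\<lambda>D. AutGr q D))"
proof -
  have "restrict_blocks \<in> hom ((AutGr q {1..n})\<lparr>carrier := block_diag\<rparr>) (product_group P (\<lambda>D. AutGr q D))"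
  proof (rule homI)
    fix g assume "g \<in> carrier ((AutGr q {1..n})\<lparr>carrier := block_diag\<rparr>)"
    then show "restrict_blocks g \<in> carrier (product_group P (\<lambda>D. AutGr q D))"
      using restrict_blocks_AutGr by (auto simp: restrict_blocks_def AutGr_carrier)
  next
    fix g g' assume "g \<in> carrier ((AutGr q {1..n})\<lparr>carrier := block_diag\<rparr>)"
      and "g' \<in> carrier ((AutGr q {1..n})\<lparr>carrier := block_diag\<rparr>)"
    then have g: "g \<in> block_diag" and g': "g' \<in> block_diag" by auto
    show "restrict_blocks (g \<otimes>\<^bsub>(AutGr q {1..n})\<lparr>carrier := block_diag\<rparr>\<^esub> g')
        = restrict_blocks g \<otimes>\<^bsub>product_group P (\<lambda>D. AutGr q D)\<^esub> restrict_blocks g'"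
      using restrict_blocks_matmul[OF g g']
      by (auto simp: AutGr_mult restrict_blocks_def fun_eq_iff)
  qed
  moreover have "bij_betw restrict_blocks block_diag (\<Pi>\<^sub>E D\<in>P. AutGr_set q D)"
    unfolding bij_betw_def
  proof
    show "inj_on restrict_blocks block_diag" by (rule inj_on_restrict_blocks)
    show "restrict_blocks ` block_diag = (\<Pi>\<^sub>E D\<in>P. AutGr_set q D)"
    proof
      show "restrict_blocks ` block_diag \<subseteq> (\<Pi>\<^sub>E D\<in>P. AutGr_set q D)"
        using restrict_blocks_AutGr by (auto simp: restrict_blocks_def)
      show "(\<Pi>\<^sub>E D\<in>P. AutGr_set q D) \<subseteq> restrict_blocks ` block_diag"
        using glue_blocks_block_diag restrict_glue_blocks by (metis image_eqI subsetI)
    qed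
  qed
  ultimately show ?thesis by (simp add: iso_def AutGr_carrier)
qed

end

theorem corollary2p16:
  fixes q :: "nat \<Rightarrow> nat \<Rightarrow> 'k::field" and n :: nat and P :: "nat set set"
  assumes "qpm {1..n} q"
    and "partition_on {1..n} P"
    and "refined_by_Bq n q P"
    and "\<forall>D\<in>P. \<forall>E\<in>P. D \<noteq> E \<longrightarrow> (\<exists>c. \<forall>i\<in>D. \<forall>j\<in>E. q i j = c)"
    and "\<forall>D\<in>P. \<forall>E\<in>P. \<forall>F\<in>P. D \<noteq> E \<longrightarrow>
           (\<forall>i\<in>D. \<forall>j\<in>E. \<forall>a\<in>F. \<forall>b\<in>F. q i j \<noteq> q a b)"
  shows "\<exists>H K. H \<lhd> AutGr q {1..n} \<and> subgroup K (AutGr q {1..n})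
     \<and> H \<inter> K = {\<one>\<^bsub>AutGr q {1..n}\<^esub>}
     \<and> H <#>\<^bsub>AutGr q {1..n}\<^esub> K = carrier (AutGr q {1..n})
     \<and> (AutGr q {1..n})\<lparr>carrier := H\<rparr> \<cong> product_group P (\<lambda>D. AutGr q D)
     \<and> (AutGr q {1..n})\<lparr>carrier := K\<rparr> \<cong> Gperm n q P"
proof -
  interpret block_setting q n P by unfold_locales (use assms in auto)
  let ?G = "AutGr q {1..n}" and ?Q = "Gperm n q P"
  let ?H = "kernel ?G ?Q block_perm" and ?K = "block_section ` carrier ?Q"
  have split: "?H \<lhd> ?G" "subgroup ?K ?G" "?H \<inter> ?K = {\<one>\<^bsub>?G\<^esub>}"
    "?H <#>\<^bsub>?G\<^esub> ?K = carrier ?G" "?G\<lparr>carrier := ?K\<rparr> \<cong> ?Q"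
    by (rule split_epi_semidirect[OF block_perm_group_hom block_section_group_hom];
        simp add: Gperm_carrier block_perm_block_section)+
  have "?G\<lparr>carrier := ?H\<rparr> \<cong> product_group P (\<lambda>D. AutGr q D)"
    using restrict_blocks_iso unfolding block_diag_eq_kernel by (rule is_isoI)
  with split show ?thesis by (intro exI[of _ ?H] exI[of _ ?K] conjI)
qed

end
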